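(* Fix $k\ge 1$ and let $(\mathbf A,\mathbf A')$ and $(\mathbf B,\mathbf B')$ be promise templates (with $\mathbf B$ finite as well). The following are equivalent: (1) there exist a Datalog interpretation $\phi$ of width at most $k$ and a gadget $\gamma$ such that $\gamma\circ\phi$ is a reduction from $\mathrm{PCSP}(\mathbf A,\mathbf A')$ to $\mathrm{PCSP}(\mathbf B,\mathbf B')$; (2) the $k$-consistency reduction $\kappa_k^{\mathbf A,\mathbf B}$ is a reduction from $\mathrm{PCSP}(\mathbf A,\mathbf A')$ to $\mathrm{PCSP}(\mathbf B,\mathbf B')$.
   Context: Structures. A (multisorted relational) signature consists of types and relation symbols, each symbol $R$ having an arity $\mathrm{ar}_R$, a tuple of types. A structure $\mathbf A$ consists of a set $A_t$ per type and relations $R^{\mathbf A}\subseteq A_{\mathrm{ar}_R(1)}\times\dots\times A_{\mathrm{ar}_R(k)}$; elements of different types are distinct. A homomorphism is a type-preserving family of maps preserving all relations; write $\mathbf A\to\mathbf B$. For a finite set $F$, the power $\mathbf B^F$ has domains $B_t^F$ (maps $F\to B_t$) and $(b_1,\dots,b_m)\in R^{\mathbf B^F}$ iff $(b_1(i),\dots,b_m(i))\in R^{\mathbf B}$ for all $i\in F$. Promise CSP. A promise template is a pair $(\mathbf A,\mathbf A')$ of structures of the same signature, $\mathbf A$ finite, $\mathbf A\to\mathbf A'$. $\mathrm{PCSP}(\mathbf A,\mathbf A')$: given finite $\mathbf X$, answer yes if $\mathbf X\to\mathbf A$, no if $\mathbf X\not\to\mathbf A'$. A map $\psi$ on structures is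 a reduction from $\mathrm{PCSP}(\mathbf A,\mathbf A')$ to $\mathrm{PCSP}(\mathbf B,\mathbf B')$ if $\mathbf X\to\mathbf A\Rightarrow\psi(\mathbf X)\to\mathbf B$ and $\psi(\mathbf X)\to\mathbf B'\Rightarrow\mathbf X\to\mathbf A'$. Datalog interpretations. A Datalog program with input signature $\Pi$: a signature $\Delta\supseteq\Pi$ with the same types, finitely many rules $t_0\leftarrow t_1,\dots,t_r$ with typed atomic $\Delta$-formulas (relational atoms or equalities; heads use neither $\Pi$-symbols nor equality), a designated output symbol, least-fixed-point semantics; its width is the maximum number of variables in a rule. A Datalog interpretation $\phi$ from $\Pi$- to $\Sigma$-structures: a program $\phi_t$ per $\Sigma$-type and $\phi_R$ per $\Sigma$-symbol (arity of $\phi_R$ = concatenation of arities of $\phi_{\mathrm{ar}_R(i)}$); $\phi(\mathbf A)$ has $t$-th domain $\phi_t(\mathbf A)$ and $(w_1,\dots,w_k)\in R^{\phi(\mathbf A)}$ iff the concatenation is in $\phi_R(\mathbf A)$. Its width is the maximal width of its programs. Gadgets. A gadget $\gamma$ from $\Pi$- to $\Sigma$-structures: a $\Sigma$-structure $\mathbf D_t^\gamma$ per $\Pi$-type $t$, a $\Sigma$-structure $\mathbf R^\gamma$ per $\Pi$-symbol $R$, and homomorphisms $p_{R,i}^\gamma\colon\mathbf D^\gamma_{\mathrm{ar}_R(i)}\to\mathbf R^\gamma$. $\gamma(\mathbf A)$: a copy of $\mathbf D^\gamma_t$ per $a\in A_t$ (elements $(a;d)$), a copy of $\mathbf R^\gamma$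 per $a\in R^{\mathbf A}$ (elements $(a;e)$), identify $(a;p^\gamma_{R,i}(e))$ with $(a_i;e)$, and take the quotient. $k$-consistency reduction. Let $\mathbf A$ be a $\Pi$-structure and $\mathbf B$ a $\Sigma$-structure. For a $\Pi$-structure $\mathbf X$ and a set $K$ of at most $k$ elements of $\mathbf X$, a partial homomorphism $K\to\mathbf A$ is a type-preserving map $f\colon K\to A$ such that $(f(v_1),\dots,f(v_m))\in R^{\mathbf A}$ for every $(v_1,\dots,v_m)\in R^{\mathbf X}$ with all $v_i\in K$. $\kappa_k^{\mathbf A,\mathbf B}(\mathbf X)$ is built as follows: (1) for each $K$ with $|K|\le k$ let $\mathcal F_K$ be the set of partial homomorphisms $K\to\mathbf A$; (2) for each $L\subset K$ (both of size $\le k$), remove from $\mathcal F_L$ every $h$ that is not the restriction of some $g\in\mathcal F_K$, and remove from $\mathcal F_K$ every $g$ with $g|_L\notin\mathcal F_L$; (3) repeat (2) until nothing changes; (4) for each $K$ take a copy of $\mathbf B^{\mathcal F_K}$ with elements $(K;b)$, $b\colon\mathcal F_K\to B_t$; (5) for each $L\subseteq K$ and $b\colon\mathcal F_L\to B_t$ identify $(K;b\circ\rho_{K,L})$ with $(L;b)$, where $\rho_{K,L}\colon\mathcal F_K\to\mathcal F_L$ is restriction $g\mapsto g|_L$. The output is the quotient by the generated equivalence relation, with relations the images of those of the copies. *)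

theory Defs
  imports Main "HOL-Library.FuncSet"
begin

section \<open>Multisorted relational structures\<close>

(* A signature is given by a type of sorts 's, a type of relation symbols 'r and an
   arity map ar :: 'r => 's list.  A structure has a domain per sort and a relation per
   symbol (tuples are lists). *)
record ('s, 'r, 'e) struct =
  sdom :: "'s \<Rightarrow> 'e set"
  srel :: "'r \<Rightarrow> 'e list set"

definition elems :: "('s, 'r, 'e) struct \<Rightarrow> 'e set" where
  "elems A = (\<Union>s. sdom A s)"

definition wf_struct :: "('r \<Rightarrow> 's list) \<Rightarrow> ('s, 'r, 'e) struct \<Rightarrow> bool" where
  "wf_struct ar A \<longleftrightarrow>
     (\<forall>s s'. s \<noteq> s' \<longrightarrow> sdom A s \<inter> sdom A s' = {}) \<and>
     (\<forall>R. \<forall>tup \<in> srel A R. list_all2 (\<lambda>x s. x \<in> sdom A s) tup (ar R))"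

definition finite_struct :: "('s, 'r, 'e) struct \<Rightarrow> bool" where
  "finite_struct A \<longleftrightarrow> (\<forall>s. finite (sdom A s))"

definition is_hom :: "('s, 'r, 'e) struct \<Rightarrow> ('s, 'r, 'f) struct \<Rightarrow> ('e \<Rightarrow> 'f) \<Rightarrow> bool" where
  "is_hom A B h \<longleftrightarrow>
     (\<forall>s. \<forall>a \<in> sdom A s. h a \<in> sdom B s) \<and>
     (\<forall>R. \<forall>tup \<in> srel A R. map h tup \<in> srel B R)"

definition hom_to :: "('s, 'r, 'e) struct \<Rightarrow> ('s, 'r, 'f) struct \<Rightarrow> bool" (infix "\<rightarrow>\<^sub>h" 50) where
  "A \<rightarrow>\<^sub>h B \<longleftrightarrow> (\<exists>h. is_hom A B h)"

text \<open>Power B^F: elements of sort t are (tagged) maps F -> B_t.\<close>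
definition power :: "('r \<Rightarrow> 's list) \<Rightarrow> ('s, 'r, 'b) struct \<Rightarrow> 'f set
                     \<Rightarrow> ('s, 'r, 's \<times> ('f \<Rightarrow> 'b)) struct" where
  "power ar B F =
     \<lparr> sdom = (\<lambda>t. {(t, b) | b. b \<in> F \<rightarrow>\<^sub>E sdom B t}),
       srel = (\<lambda>R. {bs. length bs = length (ar R) \<and>
                        (\<forall>i < length bs. fst (bs ! i) = ar R ! i \<and>
                                         snd (bs ! i) \<in> F \<rightarrow>\<^sub>E sdom B (ar R ! i)) \<and>
                        (\<forall>f \<in> F. map (\<lambda>b. snd b f) bs \<in> srel B R)}) \<rparr>"

section \<open>Promise templates and reductions\<close>

definition promise_template :: "('r \<Rightarrow> 's list) \<Rightarrow> ('s, 'r, 'a) struct \<Rightarrow> ('s, 'r, 'b) struct \<Rightarrow> bool" where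
  "promise_template ar A A' \<longleftrightarrow>
     wf_struct ar A \<and> wf_struct ar A' \<and> finite_struct A \<and> A \<rightarrow>\<^sub>h A'"

text \<open>A reduction from PCSP(A,A') to PCSP(B,B'); instances X are finite structures whose
  elements are natural numbers (every finite structure is isomorphic to such a one).\<close>
definition pcsp_reduction ::
  "('rp \<Rightarrow> 'sp list) \<Rightarrow> ('sp, 'rp, 'a) struct \<Rightarrow> ('sp, 'rp, 'a2) struct
   \<Rightarrow> ('sb, 'rb, 'b) struct \<Rightarrow> ('sb, 'rb, 'b2) struct
   \<Rightarrow> (('sp, 'rp, nat) struct \<Rightarrow> ('sb, 'rb, 'y) struct) \<Rightarrow> bool" where
  "pcsp_reduction arP A A' B B' \<psi> \<longleftrightarrow>
     (\<forall>X :: ('sp, 'rp, nat) struct. wf_struct arP X \<and> finite_struct X \<longrightarrow>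
        (X \<rightarrow>\<^sub>h A \<longrightarrow> \<psi> X \<rightarrow>\<^sub>h B) \<and> (\<psi> X \<rightarrow>\<^sub>h B' \<longrightarrow> X \<rightarrow>\<^sub>h A'))"

section \<open>Datalog programs and interpretations\<close>

text \<open>Symbols of the extended signature Delta: Inl R for input symbols, Inr n for
  (IDB) symbols n :: nat.  Variables are natural numbers.\<close>
datatype 'pr atom = Rel "'pr + nat" "nat list" | Eq nat nat

record ('ps, 'pr) drule =
  hd_sym  :: nat
  hd_args :: "nat list"
  body    :: "'pr atom list"
  vty     :: "nat \<Rightarrow> 'ps"

record ('ps, 'pr) prog =
  rules  :: "('ps, 'pr) drule list"
  idb_ar :: "nat \<Rightarrow> 'ps list"
  outp   :: nat

fun atom_vars :: "'pr atom \<Rightarrow> nat set" where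
  "atom_vars (Rel _ xs) = set xs"
| "atom_vars (Eq x y) = {x, y}"

definition rule_vars :: "('ps, 'pr) drule \<Rightarrow> nat set" where
  "rule_vars r = set (hd_args r) \<union> (\<Union>a \<in> set (body r). atom_vars a)"

fun wt_atom :: "('pr \<Rightarrow> 'ps list) \<Rightarrow> (nat \<Rightarrow> 'ps list) \<Rightarrow> (nat \<Rightarrow> 'ps) \<Rightarrow> 'pr atom \<Rightarrow> bool" where
  "wt_atom ar ia ty (Rel (Inl R) xs) = (map ty xs = ar R)"
| "wt_atom ar ia ty (Rel (Inr S) xs) = (map ty xs = ia S)"
| "wt_atom ar ia ty (Eq x y) = (ty x = ty y)"

definition wf_prog :: "('pr \<Rightarrow> 'ps list) \<Rightarrow> ('ps, 'pr) prog \<Rightarrow> bool" where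
  "wf_prog ar P \<longleftrightarrow>
     (\<forall>r \<in> set (rules P).
        map (vty r) (hd_args r) = idb_ar P (hd_sym r) \<and>
        (\<forall>a \<in> set (body r). wt_atom ar (idb_ar P) (vty r) a))"

definition prog_ar :: "('ps, 'pr) prog \<Rightarrow> 'ps list" where
  "prog_ar P = idb_ar P (outp P)"

definition prog_width :: "('ps, 'pr) prog \<Rightarrow> nat" where
  "prog_width P = Max (insert 0 ((\<lambda>r. card (rule_vars r)) ` set (rules P)))"

fun atom_holds :: "('ps, 'pr, 'e) struct \<Rightarrow> (nat \<times> 'e list) set \<Rightarrow> (nat \<Rightarrow> 'e) \<Rightarrow> 'pr atom \<Rightarrow> bool" where
  "atom_holds A I v (Rel (Inl R) xs) = (map v xs \<in> srel A R)"
| "atom_holds A I v (Rel (Inr S) xs) = ((S, map v xs) \<in> I)"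
| "atom_holds A I v (Eq x y) = (v x = v y)"

definition dl_step :: "('ps, 'pr) prog \<Rightarrow> ('ps, 'pr, 'e) struct \<Rightarrow> (nat \<times> 'e list) set \<Rightarrow> (nat \<times> 'e list) set" where
  "dl_step P A I =
     {(hd_sym r, map v (hd_args r)) | r v.
        r \<in> set (rules P) \<and> (\<forall>x \<in> rule_vars r. v x \<in> sdom A (vty r x)) \<and>
        (\<forall>a \<in> set (body r). atom_holds A I v a)}"

definition dl_output :: "('ps, 'pr) prog \<Rightarrow> ('ps, 'pr, 'e) struct \<Rightarrow> 'e list set" where
  "dl_output P A = {ts. (outp P, ts) \<in> lfp (dl_step P A)}"

record ('ps, 'pr, 'ss, 'sr) interp =
  iT :: "'ss \<Rightarrow> ('ps, 'pr) prog"
  iR :: "'sr \<Rightarrow> ('ps, 'pr) prog"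

definition wf_interp :: "('pr \<Rightarrow> 'ps list) \<Rightarrow> ('sr \<Rightarrow> 'ss list) \<Rightarrow> ('ps, 'pr, 'ss, 'sr) interp \<Rightarrow> bool" where
  "wf_interp arP arS \<phi> \<longleftrightarrow>
     (\<forall>s. wf_prog arP (iT \<phi> s)) \<and>
     (\<forall>R. wf_prog arP (iR \<phi> R) \<and>
          prog_ar (iR \<phi> R) = concat (map (\<lambda>s. prog_ar (iT \<phi> s)) (arS R)))"

definition interp_width_le :: "('ps, 'pr, 'ss, 'sr) interp \<Rightarrow> nat \<Rightarrow> bool" where
  "interp_width_le \<phi> k \<longleftrightarrow> (\<forall>s. prog_width (iT \<phi> s) \<le> k) \<and> (\<forall>R. prog_width (iR \<phi> R) \<le> k)"

text \<open>The output signature of an interpretation with sorts and symbols coded by natural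
  numbers is required to be finite: only finitely many sorts / symbols carry a nonempty
  program, and arities of those symbols only use those sorts.\<close>
definition interp_finite_sig :: "(nat \<Rightarrow> nat list) \<Rightarrow> ('ps, 'pr, nat, nat) interp \<Rightarrow> bool" where
  "interp_finite_sig arS \<phi> \<longleftrightarrow>
     (\<exists>St Sr. finite St \<and> finite Sr \<and>
        (\<forall>s. s \<notin> St \<longrightarrow> rules (iT \<phi> s) = []) \<and>
        (\<forall>R. R \<notin> Sr \<longrightarrow> rules (iR \<phi> R) = []) \<and>
        (\<forall>R \<in> Sr. set (arS R) \<subseteq> St))"

text \<open>Elements of sort s of phi(A) are the tuples of the output of phi_s, tagged by s.\<close>
definition interp_app :: "('sr \<Rightarrow> 'ss list) \<Rightarrow> ('ps, 'pr, 'ss, 'sr) interp \<Rightarrow> ('ps, 'pr, 'e) struct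
                          \<Rightarrow> ('ss, 'sr, 'ss \<times> 'e list) struct" where
  "interp_app arS \<phi> A =
     \<lparr> sdom = (\<lambda>s. {(s, w) | w. w \<in> dl_output (iT \<phi> s) A}),
       srel = (\<lambda>R. {zip (arS R) ws | ws. length ws = length (arS R) \<and>
                       (\<forall>i < length ws. ws ! i \<in> dl_output (iT \<phi> (arS R ! i)) A) \<and>
                       concat ws \<in> dl_output (iR \<phi> R) A}) \<rparr>"

section \<open>Gluing copies of structures along identifications\<close>

definition glue_pre :: "'i set \<Rightarrow> ('i \<Rightarrow> ('s, 'r, 'c) struct) \<Rightarrow> ('i \<times> 'c) set" where
  "glue_pre I C = {(i, c). i \<in> I \<and> c \<in> elems (C i)}"

definition glue_eq :: "'i set \<Rightarrow> ('i \<Rightarrow> ('s, 'r, 'c) struct) \<Rightarrow> (('i \<times> 'c) \<times> ('i \<times> 'c)) set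
                       \<Rightarrow> (('i \<times> 'c) \<times> ('i \<times> 'c)) set" where
  "glue_eq I C E =
     (let E' = E \<inter> (glue_pre I C \<times> glue_pre I C) in (E' \<union> E'\<inverse>)\<^sup>*)"

definition glue :: "'i set \<Rightarrow> ('i \<Rightarrow> ('s, 'r, 'c) struct) \<Rightarrow> (('i \<times> 'c) \<times> ('i \<times> 'c)) set
                    \<Rightarrow> ('s, 'r, ('i \<times> 'c) set) struct" where
  "glue I C E =
     \<lparr> sdom = (\<lambda>s. {glue_eq I C E `` {(i, c)} | i c. i \<in> I \<and> c \<in> sdom (C i) s}),
       srel = (\<lambda>R. {map (\<lambda>c. glue_eq I C E `` {(i, c)}) tup | i tup.
                       i \<in> I \<and> tup \<in> srel (C i) R}) \<rparr>"

section \<open>Gadgets\<close>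

record ('ss, 'sr, 'bs, 'br, 'g) gadget =
  gD :: "'ss \<Rightarrow> ('bs, 'br, 'g) struct"
  gR :: "'sr \<Rightarrow> ('bs, 'br, 'g) struct"
  gp :: "'sr \<Rightarrow> nat \<Rightarrow> 'g \<Rightarrow> 'g"

definition wf_gadget :: "('sr \<Rightarrow> 'ss list) \<Rightarrow> ('br \<Rightarrow> 'bs list) \<Rightarrow> ('ss, 'sr, 'bs, 'br, 'g) gadget \<Rightarrow> bool" where
  "wf_gadget arS arB \<gamma> \<longleftrightarrow>
     (\<forall>t. wf_struct arB (gD \<gamma> t)) \<and> (\<forall>R. wf_struct arB (gR \<gamma> R)) \<and>
     (\<forall>R i. i < length (arS R) \<longrightarrow> is_hom (gD \<gamma> (arS R ! i)) (gR \<gamma> R) (gp \<gamma> R i))"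

definition gadget_app :: "('sr \<Rightarrow> 'ss list) \<Rightarrow> ('ss, 'sr, 'bs, 'br, 'g) gadget \<Rightarrow> ('ss, 'sr, 'e) struct
      \<Rightarrow> ('bs, 'br, ((('ss \<times> 'e) + ('sr \<times> 'e list)) \<times> 'g) set) struct" where
  "gadget_app arS \<gamma> Y =
     glue ({Inl (t, a) | t a. a \<in> sdom Y t} \<union> {Inr (R, tup) | R tup. tup \<in> srel Y R})
          (\<lambda>i. case i of Inl (t, a) \<Rightarrow> gD \<gamma> t | Inr (R, tup) \<Rightarrow> gR \<gamma> R)
          {((Inr (R, tup), gp \<gamma> R i d), (Inl (arS R ! i, tup ! i), d)) | R tup i d.
              tup \<in> srel Y R \<and> i < length (arS R) \<and> d \<in> elems (gD \<gamma> (arS R ! i))}"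

section \<open>The k-consistency reduction\<close>

definition partial_hom :: "('ps, 'pr, 'x) struct \<Rightarrow> ('ps, 'pr, 'a) struct \<Rightarrow> 'x set \<Rightarrow> ('x \<Rightarrow> 'a option) \<Rightarrow> bool" where
  "partial_hom X A K f \<longleftrightarrow>
     dom f = K \<and>
     (\<forall>t. \<forall>v \<in> K \<inter> sdom X t. \<exists>a \<in> sdom A t. f v = Some a) \<and>
     (\<forall>R. \<forall>tup \<in> srel X R. set tup \<subseteq> K \<longrightarrow> map (the \<circ> f) tup \<in> srel A R)"

definition kc_sets :: "nat \<Rightarrow> ('ps, 'pr, 'x) struct \<Rightarrow> 'x set set" where
  "kc_sets k X = {K. K \<subseteq> elems X \<and> finite K \<and> card K \<le> k}"

definition kc_init :: "nat \<Rightarrow> ('ps, 'pr, 'x) struct \<Rightarrow> ('ps, 'pr, 'a) struct \<Rightarrow> 'x set \<Rightarrow> ('x \<Rightarrow> 'a option) set" where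
  "kc_init k X A K = (if K \<in> kc_sets k X then {f. partial_hom X A K f} else {})"

text \<open>One round of step (2), performed for all pairs L \<subseteq> K simultaneously.\<close>
definition kc_step :: "nat \<Rightarrow> ('ps, 'pr, 'x) struct \<Rightarrow> ('x set \<Rightarrow> ('x \<Rightarrow> 'a option) set)
                       \<Rightarrow> ('x set \<Rightarrow> ('x \<Rightarrow> 'a option) set)" where
  "kc_step k X F = (\<lambda>K.
     {g \<in> F K. (\<forall>L \<in> kc_sets k X. L \<subseteq> K \<longrightarrow> g |` L \<in> F L) \<and>
              (\<forall>M \<in> kc_sets k X. K \<subseteq> M \<longrightarrow> (\<exists>g' \<in> F M. g' |` K = g))})"

text \<open>Step (3): repeat until nothing changes (the decreasing sequence stabilises for finite X).\<close>
definition kc_family :: "nat \<Rightarrow> ('ps, 'pr, 'x) struct \<Rightarrow> ('ps, 'pr, 'a) struct \<Rightarrow> 'x set \<Rightarrow> ('x \<Rightarrow> 'a option) set" where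
  "kc_family k X A = (\<lambda>K. \<Inter>n. ((kc_step k X ^^ n) (kc_init k X A)) K)"

definition kappa :: "('pr \<Rightarrow> 'ps list) \<Rightarrow> ('br \<Rightarrow> 'bs list) \<Rightarrow> nat \<Rightarrow> ('ps, 'pr, 'a) struct
      \<Rightarrow> ('bs, 'br, 'b) struct \<Rightarrow> ('ps, 'pr, 'x) struct
      \<Rightarrow> ('bs, 'br, ('x set \<times> ('bs \<times> (('x \<Rightarrow> 'a option) \<Rightarrow> 'b))) set) struct" where
  "kappa arP arB k A B X =
     (let F = kc_family k X A in
      glue (kc_sets k X) (\<lambda>K. power arB B (F K))
        {((K, (t, restrict (\<lambda>g. b (g |` L)) (F K))), (L, (t, b))) | K L t b.
            K \<in> kc_sets k X \<and> L \<in> kc_sets k X \<and> L \<subseteq> K \<and> b \<in> F L \<rightarrow>\<^sub>E sdom B t})"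

end

theory Submission
  imports Defs
begin

text \<open>
  (1) \<open>\<Rightarrow>\<close> (2): a Datalog program of width \<open>k\<close> cannot separate \<open>X\<close> from the
  \<open>k\<close>-consistency family \<open>F\<close> of partial maps \<open>X \<rightharpoonup> A\<close>: every fact it derives on \<open>X\<close> is
  transported by every member of \<open>F\<close>.  So if \<open>A \<rightarrow> C\<close> and \<open>\<gamma>(\<phi>(C)) \<rightarrow> B\<close>, a point of
  \<open>\<gamma>(\<phi>(X))\<close> can be sent to the element of \<open>B\<^sup>F\<close> whose value at \<open>f\<close> is the image of the
  point transported along \<open>f\<close>; this gives \<open>\<gamma>(\<phi>(X)) \<rightarrow> \<kappa>(X)\<close>, and the no-instances of \<open>\<kappa>\<close>
  are no-instances of \<open>\<gamma> \<circ> \<phi>\<close>.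

  (2) \<open>\<Rightarrow>\<close> (1): \<open>k\<close>-consistency is itself definable in Datalog of width \<open>k\<close>.  A program derives that
  \<open>v \<mapsto> f\<close> is refuted exactly when the consistency procedure removes it, so a homomorphism
  \<open>X \<rightarrow> A\<close> is never refuted while every unrefuted map survives the procedure.  The interpretation
  has a sort for each list of sorts \<open>\<sigma>\<close> and set \<open>T\<close> of maps refuted on its elements, and the gadget
  replaces such an element by \<open>B\<close> raised to the unrefuted maps; hence
  \<open>\<kappa>(X) \<rightarrow> \<gamma>(\<phi>(X))\<close>, while a homomorphism \<open>X \<rightarrow> A\<close> yields \<open>\<gamma>(\<phi>(X)) \<rightarrow> B\<close> by evaluation.
\<close>

lemma is_hom_comp: "is_hom A B h \<Longrightarrow> is_hom B C g \<Longrightarrow> is_hom A C (g \<circ> h)"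
  unfolding is_hom_def by (auto simp: map_map[symmetric] simp del: map_map)

lemma is_hom_id: "is_hom A A id"
  by (simp add: is_hom_def)

lemma hom_to_trans: "A \<rightarrow>\<^sub>h B \<Longrightarrow> B \<rightarrow>\<^sub>h C \<Longrightarrow> A \<rightarrow>\<^sub>h C"
  unfolding hom_to_def using is_hom_comp by blast

lemma elems_finite: "finite_struct A \<Longrightarrow> finite (elems (A :: ('s::finite, 'r, 'e) struct))"
  unfolding elems_def finite_struct_def by (intro finite_UN_I) auto

lemma wf_struct_srel_sorts:
  "wf_struct ar A \<Longrightarrow> tup \<in> srel A R \<Longrightarrow>
     length tup = length (ar R) \<and> (\<forall>i < length tup. tup ! i \<in> sdom A (ar R ! i))"
  unfolding wf_struct_def by (auto simp: list_all2_conv_all_nth)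

lemma wf_struct_srel_elems:
  assumes "wf_struct ar A" "tup \<in> srel A R"
  shows "set tup \<subseteq> elems A"
proof
  fix x assume "x \<in> set tup"
  then obtain i where "i < length tup" "x = tup ! i" by (auto simp: in_set_conv_nth)
  then show "x \<in> elems A" using wf_struct_srel_sorts[OF assms] by (auto simp: elems_def)
qed

definition sort_of :: "('s, 'r, 'e) struct \<Rightarrow> 'e \<Rightarrow> 's" where
  "sort_of A a = (SOME s. a \<in> sdom A s)"

lemma sort_of_eq: "wf_struct ar A \<Longrightarrow> a \<in> sdom A s \<Longrightarrow> sort_of A a = s"
  unfolding sort_of_def wf_struct_def by (rule some_equality) auto

lemma sdom_sort_of: "a \<in> elems A \<Longrightarrow> a \<in> sdom A (sort_of A a)"
  unfolding sort_of_def elems_def by (rule someI_ex) auto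

abbreviation glue_class :: "'i set \<Rightarrow> ('i \<Rightarrow> ('s, 'r, 'c) struct) \<Rightarrow> (('i \<times> 'c) \<times> ('i \<times> 'c)) set
    \<Rightarrow> 'i \<times> 'c \<Rightarrow> ('i \<times> 'c) set" where
  "glue_class I C E p \<equiv> glue_eq I C E `` {p}"

definition glue_map :: "('i \<times> 'c \<Rightarrow> 'x) \<Rightarrow> ('i \<times> 'c) set \<Rightarrow> 'x" where
  "glue_map m cls = m (SOME p. p \<in> cls)"

definition respects_glue :: "'i set \<Rightarrow> ('i \<Rightarrow> ('s, 'r, 'c) struct) \<Rightarrow> (('i \<times> 'c) \<times> ('i \<times> 'c)) set
    \<Rightarrow> ('i \<times> 'c \<Rightarrow> 'x) \<Rightarrow> bool" where
  "respects_glue I C E m \<longleftrightarrow>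
     (\<forall>p q. (p, q) \<in> E \<longrightarrow> p \<in> glue_pre I C \<longrightarrow> q \<in> glue_pre I C \<longrightarrow> m p = m q)"

lemma glue_eq_respects:
  assumes "respects_glue I C E m" and "(p, q) \<in> glue_eq I C E"
  shows "m p = m q"
proof -
  let ?E' = "E \<inter> (glue_pre I C \<times> glue_pre I C)"
  have "(p, q) \<in> (?E' \<union> ?E'\<inverse>)\<^sup>*" using assms(2) by (simp add: glue_eq_def Let_def)
  then show ?thesis
  proof (induction rule: rtrancl_induct)
    case (step y z)
    then show ?case using assms(1) unfolding respects_glue_def
      by (metis IntE Un_iff converseD mem_Sigma_iff)
  qed simp
qed

lemma glue_map_class:
  assumes "respects_glue I C E m"
  shows "glue_map m (glue_class I C E p) = m p"
proof -
  have "p \<in> glue_class I C E p" by (simp add: glue_eq_def Let_def)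
  then have "(p, SOME q. q \<in> glue_class I C E p) \<in> glue_eq I C E"
    using someI[of "\<lambda>q. q \<in> glue_class I C E p"] by simp
  then show ?thesis unfolding glue_map_def using glue_eq_respects[OF assms] by metis
qed

lemma glue_hom:
  assumes resp: "respects_glue I C E m"
    and homs: "\<And>i. i \<in> I \<Longrightarrow> is_hom (C i) T (\<lambda>c. m (i, c))"
  shows "is_hom (glue I C E) T (glue_map m)"
  unfolding is_hom_def
proof (intro conjI allI ballI)
  fix s a assume "a \<in> sdom (glue I C E) s"
  then obtain i c where "a = glue_class I C E (i, c)" "i \<in> I" "c \<in> sdom (C i) s"
    by (auto simp: glue_def)
  then show "glue_map m a \<in> sdom T s"
    using glue_map_class[OF resp] homs[of i] by (auto simp: is_hom_def)
next
  fix R tup assume "tup \<in> srel (glue I C E) R"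
  then obtain i t where "tup = map (\<lambda>c. glue_class I C E (i, c)) t" "i \<in> I" "t \<in> srel (C i) R"
    by (auto simp: glue_def)
  then show "map (glue_map m) tup \<in> srel T R"
    using glue_map_class[OF resp] homs[of i] by (auto simp: is_hom_def o_def)
qed

lemma glue_copy_hom: "i \<in> I \<Longrightarrow> is_hom (C i) (glue I C E) (\<lambda>c. glue_class I C E (i, c))"
  unfolding is_hom_def glue_def by auto

lemma glue_class_eq:
  assumes "(p, q) \<in> E" "p \<in> glue_pre I C" "q \<in> glue_pre I C"
  shows "glue_class I C E p = glue_class I C E q"
proof -
  let ?E' = "E \<inter> (glue_pre I C \<times> glue_pre I C)"
  let ?R = "(?E' \<union> ?E'\<inverse>)\<^sup>*"
  have "(p, q) \<in> ?R" "(q, p) \<in> ?R" using assms by auto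
  then have "?R `` {p} = ?R `` {q}" by (blast intro: rtrancl_trans)
  then show ?thesis by (simp add: glue_eq_def Let_def)
qed

definition emap :: "('e \<Rightarrow> 'f) \<Rightarrow> ('s, 'r, 'e) struct \<Rightarrow> ('s, 'r, 'f) struct" where
  "emap \<iota> A = \<lparr> sdom = (\<lambda>s. \<iota> ` sdom A s), srel = (\<lambda>R. map \<iota> ` srel A R) \<rparr>"

lemma emap_hom: "is_hom A (emap \<iota> A) \<iota>"
  unfolding is_hom_def emap_def by auto

lemma emap_inv_hom:
  assumes "wf_struct ar A" "inj_on \<iota> S" "elems A \<subseteq> S"
  shows "is_hom (emap \<iota> A) A (inv_into S \<iota>)"
  unfolding is_hom_def
proof (intro conjI allI ballI)
  fix s a assume "a \<in> sdom (emap \<iota> A) s"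
  then obtain b where b: "b \<in> sdom A s" "a = \<iota> b" by (auto simp: emap_def)
  then have "b \<in> S" using assms(3) by (auto simp: elems_def)
  then show "inv_into S \<iota> a \<in> sdom A s" using b assms(2) by simp
next
  fix R tup assume "tup \<in> srel (emap \<iota> A) R"
  then obtain t where t: "t \<in> srel A R" "tup = map \<iota> t" by (auto simp: emap_def)
  have "set t \<subseteq> S" using wf_struct_srel_elems[OF assms(1) t(1)] assms(3) by blast
  then have "map (inv_into S \<iota>) tup = t" using t(2) assms(2)
    by (auto intro: map_idI simp: subset_iff)
  then show "map (inv_into S \<iota>) tup \<in> srel A R" using t(1) by simp
qed

lemma emap_wf:
  fixes A :: "('s, 'r, 'e) struct"
  assumes "wf_struct ar A" "inj_on \<iota> (elems A)"
  shows "wf_struct ar (emap \<iota> A)"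
  unfolding wf_struct_def
proof (intro conjI allI impI ballI)
  fix s s' :: 's assume "s \<noteq> s'"
  show "sdom (emap \<iota> A) s \<inter> sdom (emap \<iota> A) s' = {}"
  proof (rule ccontr)
    assume "sdom (emap \<iota> A) s \<inter> sdom (emap \<iota> A) s' \<noteq> {}"
    then obtain a b where ab: "a \<in> sdom A s" "b \<in> sdom A s'" "\<iota> a = \<iota> b" by (auto simp: emap_def)
    then have "a = b" using assms(2) by (auto simp: elems_def inj_on_def)
    then show False using ab assms(1) \<open>s \<noteq> s'\<close> unfolding wf_struct_def by blast
  qed
next
  fix R tup assume "tup \<in> srel (emap \<iota> A) R"
  then obtain t where t: "t \<in> srel A R" "tup = map \<iota> t" by (auto simp: emap_def)
  have "list_all2 (\<lambda>x s. x \<in> sdom A s) t (ar R)" using assms(1) t(1) unfolding wf_struct_def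
    by blast
  then show "list_all2 (\<lambda>x s. x \<in> sdom (emap \<iota> A) s) tup (ar R)"
    unfolding t(2) list_all2_map1 by (rule list_all2_mono) (auto simp: emap_def)
qed

lemma emap_finite: "finite_struct A \<Longrightarrow> finite_struct (emap \<iota> A)"
  unfolding finite_struct_def emap_def by simp

lemma hom_equivalent_nat_struct:
  fixes A :: "('s::finite, 'r, 'a) struct"
  assumes "wf_struct ar A" "finite_struct A"
  obtains A\<^sub>0 :: "('s, 'r, nat) struct"
  where "wf_struct ar A\<^sub>0" "finite_struct A\<^sub>0" "A \<rightarrow>\<^sub>h A\<^sub>0" "A\<^sub>0 \<rightarrow>\<^sub>h A"
proof -
  obtain \<iota> :: "'a \<Rightarrow> nat" where "inj_on \<iota> (elems A)"
    using finite_imp_inj_to_nat_seg[OF elems_finite[OF assms(2)]] by blast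
  then show ?thesis
    using that emap_wf[OF assms(1)] emap_finite[OF assms(2)] emap_hom emap_inv_hom[OF assms(1)]
    unfolding hom_to_def by blast
qed

lemma power_wf:
  fixes B :: "('s, 'r, 'b) struct"
  shows "wf_struct ar (power ar B F)"
  unfolding wf_struct_def
proof (intro conjI allI impI ballI)
  fix s s' :: 's assume "s \<noteq> s'"
  then show "sdom (power ar B F) s \<inter> sdom (power ar B F) s' = {}" by (auto simp: power_def)
next
  fix R tup assume tup: "tup \<in> srel (power ar B F) R"
  show "list_all2 (\<lambda>x s. x \<in> sdom (power ar B F) s) tup (ar R)"
  proof (rule list_all2_all_nthI)
    show "length tup = length (ar R)" using tup by (simp add: power_def)
    fix i assume "i < length tup"
    then show "tup ! i \<in> sdom (power ar B F) (ar R ! i)"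
      using tup by (auto simp: power_def) (metis prod.collapse)
  qed
qed

lemma power_elems_finite:
  fixes B :: "('s::finite, 'r, 'b) struct"
  assumes "finite F" "finite (elems B)"
  shows "finite (elems (power ar B F))"
proof (rule finite_subset)
  show "elems (power ar B F) \<subseteq> UNIV \<times> (F \<rightarrow>\<^sub>E elems B)"
    unfolding elems_def power_def by (force simp: PiE_def Pi_def)
  show "finite (UNIV \<times> (F \<rightarrow>\<^sub>E elems B) :: ('s \<times> _) set)"
    using assms by (intro finite_cartesian_product finite_PiE) auto
qed

lemma power_eval_hom: "g \<in> F \<Longrightarrow> is_hom (power ar B F) B (\<lambda>c. snd c g)"
  unfolding is_hom_def power_def by auto

lemma power_reindex_hom:
  assumes "\<forall>g \<in> G. \<theta> g \<in> F"
  shows "is_hom (power ar B F) (power ar B G) (\<lambda>x. (fst x, restrict (\<lambda>g. snd x (\<theta> g)) G))"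
  unfolding is_hom_def
proof (intro conjI allI ballI)
  fix s a assume "a \<in> sdom (power ar B F) s"
  then show "(fst a, restrict (\<lambda>g. snd a (\<theta> g)) G) \<in> sdom (power ar B G) s"
    using assms by (auto simp: power_def)
next
  fix R tup assume "tup \<in> srel (power ar B F) R"
  then have tup: "length tup = length (ar R)"
      "\<forall>i < length tup. fst (tup ! i) = ar R ! i \<and> snd (tup ! i) \<in> F \<rightarrow>\<^sub>E sdom B (ar R ! i)"
      "\<forall>f \<in> F. map (\<lambda>b. snd b f) tup \<in> srel B R"
    by (auto simp: power_def)
  let ?q = "\<lambda>x. (fst x, restrict (\<lambda>g. snd x (\<theta> g)) G)"
  have "\<forall>i < length (map ?q tup). fst (map ?q tup ! i) = ar R ! i \<and>
        snd (map ?q tup ! i) \<in> G \<rightarrow>\<^sub>E sdom B (ar R ! i)"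
    using tup(2) assms by auto
  moreover have "\<forall>f \<in> G. map (\<lambda>b. snd b f) (map ?q tup) \<in> srel B R"
    using tup(3) assms by (simp add: o_def)
  ultimately show "map ?q tup \<in> srel (power ar B G) R"
    using tup(1) by (simp only: power_def struct.simps mem_Collect_eq length_map)
qed

definition empty_struct :: "('s, 'r, 'e) struct" where
  "empty_struct = \<lparr> sdom = (\<lambda>_. {}), srel = (\<lambda>_. {}) \<rparr>"

definition nat_code :: "'x set \<Rightarrow> 'x \<Rightarrow> nat" where
  "nat_code S = (SOME f. inj_on f S)"

lemma inj_nat_code:
  fixes S :: "'x set"
  assumes "finite S"
  shows "inj_on (nat_code S) S"
proof -
  obtain f :: "'x \<Rightarrow> nat" and n where "inj_on f S"
    using finite_imp_inj_to_nat_seg[OF assms] by blast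
  then show ?thesis unfolding nat_code_def by (rule someI[of "\<lambda>f. inj_on f S"])
qed

lemma inv_nat_code [simp]: "finite S \<Longrightarrow> x \<in> S \<Longrightarrow> inv_into S (nat_code S) (nat_code S x) = x"
  by (rule inv_into_f_f[OF inj_nat_code])

definition list_of :: "'x set \<Rightarrow> 'x list" where
  "list_of S = (SOME l. set l = S)"

lemma set_list_of [simp]: "finite S \<Longrightarrow> set (list_of S) = S"
  unfolding list_of_def by (rule someI_ex) (rule finite_list)

abbreviation pick :: "'x list \<Rightarrow> nat list \<Rightarrow> 'x list" where
  "pick xs \<pi> \<equiv> map (nth xs) \<pi>"

definition distinct_list :: "'x set \<Rightarrow> 'x list" where
  "distinct_list K = (SOME l. set l = K \<and> distinct l)"

lemma set_distinct_list: "finite K \<Longrightarrow> set (distinct_list K) = K"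
  and distinct_distinct_list: "finite K \<Longrightarrow> distinct (distinct_list K)"
  unfolding distinct_list_def using someI_ex[OF finite_distinct_list] by blast+

definition index_in :: "'x list \<Rightarrow> 'x \<Rightarrow> nat" where
  "index_in e x = (SOME i. i < length e \<and> e ! i = x)"

lemma index_in_less_length: "x \<in> set e \<Longrightarrow> index_in e x < length e"
  and nth_index_in: "x \<in> set e \<Longrightarrow> e ! index_in e x = x"
  unfolding index_in_def by (metis (mono_tags, lifting) in_set_conv_nth someI_ex)+

lemma pick_index_in: "set l \<subseteq> set e \<Longrightarrow> pick e (map (index_in e) l) = l"
  by (induction l) (simp_all add: nth_index_in)

lemma index_in_bound: "set l \<subseteq> set e \<Longrightarrow> \<forall>x \<in> set (map (index_in e) l). x < length e"
  by (auto intro!: index_in_less_length)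

abbreviation assign :: "'x list \<Rightarrow> 'y list \<Rightarrow> 'x \<Rightarrow> 'y option" where
  "assign e g \<equiv> map_of (zip e g)"

lemma assign_nth:
  "distinct e \<Longrightarrow> length g = length e \<Longrightarrow> i < length e \<Longrightarrow> assign e g (e ! i) = Some (g ! i)"
  by (rule map_of_zip_nth) auto

lemma assign_restrict:
  assumes de: "distinct e" and lg: "length g = length e"
    and dl: "distinct l" and sub: "set l \<subseteq> set e"
  shows "(assign e g) |` set l = assign l (pick g (map (index_in e) l))"
proof
  fix x show "((assign e g) |` set l) x = assign l (pick g (map (index_in e) l)) x"
  proof (cases "x \<in> set l")
    case True
    then obtain j where j: "j < length l" "x = l ! j" by (auto simp: in_set_conv_nth)
    have xe: "x \<in> set e" using True sub by blast
    have "assign e g x = Some (g ! index_in e x)"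
      using assign_nth[OF de lg, of "index_in e x"] index_in_less_length[OF xe] nth_index_in[OF xe]
      by simp
    moreover have "assign l (pick g (map (index_in e) l)) x = Some (g ! index_in e x)"
      using assign_nth[OF dl, of "pick g (map (index_in e) l)" j] j by simp
    ultimately show ?thesis using True by simp
  next
    case False
    have "fst ` set (zip l (pick g (map (index_in e) l))) = set l"
      by (metis length_map map_fst_zip set_map)
    then have "assign l (pick g (map (index_in e) l)) x = None"
      using False by (simp add: map_of_eq_None_iff)
    then show ?thesis by (simp only: restrict_out[OF False])
  qed
qed

section \<open>The \<open>k\<close>-consistency family\<close>

definition kc_iter :: "nat \<Rightarrow> ('ps, 'pr, 'x) struct \<Rightarrow> ('ps, 'pr, 'a) struct \<Rightarrow> nat
    \<Rightarrow> 'x set \<Rightarrow> ('x \<Rightarrow> 'a option) set" where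
  "kc_iter k X A n = (kc_step k X ^^ n) (kc_init k X A)"

lemma kc_iter_0 [simp]: "kc_iter k X A 0 = kc_init k X A"
  by (simp add: kc_iter_def)

lemma kc_iter_Suc [simp]: "kc_iter k X A (Suc n) = kc_step k X (kc_iter k X A n)"
  by (simp add: kc_iter_def)

lemma mem_kc_family_iff: "f \<in> kc_family k X A K \<longleftrightarrow> (\<forall>n. f \<in> kc_iter k X A n K)"
  by (simp add: kc_family_def kc_iter_def)

lemma kc_step_subset: "kc_step k X F K \<subseteq> F K"
  by (auto simp: kc_step_def)

lemma kc_iter_antimono: "m \<le> n \<Longrightarrow> kc_iter k X A n K \<subseteq> kc_iter k X A m K"
proof (induction n rule: dec_induct)
  case (step n)
  then show ?case using kc_step_subset[of k X "kc_iter k X A n" K] by simp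
qed simp

lemma kc_iter_partial_hom: "f \<in> kc_iter k X A n K \<Longrightarrow> K \<in> kc_sets k X \<and> partial_hom X A K f"
  using kc_iter_antimono[of 0 n k X A K] by (auto simp: kc_init_def split: if_splits)

lemma kc_sets_subset: "K \<in> kc_sets k X \<Longrightarrow> L \<subseteq> K \<Longrightarrow> L \<in> kc_sets k X"
  unfolding kc_sets_def using card_mono[of K L] finite_subset[of L K] by auto

lemma kc_sets_finite: "finite (elems X) \<Longrightarrow> finite (kc_sets k X)"
  unfolding kc_sets_def by (rule finite_subset[of _ "Pow (elems X)"]) auto

lemma kc_family_restrict:
  assumes "f \<in> kc_family k X A K" "L \<in> kc_sets k X" "L \<subseteq> K"
  shows "f |` L \<in> kc_family k X A L"
  unfolding mem_kc_family_iff
proof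
  fix n
  have "f \<in> kc_iter k X A (Suc n) K" using assms(1) mem_kc_family_iff by blast
  then show "f |` L \<in> kc_iter k X A n L" using assms(2,3) by (auto simp: kc_step_def)
qed

lemma partial_hom_restrict:
  assumes "is_hom X A h" "K \<subseteq> elems X"
  shows "partial_hom X A K ((\<lambda>x. Some (h x)) |` K)"
  unfolding partial_hom_def
proof (intro conjI allI ballI impI)
  show "dom ((\<lambda>x. Some (h x)) |` K) = K" by auto
  fix t v assume "v \<in> K \<inter> sdom X t"
  then show "\<exists>a\<in>sdom A t. ((\<lambda>x. Some (h x)) |` K) v = Some a" using assms(1)
    by (auto simp: is_hom_def)
next
  fix R tup assume tup: "tup \<in> srel X R" "set tup \<subseteq> K"
  then have "map (the \<circ> ((\<lambda>x. Some (h x)) |` K)) tup = map h tup"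
    by (intro map_cong) (auto simp: restrict_map_def)
  moreover have "map h tup \<in> srel A R" using assms(1) tup(1) by (simp add: is_hom_def)
  ultimately show "map (the \<circ> ((\<lambda>x. Some (h x)) |` K)) tup \<in> srel A R" by metis
qed

lemma kc_family_hom:
  assumes "is_hom X A h" "K \<in> kc_sets k X"
  shows "(\<lambda>x. Some (h x)) |` K \<in> kc_family k X A K"
  unfolding mem_kc_family_iff
proof
  fix n show "(\<lambda>x. Some (h x)) |` K \<in> kc_iter k X A n K" using assms(2)
  proof (induction n arbitrary: K)
    case 0
    then show ?case
      using partial_hom_restrict[OF assms(1)] by (simp add: kc_init_def kc_sets_def)
  next
    case (Suc n)
    have restr: "((\<lambda>x. Some (h x)) |` M) |` L = (\<lambda>x. Some (h x)) |` L" if "L \<subseteq> M" for L M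
      using that by (auto simp: restrict_map_def fun_eq_iff)
    have "\<exists>g\<in>kc_iter k X A n M. g |` K = (\<lambda>x. Some (h x)) |` K" if "M \<in> kc_sets k X" "K \<subseteq> M" for M
      using Suc.IH[OF that(1)] restr[OF that(2)] by blast
    with Suc restr show ?case by (simp add: kc_step_def)
  qed
qed

lemma partial_hom_ran:
  assumes "partial_hom X A K f" "K \<subseteq> elems X"
  shows "ran f \<subseteq> elems A"
proof
  fix y assume "y \<in> ran f"
  then obtain x where x: "f x = Some y" by (auto simp: ran_def)
  then have "x \<in> K" using assms(1) by (auto simp: partial_hom_def)
  then obtain t where "x \<in> sdom X t" using assms(2) by (auto simp: elems_def)
  then obtain a where "a \<in> sdom A t" "f x = Some a"
    using assms(1) \<open>x \<in> K\<close> unfolding partial_hom_def by blast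
  then show "y \<in> elems A" using x by (auto simp: elems_def)
qed

lemma kc_init_finite:
  assumes "finite (elems A)"
  shows "finite (kc_init k X A K)"
proof (cases "K \<in> kc_sets k X")
  case True
  have "kc_init k X A K \<subseteq> {m. dom m = K \<and> ran m \<subseteq> elems A}"
  proof
    fix f assume "f \<in> kc_init k X A K"
    then have ph: "partial_hom X A K f" using True by (simp add: kc_init_def)
    have "K \<subseteq> elems X" using True by (simp add: kc_sets_def)
    then show "f \<in> {m. dom m = K \<and> ran m \<subseteq> elems A}"
      using partial_hom_ran[OF ph] ph by (simp add: partial_hom_def)
  qed
  moreover have "finite {m. dom m = K \<and> ran m \<subseteq> elems A}"
    using True finite_set_of_finite_maps[OF _ assms] by (auto simp: kc_sets_def)
  ultimately show ?thesis by (rule finite_subset)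
qed (simp add: kc_init_def)

text \<open>The iterates form a decreasing chain inside a finite set.\<close>
lemma kc_iter_stabilizes:
  assumes "finite (elems X)" "finite (elems A)"
  obtains N where "kc_iter k X A (Suc N) = kc_iter k X A N"
proof -
  define P where "P n = Sigma (kc_sets k X) (kc_iter k X A n)" for n
  have fin: "finite (P n)" for n
  proof (rule finite_subset)
    show "P n \<subseteq> Sigma (kc_sets k X) (kc_init k X A)"
      unfolding P_def using kc_iter_antimono[of 0 n k X A] by auto
    show "finite (Sigma (kc_sets k X) (kc_init k X A))"
      by (intro finite_SigmaI kc_sets_finite kc_init_finite assms)
  qed
  have "kc_iter k X A (Suc n) K \<subseteq> kc_iter k X A n K" for n K
    by (simp add: kc_step_subset)
  then have sub: "P (Suc n) \<subseteq> P n" for n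
    unfolding P_def by blast
  have "\<exists>N. card (P (Suc N)) = card (P N)"
  proof (rule ccontr)
    assume "\<nexists>N. card (P (Suc N)) = card (P N)"
    then have lt: "card (P (Suc n)) < card (P n)" for n
      using card_mono[OF fin sub] le_neq_implies_less by metis
    have "card (P n) + n \<le> card (P 0)" for n
    proof (induction n)
      case (Suc n)
      then show ?case using lt[of n] by linarith
    qed simp
    from this[of "Suc (card (P 0))"] show False by simp
  qed
  then obtain N where "card (P (Suc N)) = card (P N)" by blast
  then have "P (Suc N) = P N" using card_subset_eq[OF fin sub] by blast
  have "kc_iter k X A (Suc N) K = kc_iter k X A N K" for K
  proof (cases "K \<in> kc_sets k X")
    case True
    then show ?thesis using \<open>P (Suc N) = P N\<close> unfolding P_def by blast
  next
    case False
    then show ?thesis using kc_iter_partial_hom[of _ k X A _ K] by blast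
  qed
  then show ?thesis using that by blast
qed

lemma kc_family_eq_iter:
  assumes "finite (elems X)" "finite (elems A)"
  obtains N where "kc_family k X A = kc_iter k X A N" "kc_iter k X A (Suc N) = kc_iter k X A N"
proof -
  obtain N where N: "kc_iter k X A (Suc N) = kc_iter k X A N"
    using kc_iter_stabilizes[OF assms] by blast
  have "kc_iter k X A (N + d) = kc_iter k X A N" for d
    by (induction d) (use N in simp_all)
  then have "kc_iter k X A n = kc_iter k X A N" if "N \<le> n" for n
    using that by (metis le_add_diff_inverse)
  then have "kc_family k X A K = kc_iter k X A N K" for K
    using kc_iter_antimono[of _ N k X A K] unfolding set_eq_iff mem_kc_family_iff
    by (metis nle_le subsetD)
  then show ?thesis using that N by blast
qed

lemma kc_family_extend:
  assumes "finite (elems X)" "finite (elems A)"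
    and "f \<in> kc_family k X A K" "M \<in> kc_sets k X" "K \<subseteq> M"
  shows "\<exists>g \<in> kc_family k X A M. g |` K = f"
proof -
  obtain N where N: "kc_family k X A = kc_iter k X A N" "kc_iter k X A (Suc N) = kc_iter k X A N"
    using kc_family_eq_iter[OF assms(1,2)] by blast
  then have "f \<in> kc_iter k X A (Suc N) K" using assms(3) by simp
  then show ?thesis using assms(4,5) N(1) by (auto simp: kc_step_def)
qed

definition kc_consistent :: "nat \<Rightarrow> ('ps, 'pr, 'x) struct \<Rightarrow> ('ps, 'pr, 'a) struct
    \<Rightarrow> ('x set \<Rightarrow> ('x \<Rightarrow> 'a option) set) \<Rightarrow> bool" where
  "kc_consistent k X A F \<longleftrightarrow>
     (\<forall>K f. f \<in> F K \<longrightarrow> K \<in> kc_sets k X \<and> partial_hom X A K f) \<and>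
     (\<forall>K L f. f \<in> F K \<longrightarrow> L \<in> kc_sets k X \<longrightarrow> L \<subseteq> K \<longrightarrow> f |` L \<in> F L) \<and>
     (\<forall>K M f. f \<in> F K \<longrightarrow> M \<in> kc_sets k X \<longrightarrow> K \<subseteq> M \<longrightarrow> (\<exists>g \<in> F M. g |` K = f))"

lemma kc_family_consistent:
  "finite (elems X) \<Longrightarrow> finite (elems A) \<Longrightarrow> kc_consistent k X A (kc_family k X A)"
  unfolding kc_consistent_def
  using kc_family_restrict kc_family_extend mem_kc_family_iff kc_iter_partial_hom by metis

lemma kc_consistent_extend:
  assumes "kc_consistent k X A F" "f \<in> F K" "V \<in> kc_sets k X"
  shows "\<exists>g \<in> F V. g |` (K \<inter> V) = f |` (K \<inter> V)"
proof -
  have "K \<inter> V \<in> kc_sets k X" using kc_sets_subset[OF assms(3)] by blast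
  then have "f |` (K \<inter> V) \<in> F (K \<inter> V)" using assms(1,2) unfolding kc_consistent_def by blast
  then show ?thesis using assms(1,3) unfolding kc_consistent_def by blast
qed

definition sorts_of :: "('s, 'r, 'x) struct \<Rightarrow> 'x set \<Rightarrow> 's list" where
  "sorts_of X K = map (sort_of X) (distinct_list K)"

lemma length_sorts_of [simp]: "length (sorts_of X K) = length (distinct_list K)"
  by (simp add: sorts_of_def)

lemma kc_set_distinct_list:
  assumes "K \<in> kc_sets k X"
  shows "set (distinct_list K) = K" "distinct (distinct_list K)" "length (distinct_list K) \<le> k"
    "\<forall>i < length (distinct_list K). distinct_list K ! i \<in> sdom X (sorts_of X K ! i)"
proof -
  have K: "finite K" "K \<subseteq> elems X" "card K \<le> k" using assms by (auto simp: kc_sets_def)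
  show set: "set (distinct_list K) = K" and dist: "distinct (distinct_list K)"
    using set_distinct_list[OF K(1)] distinct_distinct_list[OF K(1)] by auto
  show "length (distinct_list K) \<le> k" using set dist K(3) distinct_card by fastforce
  show "\<forall>i < length (distinct_list K). distinct_list K ! i \<in> sdom X (sorts_of X K ! i)"
    using set K(2) sdom_sort_of nth_mem by (fastforce simp: sorts_of_def)
qed

lemma kc_subset_pick:
  assumes K: "K \<in> kc_sets k X" and L: "L \<in> kc_sets k X" "L \<subseteq> K"
  defines "\<pi> \<equiv> map (index_in (distinct_list K)) (distinct_list L)"
  shows "pick (distinct_list K) \<pi> = distinct_list L" "\<forall>x \<in> set \<pi>. x < length (sorts_of X K)"
    "length \<pi> \<le> k" "pick (sorts_of X K) \<pi> = sorts_of X L"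
proof -
  have sub: "set (distinct_list L) \<subseteq> set (distinct_list K)"
    using kc_set_distinct_list(1)[OF K] kc_set_distinct_list(1)[OF L(1)] L(2) by simp
  show pick: "pick (distinct_list K) \<pi> = distinct_list L"
    unfolding \<pi>_def by (rule pick_index_in[OF sub])
  show bound: "\<forall>x \<in> set \<pi>. x < length (sorts_of X K)"
    using index_in_bound[OF sub] by (simp add: \<pi>_def)
  show "length \<pi> \<le> k" using kc_set_distinct_list(3)[OF L(1)] by (simp add: \<pi>_def)
  have "pick (sorts_of X K) \<pi> = map (sort_of X) (pick (distinct_list K) \<pi>)"
    using bound by (simp add: sorts_of_def)
  then show "pick (sorts_of X K) \<pi> = sorts_of X L" using pick by (simp add: sorts_of_def)
qed

section \<open>Datalog\<close>

lemma atom_holds_mono: "I \<subseteq> J \<Longrightarrow> atom_holds A I v a \<Longrightarrow> atom_holds A J v a"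
  by (induction A I v a rule: atom_holds.induct) auto

lemma dl_step_mono: "mono (dl_step P A)"
  unfolding mono_def dl_step_def using atom_holds_mono by blast

lemma lfp_dl_step_unfold: "dl_step P A (lfp (dl_step P A)) = lfp (dl_step P A)"
  by (rule sym) (rule lfp_unfold[OF dl_step_mono])

lemma dl_lfp_rule:
  assumes "r \<in> set (rules P)" "\<forall>x \<in> rule_vars r. v x \<in> sdom A (vty r x)"
    "\<forall>a \<in> set (body r). atom_holds A (lfp (dl_step P A)) v a"
  shows "(hd_sym r, map v (hd_args r)) \<in> lfp (dl_step P A)"
proof -
  have "(hd_sym r, map v (hd_args r)) \<in> dl_step P A (lfp (dl_step P A))"
    unfolding dl_step_def[of P A "lfp (dl_step P A)"] using assms by blast
  then show ?thesis by (simp only: lfp_dl_step_unfold)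
qed

lemma dl_lfp_cases:
  assumes "(S, ts) \<in> lfp (dl_step P A)"
  obtains r v where "r \<in> set (rules P)" "\<forall>x \<in> rule_vars r. v x \<in> sdom A (vty r x)"
    "\<forall>a \<in> set (body r). atom_holds A (lfp (dl_step P A)) v a"
    "S = hd_sym r" "ts = map v (hd_args r)"
proof -
  have "(S, ts) \<in> dl_step P A (lfp (dl_step P A))" using assms by (simp only: lfp_dl_step_unfold)
  then show ?thesis using that unfolding dl_step_def by blast
qed

lemma dl_lfp_rules_mono:
  assumes "set (rules P) \<subseteq> set (rules Q)"
  shows "lfp (dl_step P X) \<subseteq> lfp (dl_step Q X)"
proof (rule lfp_lowerbound)
  have "dl_step P X (lfp (dl_step Q X)) \<subseteq> dl_step Q X (lfp (dl_step Q X))"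
    using assms unfolding dl_step_def by blast
  then show "dl_step P X (lfp (dl_step Q X)) \<subseteq> lfp (dl_step Q X)"
    by (simp only: lfp_dl_step_unfold)
qed

definition empty_prog :: "('ps, 'pr) prog" where
  "empty_prog = \<lparr> rules = [], idb_ar = (\<lambda>_. []), outp = 0 \<rparr>"

lemma dl_output_no_rules: "rules P = [] \<Longrightarrow> dl_output P X = {}"
  using lfp_lowerbound[of "dl_step P X" "{}"] by (simp add: dl_output_def dl_step_def)

lemma finite_rule_vars: "finite (rule_vars r)"
proof -
  have "finite (atom_vars a)" for a :: "'pr atom" by (cases a) auto
  then show ?thesis unfolding rule_vars_def by auto
qed

lemma card_rule_vars_le_width: "r \<in> set (rules P) \<Longrightarrow> card (rule_vars r) \<le> prog_width P"
  unfolding prog_width_def by (rule Max_ge) auto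

lemma prog_width_le: "(\<forall>r \<in> set (rules P). card (rule_vars r) \<le> k) \<Longrightarrow> prog_width P \<le> k"
  unfolding prog_width_def by (subst Max_le_iff) auto

lemma card_image_rule_vars_le:
  assumes "r \<in> set (rules P)" "prog_width P \<le> k"
  shows "card (v ` rule_vars r) \<le> k"
  using card_image_le[OF finite_rule_vars, of v r] card_rule_vars_le_width[OF assms(1)] assms(2)
  by linarith

lemma dl_lfp_kc_set:
  assumes "(S, ts) \<in> lfp (dl_step P X)" "prog_width P \<le> k"
  shows "set ts \<in> kc_sets k X"
proof -
  obtain r v where rv: "r \<in> set (rules P)" "\<forall>x \<in> rule_vars r. v x \<in> sdom X (vty r x)"
    "ts = map v (hd_args r)"
    using dl_lfp_cases[OF assms(1)] by metis
  have sub: "set ts \<subseteq> v ` rule_vars r" using rv(3) by (auto simp: rule_vars_def)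
  moreover have "v ` rule_vars r \<subseteq> elems X" using rv(2) by (auto simp: elems_def)
  moreover have "card (set ts) \<le> k"
    using card_mono[OF finite_imageI[OF finite_rule_vars] sub]
      card_image_rule_vars_le[OF rv(1) assms(2), of v] by linarith
  ultimately show ?thesis by (simp add: kc_sets_def)
qed

lemma partial_hom_sdom:
  assumes g: "partial_hom X A V g" and \<iota>: "is_hom A C \<iota>" and a: "a \<in> V" "a \<in> sdom X t"
  shows "\<iota> (the (g a)) \<in> sdom C t"
proof -
  obtain b where "b \<in> sdom A t" "g a = Some b" using g a unfolding partial_hom_def by blast
  then show ?thesis using \<iota> unfolding is_hom_def by simp
qed

lemma atom_holds_transfer:
  assumes g: "partial_hom X A V g" and \<iota>: "is_hom A C \<iota>"
    and vars: "v ` atom_vars a \<subseteq> V" and holds: "atom_holds X I v a"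
    and idb: "\<And>S ts. (S, ts) \<in> I \<Longrightarrow> set ts \<subseteq> V \<Longrightarrow> (S, map (\<iota> \<circ> the \<circ> g) ts) \<in> J"
  shows "atom_holds C J (\<iota> \<circ> the \<circ> g \<circ> v) a"
proof (cases a)
  case (Rel Sy xs)
  show ?thesis
  proof (cases Sy)
    case (Inl R)
    have "map v xs \<in> srel X R" "set (map v xs) \<subseteq> V" using holds vars Rel Inl by auto
    then have "map (the \<circ> g) (map v xs) \<in> srel A R" using g unfolding partial_hom_def by blast
    then show ?thesis using \<iota> Rel Inl by (simp add: is_hom_def flip: map_map)
  next
    case (Inr S)
    then show ?thesis using idb[of S "map v xs"] holds vars Rel by auto
  qed
qed (use holds in auto)

text \<open>The valuation of a rule has at most \<open>k\<close> values, so a member of the family is defined on all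
  of them and agrees with \<open>f\<close> on the head.\<close>
lemma dl_lfp_consistent_map:
  assumes width: "prog_width P \<le> k" and F: "kc_consistent k X A F" and \<iota>: "is_hom A C \<iota>"
    and mem: "(S, ts) \<in> lfp (dl_step P X)" and f: "f \<in> F K" "set ts \<subseteq> K"
  shows "(S, map (\<iota> \<circ> the \<circ> f) ts) \<in> lfp (dl_step P C)"
proof -
  let ?Q = "{(S, ts). \<forall>K f. set ts \<subseteq> K \<longrightarrow> f \<in> F K \<longrightarrow> (S, map (\<iota> \<circ> the \<circ> f) ts) \<in> lfp (dl_step P C)}"
  have "lfp (dl_step P X) \<subseteq> ?Q"
  proof (rule lfp_lowerbound, rule subsetI)
    fix z assume "z \<in> dl_step P X ?Q"
    then obtain r v where r: "r \<in> set (rules P)" "\<forall>x \<in> rule_vars r. v x \<in> sdom X (vty r x)"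
        "\<forall>a \<in> set (body r). atom_holds X ?Q v a" and z: "z = (hd_sym r, map v (hd_args r))"
      unfolding dl_step_def by blast
    show "z \<in> ?Q" unfolding z
    proof (intro CollectI case_prodI allI impI)
      fix K f assume K: "set (map v (hd_args r)) \<subseteq> K" and f: "f \<in> F K"
      define V where "V = v ` rule_vars r"
      have "V \<in> kc_sets k X"
        using r(2) card_image_rule_vars_le[OF r(1) width] finite_rule_vars
        by (auto simp: kc_sets_def V_def elems_def)
      then obtain g where g: "g \<in> F V" "g |` (K \<inter> V) = f |` (K \<inter> V)"
        using kc_consistent_extend[OF F f] by blast
      have gV: "partial_hom X A V g" using F g(1) unfolding kc_consistent_def by blast
      let ?v' = "\<iota> \<circ> the \<circ> g \<circ> v"
      have "\<forall>x \<in> rule_vars r. ?v' x \<in> sdom C (vty r x)"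
        using partial_hom_sdom[OF gV \<iota>] r(2) by (simp add: V_def)
      moreover have "\<forall>a \<in> set (body r). atom_holds C (lfp (dl_step P C)) ?v' a"
      proof
        fix a assume "a \<in> set (body r)"
        then show "atom_holds C (lfp (dl_step P C)) ?v' a"
          using r(3) g(1) by (intro atom_holds_transfer[OF gV \<iota>]) (auto simp: V_def rule_vars_def)
      qed
      ultimately have "(hd_sym r, map ?v' (hd_args r)) \<in> lfp (dl_step P C)"
        by (rule dl_lfp_rule[OF r(1)])
      moreover have "map ?v' (hd_args r) = map (\<iota> \<circ> the \<circ> f) (map v (hd_args r))"
        unfolding map_map
      proof (rule map_cong[OF refl])
        fix x assume "x \<in> set (hd_args r)"
        then have "v x \<in> K \<inter> V" using K unfolding V_def rule_vars_def by auto
        then have "g (v x) = f (v x)" using g(2) by (metis restrict_in)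
        then show "?v' x = ((\<iota> \<circ> the \<circ> f) \<circ> v) x" by simp
      qed
      ultimately show "(hd_sym r, map (\<iota> \<circ> the \<circ> f) (map v (hd_args r))) \<in> lfp (dl_step P C)"
        by simp
    qed
  qed
  then show ?thesis using mem f by blast
qed

definition kc_ident :: "nat \<Rightarrow> ('ps, 'pr, 'x) struct \<Rightarrow> ('bs, 'br, 'b) struct
    \<Rightarrow> ('x set \<Rightarrow> ('x \<Rightarrow> 'a option) set)
    \<Rightarrow> (('x set \<times> ('bs \<times> (('x \<Rightarrow> 'a option) \<Rightarrow> 'b)))
        \<times> ('x set \<times> ('bs \<times> (('x \<Rightarrow> 'a option) \<Rightarrow> 'b)))) set" where
  "kc_ident k X B F =
     {((K, (t, restrict (\<lambda>g. b (g |` L)) (F K))), (L, (t, b))) | K L t b.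
        K \<in> kc_sets k X \<and> L \<in> kc_sets k X \<and> L \<subseteq> K \<and> b \<in> F L \<rightarrow>\<^sub>E sdom B t}"

lemma kappa_glue:
  "kappa arP arB k A B X =
     glue (kc_sets k X) (\<lambda>K. power arB B (kc_family k X A K)) (kc_ident k X B (kc_family k X A))"
  by (simp add: kappa_def kc_ident_def Let_def)

definition gadget_idx :: "('ss, 'sr, 'e) struct \<Rightarrow> (('ss \<times> 'e) + ('sr \<times> 'e list)) set" where
  "gadget_idx Y = {Inl (t, a) | t a. a \<in> sdom Y t} \<union> {Inr (R, tup) | R tup. tup \<in> srel Y R}"

definition gadget_copy :: "('ss, 'sr, 'bs, 'br, 'g) gadget \<Rightarrow> ('ss \<times> 'e) + ('sr \<times> 'e list)
    \<Rightarrow> ('bs, 'br, 'g) struct" where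
  "gadget_copy \<gamma> i = (case i of Inl (t, a) \<Rightarrow> gD \<gamma> t | Inr (R, tup) \<Rightarrow> gR \<gamma> R)"

definition gadget_ident ::
    "('sr \<Rightarrow> 'ss list) \<Rightarrow> ('ss, 'sr, 'bs, 'br, 'g) gadget \<Rightarrow> ('ss, 'sr, 'e) struct
    \<Rightarrow> (((('ss \<times> 'e) + ('sr \<times> 'e list)) \<times> 'g) \<times> ((('ss \<times> 'e) + ('sr \<times> 'e list)) \<times> 'g)) set" where
  "gadget_ident arS \<gamma> Y =
     {((Inr (R, tup), gp \<gamma> R i d), (Inl (arS R ! i, tup ! i), d)) | R tup i d.
        tup \<in> srel Y R \<and> i < length (arS R) \<and> d \<in> elems (gD \<gamma> (arS R ! i))}"

lemma gadget_app_glue: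
  "gadget_app arS \<gamma> Y = glue (gadget_idx Y) (gadget_copy \<gamma>) (gadget_ident arS \<gamma> Y)"
  by (simp add: gadget_app_def gadget_idx_def gadget_copy_def[abs_def] gadget_ident_def)

lemma wf_gadget_copy: "wf_gadget arS arB \<gamma> \<Longrightarrow> wf_struct arB (gadget_copy \<gamma> i)"
  by (cases i) (auto simp: gadget_copy_def wf_gadget_def)

lemma interp_app_srel_nth:
  assumes "tup \<in> srel (interp_app arS \<phi> Z) R" "j < length (arS R)"
  shows "tup ! j \<in> sdom (interp_app arS \<phi> Z) (arS R ! j)"
  using assms by (auto simp: interp_app_def)

section \<open>A gadget reduction factors through \<open>k\<close>-consistency\<close>

lemma kappa_hom_of_hom:
  assumes h: "is_hom X A h"
  shows "kappa arP arB k A B X \<rightarrow>\<^sub>h B"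
proof -
  let ?F = "kc_family k X A"
  let ?m = "\<lambda>(K, c). snd c ((\<lambda>x. Some (h x)) |` K)"
  have "respects_glue (kc_sets k X) (\<lambda>K. power arB B (?F K)) (kc_ident k X B ?F) ?m"
    unfolding respects_glue_def
  proof (intro allI impI)
    fix p q assume "(p, q) \<in> kc_ident k X B ?F"
    then obtain K L t b where pq: "p = (K, (t, restrict (\<lambda>g. b (g |` L)) (?F K)))" "q = (L, (t, b))"
      "K \<in> kc_sets k X" "L \<subseteq> K" by (auto simp: kc_ident_def)
    have "((\<lambda>x. Some (h x)) |` K) |` L = (\<lambda>x. Some (h x)) |` L"
      using pq(4) by (auto simp: restrict_map_def fun_eq_iff)
    then show "?m p = ?m q" using pq kc_family_hom[OF h pq(3)] by simp
  qed
  moreover have "is_hom (power arB B (?F K)) B (\<lambda>c. ?m (K, c))" if "K \<in> kc_sets k X" for K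
    using power_eval_hom[OF kc_family_hom[OF h that]] by simp
  ultimately show ?thesis
    unfolding kappa_glue hom_to_def by (blast intro: glue_hom)
qed

definition idx_support :: "('s \<times> ('s \<times> 'x list)) + ('r \<times> ('s \<times> 'x list) list) \<Rightarrow> 'x set" where
  "idx_support i = (case i of Inl (t, a) \<Rightarrow> set (snd a) | Inr (R, tup) \<Rightarrow> set (concat (map snd tup)))"

definition idx_map :: "('x \<Rightarrow> 'y) \<Rightarrow> ('s \<times> ('s \<times> 'x list)) + ('r \<times> ('s \<times> 'x list) list)
    \<Rightarrow> ('s \<times> ('s \<times> 'y list)) + ('r \<times> ('s \<times> 'y list) list)" where
  "idx_map h i = (case i of
      Inl (t, a) \<Rightarrow> Inl (t, (fst a, map h (snd a)))
    | Inr (R, tup) \<Rightarrow> Inr (R, map (\<lambda>(s, w). (s, map h w)) tup))"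

lemma gadget_copy_idx_map [simp]: "gadget_copy \<gamma> (idx_map h i) = gadget_copy \<gamma> i"
  by (auto simp: gadget_copy_def idx_map_def split: sum.split)

lemma idx_support_kc_set:
  assumes "interp_width_le \<phi> k" "i \<in> gadget_idx (interp_app arS \<phi> X)"
  shows "idx_support i \<in> kc_sets k X"
proof -
  have out: "set ts \<in> kc_sets k X" if "ts \<in> dl_output P X" "prog_width P \<le> k" for P ts
    using dl_lfp_kc_set that by (auto simp: dl_output_def)
  have "prog_width (iT \<phi> s) \<le> k" "prog_width (iR \<phi> R) \<le> k" for s R
    using assms(1) by (auto simp: interp_width_le_def)
  with assms(2) out show ?thesis
    by (auto simp: gadget_idx_def interp_app_def idx_support_def simp del: set_concat)
qed

lemma idx_map_gadget_idx:
  assumes width: "interp_width_le \<phi> k" and F: "kc_consistent k X A F" and \<iota>: "is_hom A C \<iota>"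
    and i: "i \<in> gadget_idx (interp_app arS \<phi> X)" and f: "f \<in> F (idx_support i)"
  shows "idx_map (\<iota> \<circ> the \<circ> f) i \<in> gadget_idx (interp_app arS \<phi> C)"
proof -
  let ?h = "\<iota> \<circ> the \<circ> f"
  have transfer: "map ?h ts \<in> dl_output P C"
    if "prog_width P \<le> k" "ts \<in> dl_output P X" "set ts \<subseteq> idx_support i" for P ts
    using dl_lfp_consistent_map[OF that(1) F \<iota> _ f that(3)] that(2) by (simp add: dl_output_def)
  have wT: "prog_width (iT \<phi> s) \<le> k" and wR: "prog_width (iR \<phi> R) \<le> k" for s R
    using width by (auto simp: interp_width_le_def)
  show ?thesis
  proof (cases i)
    case (Inl ta)
    with i obtain t w where "i = Inl (t, (t, w))" "w \<in> dl_output (iT \<phi> t) X"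
      by (auto simp: gadget_idx_def interp_app_def)
    then show ?thesis using transfer[OF wT]
      by (auto simp: gadget_idx_def interp_app_def idx_map_def idx_support_def)
  next
    case (Inr Rt)
    with i obtain R ws where Rws: "i = Inr (R, zip (arS R) ws)" "length ws = length (arS R)"
      "\<forall>j < length ws. ws ! j \<in> dl_output (iT \<phi> (arS R ! j)) X" "concat ws \<in> dl_output (iR \<phi> R) X"
      by (auto simp: gadget_idx_def interp_app_def)
    moreover have "map snd (zip (arS R) ws) = ws" using Rws(2) by simp
    ultimately have supp: "idx_support i = set (concat ws)"
      by (simp add: idx_support_def del: set_concat)
    have "\<forall>j < length ws. map ?h (ws ! j) \<in> dl_output (iT \<phi> (arS R ! j)) C"
      using Rws(3) transfer[OF wT] supp by (metis UN_I nth_mem set_concat subsetI)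
    moreover have "concat (map (map ?h) ws) \<in> dl_output (iR \<phi> R) C"
      using transfer[OF wR Rws(4)] supp by (simp add: map_concat)
    moreover have "map (\<lambda>(s, w). (s, map ?h w)) (zip (arS R) ws) = zip (arS R) (map (map ?h) ws)"
      using Rws(2) by (simp add: zip_map2)
    ultimately show ?thesis using Rws(1,2)
      by (auto simp: gadget_idx_def interp_app_def idx_map_def)
  qed
qed

text \<open>Given \<open>\<iota> : A \<rightarrow> C\<close> and \<open>G : \<gamma>(\<phi>(C)) \<rightarrow> B\<close>, a point \<open>d\<close> of the gadget part at index \<open>i\<close> of
  \<open>\<gamma>(\<phi>(X))\<close> is sent to the element of \<open>B\<^sup>F\<close> at the support of \<open>i\<close> whose value at \<open>f\<close> is the
  image under \<open>G\<close> of \<open>d\<close> in the part at \<open>i\<close> transported along \<open>\<iota> \<circ> f\<close>.\<close>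
locale gadget_factorization =
  fixes arP :: "'pr \<Rightarrow> 'ps list" and arB :: "'br \<Rightarrow> 'bs list" and arS :: "nat \<Rightarrow> nat list"
    and k :: nat
    and X :: "('ps, 'pr, 'x) struct" and A :: "('ps, 'pr, 'a) struct"
    and C :: "('ps, 'pr, 'c) struct" and B :: "('bs, 'br, 'b) struct"
    and \<phi> :: "('ps, 'pr, nat, nat) interp" and \<gamma> :: "(nat, nat, 'bs, 'br, 'g) gadget"
    and \<iota> :: "'a \<Rightarrow> 'c" and G
  assumes finite_X: "finite (elems X)" and finite_A: "finite (elems A)"
    and width: "interp_width_le \<phi> k" and wf_\<gamma>: "wf_gadget arS arB \<gamma>"
    and hom_\<iota>: "is_hom A C \<iota>" and hom_G: "is_hom (gadget_app arS \<gamma> (interp_app arS \<phi> C)) B G"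
begin

abbreviation "F \<equiv> kc_family k X A"

abbreviation "cls_C \<equiv>
  glue_class (gadget_idx (interp_app arS \<phi> C)) (gadget_copy \<gamma>)
      (gadget_ident arS \<gamma> (interp_app arS \<phi> C))"

abbreviation "cls_\<kappa> \<equiv> glue_class (kc_sets k X) (\<lambda>K. power arB B (F K)) (kc_ident k X B F)"

definition point where
  "point i d = (idx_support i, (sort_of (gadget_copy \<gamma> i) d,
     restrict (\<lambda>f. G (cls_C (idx_map (\<iota> \<circ> the \<circ> f) i, d))) (F (idx_support i))))"

lemma F_consistent: "kc_consistent k X A F"
  by (rule kc_family_consistent[OF finite_X finite_A])

lemma transported_copy_hom:
  assumes i: "i \<in> gadget_idx (interp_app arS \<phi> X)" and f: "f \<in> F (idx_support i)"
  shows "is_hom (gadget_copy \<gamma> i) B (\<lambda>d. G (cls_C (idx_map (\<iota> \<circ> the \<circ> f) i, d)))"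
proof -
  have "idx_map (\<iota> \<circ> the \<circ> f) i \<in> gadget_idx (interp_app arS \<phi> C)"
    by (rule idx_map_gadget_idx[OF width F_consistent hom_\<iota> i f])
  from glue_copy_hom[OF this, of "gadget_copy \<gamma>" "gadget_ident arS \<gamma> (interp_app arS \<phi> C)"]
  have "is_hom (gadget_copy \<gamma> i) (gadget_app arS \<gamma> (interp_app arS \<phi> C))
      (\<lambda>d. cls_C (idx_map (\<iota> \<circ> the \<circ> f) i, d))"
    unfolding gadget_app_glue by simp
  from is_hom_comp[OF this hom_G] show ?thesis by (simp add: comp_def)
qed

lemma point_sdom:
  assumes i: "i \<in> gadget_idx (interp_app arS \<phi> X)" and d: "d \<in> sdom (gadget_copy \<gamma> i) s"
  shows "fst (snd (point i d)) = s" "snd (snd (point i d)) \<in> F (idx_support i) \<rightarrow>\<^sub>E sdom B s"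
proof -
  show "fst (snd (point i d)) = s"
    using sort_of_eq[OF wf_gadget_copy[OF wf_\<gamma>] d] by (simp add: point_def)
  have "G (cls_C (idx_map (\<iota> \<circ> the \<circ> f) i, d)) \<in> sdom B s" if "f \<in> F (idx_support i)" for f
    using transported_copy_hom[OF i that] d unfolding is_hom_def by blast
  then show "snd (snd (point i d)) \<in> F (idx_support i) \<rightarrow>\<^sub>E sdom B s"
    by (simp add: point_def)
qed

lemma copy_hom_kappa:
  assumes i: "i \<in> gadget_idx (interp_app arS \<phi> X)"
  shows "is_hom (gadget_copy \<gamma> i) (kappa arP arB k A B X) (\<lambda>d. cls_\<kappa> (point i d))"
proof -
  let ?K = "idx_support i"
  have K: "?K \<in> kc_sets k X" by (rule idx_support_kc_set[OF width i])
  have "is_hom (gadget_copy \<gamma> i) (power arB B (F ?K)) (\<lambda>d. snd (point i d))"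
    unfolding is_hom_def
  proof (intro conjI allI ballI)
    fix s d assume d: "d \<in> sdom (gadget_copy \<gamma> i) s"
    have eq: "snd (point i d) = (s, snd (snd (point i d)))"
      using point_sdom(1)[OF i d] by (metis prod.collapse)
    show "snd (point i d) \<in> sdom (power arB B (F ?K)) s"
      by (subst eq) (simp add: power_def point_sdom(2)[OF i d])
  next
    fix R tup assume tup: "tup \<in> srel (gadget_copy \<gamma> i) R"
    have sorts: "length tup = length (arB R)"
        "\<forall>j < length tup. tup ! j \<in> sdom (gadget_copy \<gamma> i) (arB R ! j)"
      using wf_struct_srel_sorts[OF wf_gadget_copy[OF wf_\<gamma>] tup] by auto
    have "map (\<lambda>b. snd b f) (map (\<lambda>d. snd (point i d)) tup) \<in> srel B R" if f: "f \<in> F ?K" for f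
    proof -
      have "map (\<lambda>d. G (cls_C (idx_map (\<iota> \<circ> the \<circ> f) i, d))) tup \<in> srel B R"
        using transported_copy_hom[OF i f] tup unfolding is_hom_def by blast
      moreover have "map (\<lambda>b. snd b f) (map (\<lambda>d. snd (point i d)) tup)
          = map (\<lambda>d. G (cls_C (idx_map (\<iota> \<circ> the \<circ> f) i, d))) tup"
        using f by (simp add: point_def)
      ultimately show ?thesis by metis
    qed
    moreover have "\<forall>j < length tup. fst (snd (point i (tup ! j))) = arB R ! j \<and>
        snd (snd (point i (tup ! j))) \<in> F ?K \<rightarrow>\<^sub>E sdom B (arB R ! j)"
      using point_sdom[OF i] sorts(2) by blast
    ultimately show "map (\<lambda>d. snd (point i d)) tup \<in> srel (power arB B (F ?K)) R"
      using sorts(1) by (simp add: power_def)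
  qed
  moreover have "is_hom (power arB B (F ?K)) (kappa arP arB k A B X) (\<lambda>c. cls_\<kappa> (?K, c))"
    unfolding kappa_glue by (rule glue_copy_hom[OF K])
  ultimately have "is_hom (gadget_copy \<gamma> i) (kappa arP arB k A B X)
      ((\<lambda>c. cls_\<kappa> (?K, c)) \<circ> (\<lambda>d. snd (point i d)))"
    by (rule is_hom_comp)
  then show ?thesis by (simp add: comp_def point_def)
qed

lemma transport_component:
  assumes tup: "tup \<in> srel (interp_app arS \<phi> X) R" and j: "j < length (arS R)"
    and d: "d \<in> elems (gD \<gamma> (arS R ! j))" and g: "g \<in> F (idx_support (Inr (R, tup)))"
  shows "cls_C (idx_map (\<iota> \<circ> the \<circ> g) (Inr (R, tup)), gp \<gamma> R j d)
    = cls_C (idx_map (\<iota> \<circ> the \<circ> (g |` set (snd (tup ! j)))) (Inl (arS R ! j, tup ! j)), d)"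
proof -
  define tupg where "tupg = map (\<lambda>(s, w). (s, map (\<iota> \<circ> the \<circ> g) w)) tup"
  have len: "length tup = length (arS R)" and tupj: "fst (tup ! j) = arS R ! j"
    using tup j by (auto simp: interp_app_def)
  have i1: "Inr (R, tup) \<in> gadget_idx (interp_app arS \<phi> X)" using tup by (simp add: gadget_idx_def)
  have tg: "Inr (R, tupg) \<in> gadget_idx (interp_app arS \<phi> C)"
    using idx_map_gadget_idx[OF width F_consistent hom_\<iota> i1 g] by (simp add: idx_map_def tupg_def)
  then have tgC: "tupg \<in> srel (interp_app arS \<phi> C) R" by (simp add: gadget_idx_def)
  have tg': "Inl (arS R ! j, tupg ! j) \<in> gadget_idx (interp_app arS \<phi> C)"
    unfolding gadget_idx_def using interp_app_srel_nth[OF tgC j] by blast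
  obtain s0 where d0: "d \<in> sdom (gD \<gamma> (arS R ! j)) s0" using d by (auto simp: elems_def)
  have "gp \<gamma> R j d \<in> sdom (gR \<gamma> R) s0"
    using wf_\<gamma> j d0 unfolding wf_gadget_def is_hom_def by blast
  then have "(Inr (R, tupg), gp \<gamma> R j d) \<in> glue_pre (gadget_idx (interp_app arS \<phi> C))
      (gadget_copy \<gamma>)"
    using tg by (auto simp: glue_pre_def gadget_copy_def elems_def)
  moreover have "(Inl (arS R ! j, tupg ! j), d) \<in> glue_pre (gadget_idx (interp_app arS \<phi> C))
      (gadget_copy \<gamma>)"
    using tg' d by (simp add: glue_pre_def gadget_copy_def)
  moreover have "((Inr (R, tupg), gp \<gamma> R j d), (Inl (arS R ! j, tupg ! j), d))
      \<in> gadget_ident arS \<gamma> (interp_app arS \<phi> C)"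
    unfolding gadget_ident_def using tgC j d by blast
  ultimately have "cls_C (Inr (R, tupg), gp \<gamma> R j d) = cls_C (Inl (arS R ! j, tupg ! j), d)"
    by (intro glue_class_eq)
  moreover have "map (\<iota> \<circ> the \<circ> g) (snd (tup ! j)) = map (\<iota> \<circ> the \<circ> (g |` set (snd (tup ! j))))
      (snd (tup ! j))"
    by simp
  ultimately show ?thesis
    using j len tupj by (simp add: idx_map_def tupg_def split_beta)
qed

text \<open>Transporting a relation part along \<open>f\<close> and then restricting to a component is the same as
  transporting the component part along the restriction of \<open>f\<close>.\<close>
lemma point_ident:
  assumes tup: "tup \<in> srel (interp_app arS \<phi> X) R" and j: "j < length (arS R)"
    and d: "d \<in> elems (gD \<gamma> (arS R ! j))"
  shows "cls_\<kappa> (point (Inr (R, tup)) (gp \<gamma> R j d)) = cls_\<kappa> (point (Inl (arS R ! j, tup ! j)) d)"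
proof -
  define i1 :: "(nat \<times> nat \<times> 'x list) + (nat \<times> (nat \<times> 'x list) list)" where "i1 = Inr (R, tup)"
  define i2 :: "(nat \<times> nat \<times> 'x list) + (nat \<times> (nat \<times> 'x list) list)"
    where "i2 = Inl (arS R ! j, tup ! j)"
  have i1: "i1 \<in> gadget_idx (interp_app arS \<phi> X)" using tup by (auto simp: gadget_idx_def i1_def)
  have i2: "i2 \<in> gadget_idx (interp_app arS \<phi> X)"
    unfolding gadget_idx_def i2_def using interp_app_srel_nth[OF tup j] by blast
  define K where "K = idx_support i1"
  define L where "L = idx_support i2"
  have K: "K \<in> kc_sets k X" and L: "L \<in> kc_sets k X"
    using idx_support_kc_set[OF width] i1 i2 by (auto simp: K_def L_def)
  have len: "length tup = length (arS R)" using tup by (auto simp: interp_app_def)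
  have L_eq: "L = set (snd (tup ! j))" by (simp add: L_def i2_def idx_support_def)
  have LK: "L \<subseteq> K"
    unfolding L_eq K_def i1_def idx_support_def using j len by (auto intro!: bexI[of _ "tup ! j"])
  obtain s0 where d0: "d \<in> sdom (gD \<gamma> (arS R ! j)) s0" using d by (auto simp: elems_def)
  have gpd: "gp \<gamma> R j d \<in> sdom (gR \<gamma> R) s0"
    using wf_\<gamma> j d0 unfolding wf_gadget_def is_hom_def by blast
  define b where "b = snd (snd (point i2 d))"
  have b: "b \<in> F L \<rightarrow>\<^sub>E sdom B s0"
    using point_sdom(2)[OF i2] d0 by (simp add: b_def L_def i2_def gadget_copy_def)
  have FL: "g |` L \<in> F L" if "g \<in> F K" for g
    using F_consistent that L LK unfolding kc_consistent_def by blast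
  have restr: "snd (snd (point i1 (gp \<gamma> R j d))) = restrict (\<lambda>g. b (g |` L)) (F K)"
  proof (simp add: point_def flip: K_def, rule restrict_ext)
    fix g assume "g \<in> F K"
    then show "G (cls_C (idx_map (\<iota> \<circ> the \<circ> g) i1, gp \<gamma> R j d)) = b (g |` L)"
      using transport_component[OF tup j d] FL[of g] L_eq
      by (simp add: b_def point_def K_def i1_def i2_def idx_support_def flip: L_def)
  qed
  have wf: "wf_struct arB (gR \<gamma> R)" "wf_struct arB (gD \<gamma> (arS R ! j))"
    using wf_\<gamma> by (auto simp: wf_gadget_def)
  have sorts: "sort_of (gadget_copy \<gamma> i1) (gp \<gamma> R j d) = s0" "sort_of (gadget_copy \<gamma> i2) d = s0"
    using sort_of_eq[OF wf(1) gpd] sort_of_eq[OF wf(2) d0]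
    by (simp_all add: i1_def i2_def gadget_copy_def)
  have p1: "point i1 (gp \<gamma> R j d) = (K, (s0, restrict (\<lambda>g. b (g |` L)) (F K)))"
    using restr sorts(1) by (simp add: point_def K_def)
  have p2: "point i2 d = (L, (s0, b))"
    using sorts(2) by (simp add: point_def b_def L_def)
  have r: "restrict (\<lambda>g. b (g |` L)) (F K) \<in> F K \<rightarrow>\<^sub>E sdom B s0"
    using b FL by (auto simp: PiE_iff)
  have "(c, (s0, f)) \<in> glue_pre (kc_sets k X) (\<lambda>K. power arB B (F K))"
    if "c \<in> kc_sets k X" "f \<in> F c \<rightarrow>\<^sub>E sdom B s0" for c f
    using that unfolding glue_pre_def elems_def power_def by auto
  moreover have "((K, (s0, restrict (\<lambda>g. b (g |` L)) (F K))), (L, (s0, b))) \<in> kc_ident k X B F"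
    unfolding kc_ident_def using K L LK b by blast
  ultimately have "cls_\<kappa> (K, (s0, restrict (\<lambda>g. b (g |` L)) (F K))) = cls_\<kappa> (L, (s0, b))"
    using K L r b by (intro glue_class_eq) blast+
  then show ?thesis using p1 p2 by (simp add: i1_def i2_def)
qed

lemma gadget_app_hom_kappa: "gadget_app arS \<gamma> (interp_app arS \<phi> X) \<rightarrow>\<^sub>h kappa arP arB k A B X"
proof -
  let ?m = "\<lambda>(i, d). cls_\<kappa> (point i d)"
  have "respects_glue (gadget_idx (interp_app arS \<phi> X)) (gadget_copy \<gamma>)
      (gadget_ident arS \<gamma> (interp_app arS \<phi> X)) ?m"
    unfolding respects_glue_def
  proof (intro allI impI)
    fix p q assume "(p, q) \<in> gadget_ident arS \<gamma> (interp_app arS \<phi> X)"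
    then obtain R tup j d where "p = (Inr (R, tup), gp \<gamma> R j d)" "q = (Inl (arS R ! j, tup ! j), d)"
      "tup \<in> srel (interp_app arS \<phi> X) R" "j < length (arS R)" "d \<in> elems (gD \<gamma> (arS R ! j))"
      unfolding gadget_ident_def by blast
    then show "?m p = ?m q" using point_ident by simp
  qed
  then show ?thesis
    unfolding gadget_app_glue hom_to_def using copy_hom_kappa by (force intro: glue_hom)
qed

end

lemma pcsp_reduction_kappa_of_gadget:
  fixes arP :: "'pr::finite \<Rightarrow> 'ps::finite list"
    and A :: "('ps, 'pr, 'a) struct" and \<phi> :: "('ps, 'pr, nat, nat) interp"
    and \<gamma> :: "(nat, nat, 'bs, 'br, 'g) gadget"
  assumes A: "promise_template arP A A'"
    and \<phi>: "interp_width_le \<phi> k" and \<gamma>: "wf_gadget arS arB \<gamma>"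
    and red: "pcsp_reduction arP A A' B B' (\<lambda>X. gadget_app arS \<gamma> (interp_app arS \<phi> X))"
  shows "pcsp_reduction arP A A' B B' (kappa arP arB k A B)"
  unfolding pcsp_reduction_def
proof (intro allI impI conjI)
  fix X :: "('ps, 'pr, nat) struct" assume X: "wf_struct arP X \<and> finite_struct X"
  show "X \<rightarrow>\<^sub>h A \<Longrightarrow> kappa arP arB k A B X \<rightarrow>\<^sub>h B"
    unfolding hom_to_def[of X A] using kappa_hom_of_hom by blast
  assume \<kappa>B': "kappa arP arB k A B X \<rightarrow>\<^sub>h B'"
  have wfA: "wf_struct arP A" and finA: "finite_struct A"
    using A by (auto simp: promise_template_def)
  \<comment> \<open>the reduction is only applied to structures over \<open>nat\<close>, so replace \<open>A\<close> by such a copy\<close>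
  obtain C :: "('ps, 'pr, nat) struct"
    where C: "wf_struct arP C" "finite_struct C" "A \<rightarrow>\<^sub>h C" "C \<rightarrow>\<^sub>h A"
    using hom_equivalent_nat_struct[OF wfA finA] by blast
  obtain G where "is_hom (gadget_app arS \<gamma> (interp_app arS \<phi> C)) B G"
    using red C unfolding pcsp_reduction_def hom_to_def by blast
  moreover obtain \<iota> where "is_hom A C \<iota>" using C(3) by (auto simp: hom_to_def)
  ultimately interpret gadget_factorization arP arB arS k X A C B \<phi> \<gamma> \<iota> G
    using X elems_finite[OF finA] elems_finite[of X] \<phi> \<gamma> by unfold_locales auto
  have "gadget_app arS \<gamma> (interp_app arS \<phi> X) \<rightarrow>\<^sub>h B'"
    using gadget_app_hom_kappa \<kappa>B' by (rule hom_to_trans)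
  then show "X \<rightarrow>\<^sub>h A'" using red X unfolding pcsp_reduction_def by blast
qed

section \<open>Simulating \<open>k\<close>-consistency by a Datalog interpretation\<close>

text \<open>The Datalog program derives \<open>bad_sym \<sigma> f\<close> on a tuple \<open>v\<close> of sort \<open>\<sigma>\<close> when the partial
  map \<open>v \<mapsto> f\<close> is refuted by \<open>k\<close>-consistency: it violates a relation of \<open>A\<close>, it projects to a refuted
  map, or every extension of it to a larger tuple is refuted.  The output sorts of the
  interpretation are indexed by pairs \<open>(\<sigma>, T)\<close> (tuples of sort \<open>\<sigma>\<close> on which all maps in \<open>T\<close> are
  refuted), its relation symbols by the projections between them; IDB symbol \<open>0\<close> is the output.\<close>
locale kc_datalog =
  fixes arP :: "'pr::finite \<Rightarrow> 'ps::finite list"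
    and k :: nat
    and A :: "('ps, 'pr, 'a) struct"
  assumes finite_A: "finite_struct A"
begin

definition tuples :: "'ps list \<Rightarrow> 'a list set" where
  "tuples \<sigma> = {f. length f = length \<sigma> \<and> (\<forall>i < length \<sigma>. f ! i \<in> sdom A (\<sigma> ! i))}"

definition short_sorts :: "'ps list set" where
  "short_sorts = {\<sigma>. length \<sigma> \<le> k}"

definition bad_keys :: "('ps list \<times> 'a list) set" where
  "bad_keys = {(\<sigma>, f). \<sigma> \<in> short_sorts \<and> f \<in> tuples \<sigma>}"

definition positions :: "'ps list \<Rightarrow> nat list set" where
  "positions \<sigma> = {\<pi>. length \<pi> \<le> k \<and> (\<forall>x \<in> set \<pi>. x < length \<sigma>)}"

definition bad_sym :: "'ps list \<Rightarrow> 'a list \<Rightarrow> nat" where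
  "bad_sym \<sigma> f = Suc (nat_code bad_keys (\<sigma>, f))"

definition violation_rule :: "'ps list \<Rightarrow> 'a list \<Rightarrow> 'pr \<Rightarrow> nat list \<Rightarrow> ('ps, 'pr) drule" where
  "violation_rule \<sigma> f R js = \<lparr> hd_sym = bad_sym \<sigma> f, hd_args = [0..<length \<sigma>],
     body = [Rel (Inl R) js], vty = nth \<sigma> \<rparr>"

definition projection_rule :: "'ps list \<Rightarrow> 'a list \<Rightarrow> nat list \<Rightarrow> ('ps, 'pr) drule" where
  "projection_rule \<sigma> f \<pi> = \<lparr> hd_sym = bad_sym \<sigma> f, hd_args = [0..<length \<sigma>],
     body = [Rel (Inr (bad_sym (pick \<sigma> \<pi>) (pick f \<pi>))) \<pi>], vty = nth \<sigma> \<rparr>"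

definition extensions :: "'ps list \<Rightarrow> nat list \<Rightarrow> 'a list \<Rightarrow> 'a list set" where
  "extensions \<sigma> \<pi> f' = {g \<in> tuples \<sigma>. pick g \<pi> = f'}"

text \<open>The trivial equations make every position of \<open>\<sigma>\<close> a variable of the rule, ranging over the
  right domain of \<open>X\<close>, also when there are no extensions at all.\<close>
definition extension_rule :: "'ps list \<Rightarrow> nat list \<Rightarrow> 'a list \<Rightarrow> ('ps, 'pr) drule" where
  "extension_rule \<sigma> \<pi> f' = \<lparr> hd_sym = bad_sym (pick \<sigma> \<pi>) f', hd_args = \<pi>,
     body = map (\<lambda>i. Eq i i) [0..<length \<sigma>] @
            map (\<lambda>g. Rel (Inr (bad_sym \<sigma> g)) [0..<length \<sigma>]) (list_of (extensions \<sigma> \<pi> f')),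
     vty = nth \<sigma> \<rparr>"

definition violation_rules :: "('ps, 'pr) drule set" where
  "violation_rules = {violation_rule \<sigma> f R js | \<sigma> f R js.
     \<sigma> \<in> short_sorts \<and> f \<in> tuples \<sigma> \<and> (\<forall>x \<in> set js. x < length \<sigma>) \<and>
     pick \<sigma> js = arP R \<and> pick f js \<notin> srel A R}"

definition projection_rules :: "('ps, 'pr) drule set" where
  "projection_rules = {projection_rule \<sigma> f \<pi> | \<sigma> f \<pi>.
     \<sigma> \<in> short_sorts \<and> f \<in> tuples \<sigma> \<and> \<pi> \<in> positions \<sigma>}"

definition extension_rules :: "('ps, 'pr) drule set" where
  "extension_rules = {extension_rule \<sigma> \<pi> f' | \<sigma> \<pi> f'.
     \<sigma> \<in> short_sorts \<and> \<pi> \<in> positions \<sigma> \<and> f' \<in> tuples (pick \<sigma> \<pi>)}"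

definition bad_rules :: "('ps, 'pr) drule list" where
  "bad_rules = list_of (violation_rules \<union> projection_rules \<union> extension_rules)"

lemma finite_elems_A: "finite (elems A)"
  using elems_finite[OF finite_A] .

lemma finite_short_sorts: "finite short_sorts"
proof -
  have "short_sorts = {\<sigma>. set \<sigma> \<subseteq> UNIV \<and> length \<sigma> \<le> k}" by (simp add: short_sorts_def)
  then show ?thesis using finite_lists_length_le[of "UNIV :: 'ps set" k] by simp
qed

lemma tuples_subset: "tuples \<sigma> \<subseteq> {xs. set xs \<subseteq> elems A \<and> length xs = length \<sigma>}"
proof
  fix f assume f: "f \<in> tuples \<sigma>"
  have "set f \<subseteq> elems A"
  proof
    fix x assume "x \<in> set f"
    then obtain i where "i < length f" "x = f ! i" by (auto simp: in_set_conv_nth)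
    then show "x \<in> elems A" using f unfolding tuples_def elems_def by auto
  qed
  then show "f \<in> {xs. set xs \<subseteq> elems A \<and> length xs = length \<sigma>}" using f by (simp add: tuples_def)
qed

lemma finite_tuples: "finite (tuples \<sigma>)"
  using finite_lists_length_eq[OF finite_elems_A] tuples_subset by (rule finite_subset[rotated])

lemma finite_positions: "finite (positions \<sigma>)"
proof -
  have "positions \<sigma> \<subseteq> {xs. set xs \<subseteq> {..<length \<sigma>} \<and> length xs \<le> k}" by (auto simp: positions_def)
  moreover have "finite {xs. set xs \<subseteq> {..<length \<sigma>} \<and> length xs \<le> k}"
    by (rule finite_lists_length_le) simp
  ultimately show ?thesis by (rule finite_subset)
qed

lemma finite_bad_keys: "finite bad_keys"
proof -
  have "bad_keys = (\<Union>\<sigma> \<in> short_sorts. (\<lambda>f. (\<sigma>, f)) ` tuples \<sigma>)" by (auto simp: bad_keys_def)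
  then show ?thesis using finite_short_sorts finite_tuples by simp
qed

lemma bad_sym_inj:
  assumes "(\<sigma>, f) \<in> bad_keys" "(\<sigma>', f') \<in> bad_keys" "bad_sym \<sigma> f = bad_sym \<sigma>' f'"
  shows "\<sigma> = \<sigma>' \<and> f = f'"
proof -
  have "nat_code bad_keys (\<sigma>, f) = nat_code bad_keys (\<sigma>', f')" using assms(3)
    by (simp add: bad_sym_def)
  then have "(\<sigma>, f) = (\<sigma>', f')" using inj_onD[OF inj_nat_code[OF finite_bad_keys] _ assms(1,2)]
    by blast
  then show ?thesis by simp
qed

lemma bad_sym_neq_0[simp]: "bad_sym \<sigma> f \<noteq> 0" by (simp add: bad_sym_def)

lemma finite_violation_rules: "finite violation_rules"
proof -
  define M where "M = Max (range (\<lambda>R. length (arP R)))"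
  define JS where "JS = {xs. set xs \<subseteq> {..<k} \<and> length xs \<le> M}"
  have fJS: "finite JS" unfolding JS_def by (rule finite_lists_length_le) simp
  have sub: "violation_rules \<subseteq> (\<lambda>(\<sigma>, f, R, js). violation_rule \<sigma> f R js) `
      (SIGMA \<sigma>:short_sorts. tuples \<sigma> \<times> ((UNIV :: 'pr set) \<times> JS))"
  proof
    fix r assume "r \<in> violation_rules"
    then obtain \<sigma> f R js where r: "r = violation_rule \<sigma> f R js" "\<sigma> \<in> short_sorts" "f \<in> tuples \<sigma>"
        "\<forall>x \<in> set js. x < length \<sigma>"
      "pick \<sigma> js = arP R" by (auto simp: violation_rules_def)
    have "length js = length (arP R)" using r(5) by (metis length_map)
    moreover have "length (arP R) \<le> M" unfolding M_def by (rule Max_ge) auto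
    moreover have "set js \<subseteq> {..<k}" using r(2,4) by (auto simp: short_sorts_def)
    ultimately have "js \<in> JS" by (simp add: JS_def)
    then have mem: "(\<sigma>, f, R, js) \<in> (SIGMA \<sigma>:short_sorts. tuples \<sigma> \<times> ((UNIV :: 'pr set) \<times> JS))"
      using r(2,3) by simp
    show "r \<in> (\<lambda>(\<sigma>, f, R, js). violation_rule \<sigma> f R js) `
        (SIGMA \<sigma>:short_sorts. tuples \<sigma> \<times> ((UNIV :: 'pr set) \<times> JS))"
      by (rule image_eqI[OF _ mem]) (simp add: r(1))
  qed
  have fU: "finite (UNIV :: 'pr set)" by simp
  have fin: "finite (SIGMA \<sigma>:short_sorts. tuples \<sigma> \<times> ((UNIV :: 'pr set) \<times> JS))"
    by (intro finite_SigmaI finite_cartesian_product finite_short_sorts finite_tuples fU fJS)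
  show ?thesis by (rule finite_surj[OF fin sub])
qed

lemma finite_projection_rules: "finite projection_rules"
proof -
  have "projection_rules \<subseteq> (\<lambda>(\<sigma>, f, \<pi>). projection_rule \<sigma> f \<pi>) `
      (SIGMA \<sigma>:short_sorts. tuples \<sigma> \<times> positions \<sigma>)"
  proof
    fix r assume "r \<in> projection_rules"
    then obtain \<sigma> f \<pi> where r: "r = projection_rule \<sigma> f \<pi>" "\<sigma> \<in> short_sorts" "f \<in> tuples \<sigma>"
        "\<pi> \<in> positions \<sigma>"
      by (auto simp: projection_rules_def)
    then show "r \<in> (\<lambda>(\<sigma>, f, \<pi>). projection_rule \<sigma> f \<pi>) `
        (SIGMA \<sigma>:short_sorts. tuples \<sigma> \<times> positions \<sigma>)"
      by (intro image_eqI[where x="(\<sigma>, f, \<pi>)"]) simp_all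
  qed
  moreover have "finite (SIGMA \<sigma>:short_sorts. tuples \<sigma> \<times> positions \<sigma>)"
    using finite_short_sorts finite_tuples finite_positions
    by (intro finite_SigmaI finite_cartesian_product) auto
  ultimately show ?thesis by (rule finite_surj[rotated])
qed

lemma finite_extension_rules: "finite extension_rules"
proof -
  have "extension_rules \<subseteq> (\<lambda>(\<sigma>, \<pi>, f'). extension_rule \<sigma> \<pi> f') `
      (SIGMA \<sigma>:short_sorts. SIGMA \<pi>:positions \<sigma>. tuples (pick \<sigma> \<pi>))"
  proof
    fix r assume "r \<in> extension_rules"
    then obtain \<sigma> \<pi> f' where r: "r = extension_rule \<sigma> \<pi> f'" "\<sigma> \<in> short_sorts" "\<pi> \<in> positions \<sigma>"
        "f' \<in> tuples (pick \<sigma> \<pi>)"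
      by (auto simp: extension_rules_def)
    then show "r \<in> (\<lambda>(\<sigma>, \<pi>, f'). extension_rule \<sigma> \<pi> f') `
        (SIGMA \<sigma>:short_sorts. SIGMA \<pi>:positions \<sigma>. tuples (pick \<sigma> \<pi>))"
      by (intro image_eqI[where x="(\<sigma>, \<pi>, f')"]) simp_all
  qed
  moreover have "finite (SIGMA \<sigma>:short_sorts. SIGMA \<pi>:positions \<sigma>. tuples (pick \<sigma> \<pi>))"
    using finite_short_sorts finite_tuples finite_positions by (intro finite_SigmaI) auto
  ultimately show ?thesis by (rule finite_surj[rotated])
qed

lemma set_bad_rules: "set bad_rules = violation_rules \<union> projection_rules \<union> extension_rules"
  unfolding bad_rules_def using finite_violation_rules finite_projection_rules
      finite_extension_rules by simp

definition bad_idb_ar :: "'ps list \<Rightarrow> nat \<Rightarrow> 'ps list" where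
  "bad_idb_ar \<tau> s = (if s = 0 then \<tau> else fst (inv_into bad_keys (nat_code bad_keys) (s - 1)))"

lemma bad_idb_ar_bad_sym: "(\<sigma>, f) \<in> bad_keys \<Longrightarrow> bad_idb_ar \<tau> (bad_sym \<sigma> f) = \<sigma>"
  unfolding bad_idb_ar_def bad_sym_def using finite_bad_keys by simp

definition bad_atoms :: "'ps list \<Rightarrow> 'a list set \<Rightarrow> nat list \<Rightarrow> 'pr atom list" where
  "bad_atoms \<sigma> T xs = map (\<lambda>f. Rel (Inr (bad_sym \<sigma> f)) xs) (list_of T)"

definition sort_rule :: "'ps list \<Rightarrow> 'a list set \<Rightarrow> ('ps, 'pr) drule" where
  "sort_rule \<sigma> T = \<lparr> hd_sym = 0, hd_args = [0..<length \<sigma>],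
     body = bad_atoms \<sigma> T [0..<length \<sigma>], vty = nth \<sigma> \<rparr>"

definition rel_rule :: "'ps list \<Rightarrow> 'a list set \<Rightarrow> nat list \<Rightarrow> 'a list set \<Rightarrow> ('ps, 'pr) drule" where
  "rel_rule \<sigma> T \<pi> T' = \<lparr> hd_sym = 0, hd_args = [0..<length \<sigma>] @ \<pi>,
     body = bad_atoms \<sigma> T [0..<length \<sigma>] @ bad_atoms (pick \<sigma> \<pi>) T' \<pi>, vty = nth \<sigma> \<rparr>"

definition bad_prog :: "('ps, 'pr) prog" where
  "bad_prog = \<lparr> rules = bad_rules, idb_ar = bad_idb_ar [], outp = 0 \<rparr>"

definition sort_prog :: "'ps list \<Rightarrow> 'a list set \<Rightarrow> ('ps, 'pr) prog" where
  "sort_prog \<sigma> T = \<lparr> rules = bad_rules @ [sort_rule \<sigma> T], idb_ar = bad_idb_ar \<sigma>, outp = 0 \<rparr>"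

definition rel_prog :: "'ps list \<Rightarrow> 'a list set \<Rightarrow> nat list \<Rightarrow> 'a list set \<Rightarrow> ('ps, 'pr) prog" where
  "rel_prog \<sigma> T \<pi> T' =
     \<lparr> rules = bad_rules @ [rel_rule \<sigma> T \<pi> T'], idb_ar = bad_idb_ar (\<sigma> @ pick \<sigma> \<pi>), outp = 0 \<rparr>"

definition out_sorts :: "('ps list \<times> 'a list set) set" where
  "out_sorts = {(\<sigma>, T). \<sigma> \<in> short_sorts \<and> T \<subseteq> tuples \<sigma>}"

definition out_rels :: "('ps list \<times> 'a list set \<times> nat list \<times> 'a list set) set" where
  "out_rels = {(\<sigma>, T, \<pi>, T'). (\<sigma>, T) \<in> out_sorts \<and> \<pi> \<in> positions \<sigma> \<and>
     T' \<subseteq> tuples (pick \<sigma> \<pi>) \<and> (\<forall>g \<in> tuples \<sigma>. pick g \<pi> \<in> T' \<longrightarrow> g \<in> T)}"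

lemma finite_out_sorts: "finite out_sorts"
proof -
  have "out_sorts \<subseteq> (\<Union>\<sigma> \<in> short_sorts. (\<lambda>T. (\<sigma>, T)) ` Pow (tuples \<sigma>))" by (auto simp: out_sorts_def)
  moreover have "finite (\<Union>\<sigma> \<in> short_sorts. (\<lambda>T. (\<sigma>, T)) ` Pow (tuples \<sigma>))"
    by (intro finite_UN_I finite_short_sorts finite_imageI finite_Pow_iff[THEN iffD2] finite_tuples)
  ultimately show ?thesis by (rule finite_subset)
qed

lemma finite_out_rels: "finite out_rels"
proof -
  have "out_rels \<subseteq> (\<Union>\<sigma> \<in> short_sorts. \<Union>T \<in> Pow (tuples \<sigma>). \<Union>\<pi> \<in> positions \<sigma>.
      (\<lambda>T'. (\<sigma>, T, \<pi>, T')) ` Pow (tuples (pick \<sigma> \<pi>)))"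
    by (auto simp: out_rels_def out_sorts_def)
  moreover have "finite (\<Union>\<sigma> \<in> short_sorts. \<Union>T \<in> Pow (tuples \<sigma>). \<Union>\<pi> \<in> positions \<sigma>.
      (\<lambda>T'. (\<sigma>, T, \<pi>, T')) ` Pow (tuples (pick \<sigma> \<pi>)))"
    by (intro finite_UN_I finite_short_sorts finite_imageI finite_Pow_iff[THEN iffD2] finite_tuples
        finite_positions)
  ultimately show ?thesis by (rule finite_subset)
qed

abbreviation "\<mu> \<equiv> nat_code out_sorts"
abbreviation "\<rho> \<equiv> nat_code out_rels"

text \<open>Output sorts and relation symbols are the codes of \<open>out_sorts\<close> and \<open>out_rels\<close>; every other
  code gets the empty program, so it is empty in every output structure.\<close>
definition kc_interp :: "('ps, 'pr, nat, nat) interp" where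
  "kc_interp =
     \<lparr> iT = (\<lambda>c. if c \<in> \<mu> ` out_sorts
                   then case inv_into out_sorts \<mu> c of (\<sigma>, T) \<Rightarrow> sort_prog \<sigma> T else empty_prog),
       iR = (\<lambda>r. if r \<in> \<rho> ` out_rels
                   then case inv_into out_rels \<rho> r of (\<sigma>, T, \<pi>, T') \<Rightarrow> rel_prog \<sigma> T \<pi> T'
                   else empty_prog) \<rparr>"

definition kc_ar :: "nat \<Rightarrow> nat list" where
  "kc_ar r = (if r \<in> \<rho> ` out_rels
     then case inv_into out_rels \<rho> r of (\<sigma>, T, \<pi>, T') \<Rightarrow> [\<mu> (\<sigma>, T), \<mu> (pick \<sigma> \<pi>, T')]
     else [])"

lemma iT_kc_interp: "(\<sigma>, T) \<in> out_sorts \<Longrightarrow> iT kc_interp (\<mu> (\<sigma>, T)) = sort_prog \<sigma> T"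
  unfolding kc_interp_def using finite_out_sorts by simp

lemma iR_kc_interp: "(\<sigma>, T, \<pi>, T') \<in> out_rels \<Longrightarrow> iR kc_interp (\<rho> (\<sigma>, T, \<pi>, T')) = rel_prog \<sigma> T \<pi> T'"
  unfolding kc_interp_def using finite_out_rels by simp

lemma kc_ar_rho: "(\<sigma>, T, \<pi>, T') \<in> out_rels \<Longrightarrow> kc_ar (\<rho> (\<sigma>, T, \<pi>, T')) = [\<mu> (\<sigma>, T), \<mu> (pick \<sigma> \<pi>, T')]"
  unfolding kc_ar_def using finite_out_rels by simp

lemma iT_kc_interp_other: "c \<notin> \<mu> ` out_sorts \<Longrightarrow> iT kc_interp c = empty_prog"
  unfolding kc_interp_def by simp

lemma iR_kc_interp_other: "r \<notin> \<rho> ` out_rels \<Longrightarrow> iR kc_interp r = empty_prog"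
  unfolding kc_interp_def by simp

lemma kc_ar_other: "r \<notin> \<rho> ` out_rels \<Longrightarrow> kc_ar r = []"
  unfolding kc_ar_def by simp

lemma out_rels_out_sorts:
  "(\<sigma>, T, \<pi>, T') \<in> out_rels \<Longrightarrow> (\<sigma>, T) \<in> out_sorts \<and> (pick \<sigma> \<pi>, T') \<in> out_sorts"
  unfolding out_rels_def out_sorts_def positions_def short_sorts_def by auto

lemma pick_tuples: "f \<in> tuples \<sigma> \<Longrightarrow> \<forall>x \<in> set \<pi>. x < length \<sigma> \<Longrightarrow> pick f \<pi> \<in> tuples (pick \<sigma> \<pi>)"
  unfolding tuples_def by auto

lemma bad_keys_pick:
  "\<sigma> \<in> short_sorts \<Longrightarrow> f \<in> tuples \<sigma> \<Longrightarrow> \<pi> \<in> positions \<sigma> \<Longrightarrow> (pick \<sigma> \<pi>, pick f \<pi>) \<in> bad_keys"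
  unfolding bad_keys_def short_sorts_def positions_def using pick_tuples by auto

lemma finite_extensions: "finite (extensions \<sigma> \<pi> f')"
  unfolding extensions_def using finite_tuples by simp

lemma wt_bad_atoms: "T \<subseteq> tuples \<sigma>' \<Longrightarrow> length \<sigma>' \<le> k \<Longrightarrow> map ty xs = \<sigma>' \<Longrightarrow>
    \<forall>a \<in> set (bad_atoms \<sigma>' T xs). wt_atom arP (bad_idb_ar \<tau>) ty a"
  unfolding bad_atoms_def using finite_subset[OF _ finite_tuples]
  by (auto simp: bad_idb_ar_bad_sym bad_keys_def short_sorts_def subset_iff)

lemma wt_bad_rules:
  assumes "r \<in> set bad_rules"
  shows "map (vty r) (hd_args r) = bad_idb_ar \<tau> (hd_sym r)
      \<and> (\<forall>a \<in> set (body r). wt_atom arP (bad_idb_ar \<tau>) (vty r) a)"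
proof -
  have "r \<in> violation_rules \<or> r \<in> projection_rules \<or> r \<in> extension_rules" using assms set_bad_rules
    by blast
  then show ?thesis
  proof (elim disjE)
    assume "r \<in> violation_rules"
    then obtain \<sigma> f R js where r: "r = violation_rule \<sigma> f R js" "\<sigma> \<in> short_sorts" "f \<in> tuples \<sigma>"
        "pick \<sigma> js = arP R"
      by (auto simp: violation_rules_def)
    then have "(\<sigma>, f) \<in> bad_keys" by (simp add: bad_keys_def)
    then show ?thesis using r by (simp add: violation_rule_def bad_idb_ar_bad_sym map_nth)
  next
    assume "r \<in> projection_rules"
    then obtain \<sigma> f \<pi> where r: "r = projection_rule \<sigma> f \<pi>" "\<sigma> \<in> short_sorts" "f \<in> tuples \<sigma>"
        "\<pi> \<in> positions \<sigma>"
      by (auto simp: projection_rules_def)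
    then have "(\<sigma>, f) \<in> bad_keys" by (simp add: bad_keys_def)
    then show ?thesis using r bad_keys_pick[OF r(2,3,4)]
      by (simp add: projection_rule_def bad_idb_ar_bad_sym map_nth)
  next
    assume "r \<in> extension_rules"
    then obtain \<sigma> \<pi> f' where r: "r = extension_rule \<sigma> \<pi> f'" "\<sigma> \<in> short_sorts" "\<pi> \<in> positions \<sigma>"
        "f' \<in> tuples (pick \<sigma> \<pi>)"
      by (auto simp: extension_rules_def)
    have "(pick \<sigma> \<pi>, f') \<in> bad_keys" using r
      by (simp add: bad_keys_def short_sorts_def positions_def)
    moreover have "(\<sigma>, g) \<in> bad_keys" if "g \<in> extensions \<sigma> \<pi> f'" for g
      using that r(2) by (simp add: bad_keys_def extensions_def)
    ultimately show ?thesis using r finite_extensions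
      by (auto simp: extension_rule_def bad_idb_ar_bad_sym map_nth)
  qed
qed

lemma card_le_of_subset_lessThan: "S \<subseteq> {..<n} \<Longrightarrow> n \<le> k \<Longrightarrow> card S \<le> k"
  using card_mono[of "{..<n}" S] by simp

lemma card_vars_bad_rule:
  assumes "r \<in> set bad_rules"
  shows "card (rule_vars r) \<le> k"
proof -
  have "r \<in> violation_rules \<or> r \<in> projection_rules \<or> r \<in> extension_rules" using assms set_bad_rules
    by blast
  then show ?thesis
  proof (elim disjE)
    assume "r \<in> violation_rules"
    then obtain \<sigma> f R js where r: "r = violation_rule \<sigma> f R js" "\<sigma> \<in> short_sorts"
        "\<forall>x \<in> set js. x < length \<sigma>"
      by (auto simp: violation_rules_def)
    have "rule_vars r \<subseteq> {..<length \<sigma>}" using r by (auto simp: rule_vars_def violation_rule_def)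
    then show ?thesis using r(2) card_le_of_subset_lessThan by (simp add: short_sorts_def)
  next
    assume "r \<in> projection_rules"
    then obtain \<sigma> f \<pi> where r: "r = projection_rule \<sigma> f \<pi>" "\<sigma> \<in> short_sorts" "\<pi> \<in> positions \<sigma>"
      by (auto simp: projection_rules_def)
    have "rule_vars r \<subseteq> {..<length \<sigma>}" using r
      by (auto simp: rule_vars_def projection_rule_def positions_def)
    then show ?thesis using r(2) card_le_of_subset_lessThan by (simp add: short_sorts_def)
  next
    assume "r \<in> extension_rules"
    then obtain \<sigma> \<pi> f' where r: "r = extension_rule \<sigma> \<pi> f'" "\<sigma> \<in> short_sorts" "\<pi> \<in> positions \<sigma>"
      by (auto simp: extension_rules_def)
    have "rule_vars r \<subseteq> {..<length \<sigma>}" using r finite_extensions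
      by (auto simp: rule_vars_def extension_rule_def positions_def)
    then show ?thesis using r(2) card_le_of_subset_lessThan by (simp add: short_sorts_def)
  qed
qed

lemma bad_atoms_vars: "a \<in> set (bad_atoms \<sigma> T xs) \<Longrightarrow> atom_vars a = set xs"
  unfolding bad_atoms_def by auto

lemma wf_sort_prog:
  assumes out_sorts: "(\<sigma>, T) \<in> out_sorts" shows "wf_prog arP (sort_prog \<sigma> T)"
proof -
  have h: "map (vty (sort_rule \<sigma> T)) (hd_args (sort_rule \<sigma> T)) = bad_idb_ar \<sigma>
      (hd_sym (sort_rule \<sigma> T))"
    by (simp add: sort_rule_def bad_idb_ar_def map_nth)
  have b: "\<forall>a \<in> set (body (sort_rule \<sigma> T)). wt_atom arP (bad_idb_ar \<sigma>) (vty (sort_rule \<sigma> T)) a"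
    unfolding sort_rule_def using out_sorts wt_bad_atoms[of T \<sigma> "nth \<sigma>" "[0..<length \<sigma>]" \<sigma>]
    by (simp add: map_nth out_sorts_def short_sorts_def)
  show ?thesis unfolding wf_prog_def sort_prog_def using wt_bad_rules[where \<tau>=\<sigma>] h b by auto
qed

lemma wf_rel_prog:
  assumes out_rels: "(\<sigma>, T, \<pi>, T') \<in> out_rels" shows "wf_prog arP (rel_prog \<sigma> T \<pi> T')"
proof -
  have h: "map (vty (rel_rule \<sigma> T \<pi> T')) (hd_args (rel_rule \<sigma> T \<pi> T')) = bad_idb_ar (\<sigma> @ pick \<sigma> \<pi>)
      (hd_sym (rel_rule \<sigma> T \<pi> T'))"
    by (simp add: rel_rule_def bad_idb_ar_def map_nth)
  have v: "(\<sigma>, T) \<in> out_sorts" "(pick \<sigma> \<pi>, T') \<in> out_sorts" using out_rels_out_sorts[OF out_rels]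
    by auto
  have b: "\<forall>a \<in> set (body (rel_rule \<sigma> T \<pi> T')). wt_atom arP (bad_idb_ar (\<sigma> @ pick \<sigma> \<pi>))
      (vty (rel_rule \<sigma> T \<pi> T')) a"
    unfolding rel_rule_def using v wt_bad_atoms[of T \<sigma> "nth \<sigma>" "[0..<length \<sigma>]" "\<sigma> @ pick \<sigma> \<pi>"]
      wt_bad_atoms[of T' "pick \<sigma> \<pi>" "nth \<sigma>" \<pi> "\<sigma> @ pick \<sigma> \<pi>"]
    by (auto simp: map_nth out_sorts_def short_sorts_def)
  show ?thesis unfolding wf_prog_def rel_prog_def using wt_bad_rules[where \<tau>="\<sigma> @ pick \<sigma> \<pi>"] h b
    by auto
qed

lemma wf_empty_prog: "wf_prog arP empty_prog" by (simp add: wf_prog_def empty_prog_def)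

lemma wf_kc_interp: "wf_interp arP kc_ar kc_interp"
  unfolding wf_interp_def
proof (intro conjI allI)
  fix s show "wf_prog arP (iT kc_interp s)"
  proof (cases "s \<in> \<mu> ` out_sorts")
    case True then obtain \<sigma> T where "(\<sigma>, T) \<in> out_sorts" "s = \<mu> (\<sigma>, T)" by auto
    then show ?thesis using iT_kc_interp wf_sort_prog by simp
  qed (simp add: iT_kc_interp_other wf_empty_prog)
next
  fix R show "wf_prog arP (iR kc_interp R)"
  proof (cases "R \<in> \<rho> ` out_rels")
    case True then obtain \<sigma> T \<pi> T' where "(\<sigma>, T, \<pi>, T') \<in> out_rels" "R = \<rho> (\<sigma>, T, \<pi>, T')" by auto
    then show ?thesis using iR_kc_interp wf_rel_prog by simp
  qed (simp add: iR_kc_interp_other wf_empty_prog)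
  show "prog_ar (iR kc_interp R) = concat (map (\<lambda>s. prog_ar (iT kc_interp s)) (kc_ar R))"
  proof (cases "R \<in> \<rho> ` out_rels")
    case True then obtain \<sigma> T \<pi> T' where v: "(\<sigma>, T, \<pi>, T') \<in> out_rels" "R = \<rho> (\<sigma>, T, \<pi>, T')" by auto
    have "(\<sigma>, T) \<in> out_sorts" "(pick \<sigma> \<pi>, T') \<in> out_sorts" using out_rels_out_sorts[OF v(1)] by auto
    then show ?thesis using v iR_kc_interp kc_ar_rho iT_kc_interp
      by (simp add: prog_ar_def rel_prog_def sort_prog_def bad_idb_ar_def)
  qed (simp add: iR_kc_interp_other kc_ar_other prog_ar_def empty_prog_def)
qed

lemma width_sort_prog: "(\<sigma>, T) \<in> out_sorts \<Longrightarrow> prog_width (sort_prog \<sigma> T) \<le> k"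
proof (rule prog_width_le, intro ballI)
  fix r assume out_sorts: "(\<sigma>, T) \<in> out_sorts" and r: "r \<in> set (rules (sort_prog \<sigma> T))"
  show "card (rule_vars r) \<le> k"
  proof (cases "r \<in> set bad_rules")
    case True then show ?thesis by (rule card_vars_bad_rule)
  next
    case False
    then have "r = sort_rule \<sigma> T" using r by (simp add: sort_prog_def)
    then have "rule_vars r \<subseteq> {..<length \<sigma>}"
      by (auto simp: rule_vars_def sort_rule_def dest: bad_atoms_vars)
    then show ?thesis using out_sorts card_le_of_subset_lessThan
      by (simp add: out_sorts_def short_sorts_def)
  qed
qed

lemma width_rel_prog: "(\<sigma>, T, \<pi>, T') \<in> out_rels \<Longrightarrow> prog_width (rel_prog \<sigma> T \<pi> T') \<le> k"
proof (rule prog_width_le, intro ballI)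
  fix r assume out_rels: "(\<sigma>, T, \<pi>, T') \<in> out_rels" and r: "r \<in> set (rules (rel_prog \<sigma> T \<pi> T'))"
  show "card (rule_vars r) \<le> k"
  proof (cases "r \<in> set bad_rules")
    case True then show ?thesis by (rule card_vars_bad_rule)
  next
    case False
    then have "r = rel_rule \<sigma> T \<pi> T'" using r by (simp add: rel_prog_def)
    moreover have "\<forall>x \<in> set \<pi>. x < length \<sigma>" using out_rels
      by (simp add: out_rels_def positions_def)
    ultimately have "rule_vars r \<subseteq> {..<length \<sigma>}"
      by (auto simp: rule_vars_def rel_rule_def dest: bad_atoms_vars)
    then show ?thesis using out_rels card_le_of_subset_lessThan
      by (simp add: out_rels_def out_sorts_def short_sorts_def)
  qed
qed

lemma kc_interp_width: "interp_width_le kc_interp k"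
  unfolding interp_width_le_def
proof (intro conjI allI)
  fix s show "prog_width (iT kc_interp s) \<le> k"
  proof (cases "s \<in> \<mu> ` out_sorts")
    case True then obtain \<sigma> T where "(\<sigma>, T) \<in> out_sorts" "s = \<mu> (\<sigma>, T)" by auto
    then show ?thesis using iT_kc_interp width_sort_prog by simp
  qed (simp add: iT_kc_interp_other empty_prog_def prog_width_def)
next
  fix R show "prog_width (iR kc_interp R) \<le> k"
  proof (cases "R \<in> \<rho> ` out_rels")
    case True then obtain \<sigma> T \<pi> T' where "(\<sigma>, T, \<pi>, T') \<in> out_rels" "R = \<rho> (\<sigma>, T, \<pi>, T')" by auto
    then show ?thesis using iR_kc_interp width_rel_prog by simp
  qed (simp add: iR_kc_interp_other empty_prog_def prog_width_def)
qed

lemma kc_interp_finite_sig: "interp_finite_sig kc_ar kc_interp"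
  unfolding interp_finite_sig_def
proof (intro exI conjI allI impI ballI)
  show "finite (\<mu> ` out_sorts)" using finite_out_sorts by simp
  show "finite (\<rho> ` out_rels)" using finite_out_rels by simp
  fix s assume "s \<notin> \<mu> ` out_sorts" then show "rules (iT kc_interp s) = []"
    by (simp add: iT_kc_interp_other empty_prog_def)
next
  fix R assume "R \<notin> \<rho> ` out_rels" then show "rules (iR kc_interp R) = []"
    by (simp add: iR_kc_interp_other empty_prog_def)
next
  fix R assume "R \<in> \<rho> ` out_rels"
  then obtain \<sigma> T \<pi> T' where v: "(\<sigma>, T, \<pi>, T') \<in> out_rels" "R = \<rho> (\<sigma>, T, \<pi>, T')" by auto
  then show "set (kc_ar R) \<subseteq> \<mu> ` out_sorts" using out_rels_out_sorts[OF v(1)] kc_ar_rho by auto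
qed

subsection \<open>Maps that are not refuted survive \<open>k\<close>-consistency\<close>

lemma bad_prog_rule:
  assumes "r \<in> set bad_rules" "\<forall>x \<in> rule_vars r. v x \<in> sdom X (vty r x)"
    "\<forall>a \<in> set (body r). atom_holds X (lfp (dl_step bad_prog X)) v a"
  shows "(hd_sym r, map v (hd_args r)) \<in> lfp (dl_step bad_prog X)"
  using dl_lfp_rule[of r bad_prog v X] assms by (simp add: bad_prog_def)

definition refuted :: "('ps, 'pr, 'x) struct \<Rightarrow> 'x set \<Rightarrow> 'a list set" where
  "refuted X K = {g \<in> tuples (sorts_of X K).
     (bad_sym (sorts_of X K) g, distinct_list K) \<in> lfp (dl_step bad_prog X)}"

lemma sorts_of_index_srel:
  assumes X: "wf_struct arP X" and K: "K \<in> kc_sets k X"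
    and tup: "tup \<in> srel X R" "set tup \<subseteq> K"
  shows "pick (sorts_of X K) (map (index_in (distinct_list K)) tup) = arP R"
proof -
  define js where "js = map (index_in (distinct_list K)) tup"
  have sub: "set tup \<subseteq> set (distinct_list K)" using tup(2) kc_set_distinct_list(1)[OF K] by simp
  have "pick (distinct_list K) js = tup" unfolding js_def by (rule pick_index_in[OF sub])
  moreover have "\<forall>x \<in> set js. x < length (distinct_list K)" unfolding js_def
    by (rule index_in_bound[OF sub])
  ultimately have "pick (sorts_of X K) js = map (sort_of X) tup" by (auto simp: sorts_of_def)
  also have "\<dots> = arP R"
  proof (rule nth_equalityI)
    note sorts = wf_struct_srel_sorts[OF X tup(1)]
    show "length (map (sort_of X) tup) = length (arP R)" using sorts by simp
    fix i assume "i < length (map (sort_of X) tup)"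
    then show "map (sort_of X) tup ! i = arP R ! i" using sorts sort_of_eq[OF X] by simp
  qed
  finally show ?thesis by (simp add: js_def)
qed

lemma unrefuted_partial_hom:
  assumes X: "wf_struct arP X" and K: "K \<in> kc_sets k X"
    and g: "g \<in> tuples (sorts_of X K) - refuted X K"
  shows "partial_hom X A K (assign (distinct_list K) g)"
proof -
  let ?e = "distinct_list K" and ?\<sigma> = "sorts_of X K"
  note E = kc_set_distinct_list[OF K]
  have lg: "length g = length ?e" using g by (simp add: tuples_def)
  have "\<exists>a\<in>sdom A t. assign ?e g v = Some a" if v: "v \<in> K \<inter> sdom X t" for t v
  proof -
    have "v \<in> set ?e" using v E(1) by simp
    then obtain i where i: "i < length ?e" "v = ?e ! i" by (auto simp: in_set_conv_nth)
    have "assign ?e g v = Some (g ! i)" using assign_nth[OF E(2) lg i(1)] i(2) by simp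
    moreover have "g ! i \<in> sdom A (?\<sigma> ! i)" using g i(1) by (simp add: tuples_def)
    moreover have "?\<sigma> ! i = t" using sort_of_eq[OF X] v i by (simp add: sorts_of_def)
    ultimately show ?thesis by blast
  qed
  moreover have "map (the \<circ> assign ?e g) tup \<in> srel A R"
    if tup: "tup \<in> srel X R" "set tup \<subseteq> K" for R tup
  proof -
    define js where "js = map (index_in ?e) tup"
    have sub: "set tup \<subseteq> set ?e" using tup(2) E(1) by simp
    have ejs: "pick ?e js = tup" unfolding js_def by (rule pick_index_in[OF sub])
    have jsl: "\<forall>x \<in> set js. x < length ?e" unfolding js_def by (rule index_in_bound[OF sub])
    have sjs: "pick ?\<sigma> js = arP R" unfolding js_def by (rule sorts_of_index_srel[OF X K tup])
    have "map (the \<circ> assign ?e g) tup = map (the \<circ> assign ?e g) (pick ?e js)" using ejs by simp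
    also have "\<dots> = pick g js" using jsl assign_nth[OF E(2) lg] by auto
    finally have tup_g: "map (the \<circ> assign ?e g) tup = pick g js" .
    have "pick g js \<in> srel A R"
    proof (rule ccontr)
      let ?r = "violation_rule ?\<sigma> g R js"
      assume "pick g js \<notin> srel A R"
      moreover have "?\<sigma> \<in> short_sorts" using E(3) by (simp add: short_sorts_def)
      moreover have "\<forall>x \<in> set js. x < length ?\<sigma>" using jsl by simp
      ultimately have "?r \<in> violation_rules"
        using g sjs unfolding violation_rules_def by blast
      then have r: "?r \<in> set bad_rules" by (simp add: set_bad_rules)
      have dom: "\<forall>x \<in> rule_vars ?r. ?e ! x \<in> sdom X (vty ?r x)"
        using E(4) jsl by (auto simp: rule_vars_def violation_rule_def)
      have body: "\<forall>a \<in> set (body ?r). atom_holds X (lfp (dl_step bad_prog X)) (nth ?e) a"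
        using ejs tup(1) by (simp add: violation_rule_def)
      have "(bad_sym ?\<sigma> g, map (nth ?e) [0..<length ?\<sigma>]) \<in> lfp (dl_step bad_prog X)"
        using bad_prog_rule[OF r dom body] by (simp add: violation_rule_def)
      then show False using g by (simp add: refuted_def map_nth)
    qed
    then show ?thesis by (simp only: tup_g)
  qed
  moreover have "dom (assign ?e g) = K" using lg E(1) by simp
  ultimately show ?thesis unfolding partial_hom_def by blast
qed

lemma unrefuted_restrict:
  assumes K: "K \<in> kc_sets k X" and L: "L \<in> kc_sets k X" "L \<subseteq> K"
    and g: "g \<in> tuples (sorts_of X K) - refuted X K"
  shows "\<exists>g' \<in> tuples (sorts_of X L) - refuted X L.
           assign (distinct_list K) g |` L = assign (distinct_list L) g'"
proof -
  let ?e = "distinct_list K" and ?\<sigma> = "sorts_of X K"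
  define \<pi> where "\<pi> = map (index_in ?e) (distinct_list L)"
  note E = kc_set_distinct_list[OF K] and EL = kc_set_distinct_list[OF L(1)]
  note P = kc_subset_pick[OF K L, folded \<pi>_def]
  have gT: "g \<in> tuples ?\<sigma>" using g by blast
  have lg: "length g = length ?e" using gT by (simp add: tuples_def)
  have "pick g \<pi> \<in> tuples (sorts_of X L)" using pick_tuples[OF gT P(2)] P(4) by simp
  moreover have "pick g \<pi> \<notin> refuted X L"
  proof
    assume "pick g \<pi> \<in> refuted X L"
    then have bad: "(bad_sym (pick ?\<sigma> \<pi>) (pick g \<pi>), pick ?e \<pi>) \<in> lfp (dl_step bad_prog X)"
      using P(1,4) by (simp add: refuted_def)
    have "?\<sigma> \<in> short_sorts" "\<pi> \<in> positions ?\<sigma>"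
      using E(3) P(2,3) by (auto simp: short_sorts_def positions_def)
    then have "projection_rule ?\<sigma> g \<pi> \<in> set bad_rules"
      using gT unfolding set_bad_rules projection_rules_def by blast
    moreover have "\<forall>x \<in> rule_vars (projection_rule ?\<sigma> g \<pi>). ?e ! x \<in> sdom X
        (vty (projection_rule ?\<sigma> g \<pi>) x)"
      using E(4) P(2) by (auto simp: rule_vars_def projection_rule_def)
    moreover have "\<forall>a \<in> set (body (projection_rule ?\<sigma> g \<pi>)). atom_holds X
        (lfp (dl_step bad_prog X)) (nth ?e) a"
      using bad by (simp add: projection_rule_def)
    ultimately have "(hd_sym (projection_rule ?\<sigma> g \<pi>), map (nth ?e)
        (hd_args (projection_rule ?\<sigma> g \<pi>)))
        \<in> lfp (dl_step bad_prog X)"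
      by (rule bad_prog_rule)
    then have "(bad_sym ?\<sigma> g, map (nth ?e) [0..<length ?\<sigma>]) \<in> lfp (dl_step bad_prog X)"
      by (simp add: projection_rule_def)
    then show False using g by (simp add: refuted_def map_nth)
  qed
  moreover have "assign ?e g |` L = assign (distinct_list L) (pick g \<pi>)"
    using assign_restrict[OF E(2) lg EL(2)] EL(1) L(2) E(1) by (simp add: \<pi>_def)
  ultimately show ?thesis by blast
qed

lemma unrefuted_extend:
  assumes K: "K \<in> kc_sets k X" and M: "M \<in> kc_sets k X" "K \<subseteq> M"
    and g: "g \<in> tuples (sorts_of X K) - refuted X K"
  shows "\<exists>g' \<in> tuples (sorts_of X M) - refuted X M.
           assign (distinct_list M) g' |` K = assign (distinct_list K) g"
proof -
  let ?e = "distinct_list M" and ?\<sigma> = "sorts_of X M"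
  define \<pi> where "\<pi> = map (index_in ?e) (distinct_list K)"
  note E = kc_set_distinct_list[OF K] and EM = kc_set_distinct_list[OF M(1)]
  note P = kc_subset_pick[OF M(1) K M(2), folded \<pi>_def]
  let ?r = "extension_rule ?\<sigma> \<pi> g"
  have "?\<sigma> \<in> short_sorts" "\<pi> \<in> positions ?\<sigma>" "g \<in> tuples (pick ?\<sigma> \<pi>)"
    using EM(3) P(2,3,4) g by (auto simp: short_sorts_def positions_def)
  then have r: "?r \<in> set bad_rules"
    unfolding set_bad_rules extension_rules_def by blast
  have "rule_vars ?r \<subseteq> {..<length ?\<sigma>}"
    using P(2) finite_extensions by (auto simp: rule_vars_def extension_rule_def)
  then have dom: "\<forall>x \<in> rule_vars ?r. ?e ! x \<in> sdom X (vty ?r x)"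
    using EM(4) by (auto simp: extension_rule_def)
  have nbody: "\<not> (\<forall>a \<in> set (body ?r). atom_holds X (lfp (dl_step bad_prog X)) (nth ?e) a)"
  proof
    assume "\<forall>a \<in> set (body ?r). atom_holds X (lfp (dl_step bad_prog X)) (nth ?e) a"
    then have "(bad_sym (pick ?\<sigma> \<pi>) g, pick ?e \<pi>) \<in> lfp (dl_step bad_prog X)"
      using bad_prog_rule[OF r dom] by (simp add: extension_rule_def)
    then show False using g P(1,4) by (simp add: refuted_def)
  qed
  then obtain a where a: "a \<in> set (body ?r)" "\<not> atom_holds X (lfp (dl_step bad_prog X)) (nth ?e) a"
    by blast
  then obtain g' where g': "g' \<in> extensions ?\<sigma> \<pi> g" "a = Rel (Inr (bad_sym ?\<sigma> g')) [0..<length ?\<sigma>]"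
    using finite_extensions by (auto simp: extension_rule_def)
  then have "(bad_sym ?\<sigma> g', ?e) \<notin> lfp (dl_step bad_prog X)"
    using a(2) by (simp add: map_nth)
  then have g'T: "g' \<in> tuples ?\<sigma> - refuted X M" "pick g' \<pi> = g"
    using g'(1) by (auto simp: extensions_def refuted_def)
  have lg': "length g' = length ?e" using g'T(1) by (simp add: tuples_def)
  have "assign ?e g' |` K = assign (distinct_list K) g"
    using assign_restrict[OF EM(2) lg' E(2)] g'T(2) E(1) M(2) EM(1) by (simp add: \<pi>_def)
  then show ?thesis using g'T(1) by blast
qed

lemma unrefuted_kc_iter:
  assumes X: "wf_struct arP X"
  shows "K \<in> kc_sets k X \<Longrightarrow> g \<in> tuples (sorts_of X K) - refuted X K \<Longrightarrow>
    assign (distinct_list K) g \<in> kc_iter k X A n K"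
proof (induction n arbitrary: K g)
  case 0
  then show ?case using unrefuted_partial_hom[OF X] by (simp add: kc_init_def)
next
  case (Suc n)
  have "assign (distinct_list K) g |` L \<in> kc_iter k X A n L"
    if L: "L \<in> kc_sets k X" "L \<subseteq> K" for L
  proof -
    obtain g' where "g' \<in> tuples (sorts_of X L) - refuted X L"
      "assign (distinct_list K) g |` L = assign (distinct_list L) g'"
      using unrefuted_restrict[OF Suc.prems(1) L Suc.prems(2)] by blast
    then show ?thesis using Suc.IH[OF L(1)] by simp
  qed
  moreover have "\<exists>g' \<in> kc_iter k X A n M. g' |` K = assign (distinct_list K) g"
    if M: "M \<in> kc_sets k X" "K \<subseteq> M" for M
  proof -
    obtain g' where "g' \<in> tuples (sorts_of X M) - refuted X M"
      "assign (distinct_list M) g' |` K = assign (distinct_list K) g"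
      using unrefuted_extend[OF Suc.prems(1) M Suc.prems(2)] by blast
    then show ?thesis using Suc.IH[OF M(1)] by blast
  qed
  moreover have "assign (distinct_list K) g \<in> kc_iter k X A n K" by (rule Suc.IH[OF Suc.prems])
  ultimately show ?case by (simp add: kc_step_def)
qed

subsection \<open>Homomorphisms are not refuted\<close>

lemma bad_rules_hd: "r \<in> set bad_rules \<Longrightarrow> hd_sym r \<noteq> 0"
  by (auto simp: set_bad_rules violation_rules_def projection_rules_def extension_rules_def
      violation_rule_def projection_rule_def extension_rule_def bad_sym_def)

definition consistent_facts :: "('x \<Rightarrow> 'a) \<Rightarrow> (nat \<times> 'x list) set" where
  "consistent_facts h = {(s, v). \<forall>\<sigma> f. (\<sigma>, f) \<in> bad_keys \<longrightarrow> s = bad_sym \<sigma> f \<longrightarrow> map h v \<noteq> f}"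

lemma bad_fact_consistent_iff:
  "(\<sigma>, f) \<in> bad_keys \<Longrightarrow> (bad_sym \<sigma> f, v) \<in> consistent_facts h \<longleftrightarrow> map h v \<noteq> f"
  unfolding consistent_facts_def using bad_sym_inj by blast

lemma violation_rule_consistent:
  assumes h: "is_hom X A h" and r': "\<sigma> \<in> short_sorts" "f \<in> tuples \<sigma>" "\<forall>x \<in> set js. x < length \<sigma>"
      "pick f js \<notin> srel A R"
    and body: "\<forall>a \<in> set (body (violation_rule \<sigma> f R js)). atom_holds X (consistent_facts h) v a"
  shows "(bad_sym \<sigma> f, map v [0..<length \<sigma>]) \<in> consistent_facts h"
proof -
  have "map v js \<in> srel X R" using body by (simp add: violation_rule_def)
  then have "map h (map v js) \<in> srel A R" using h unfolding is_hom_def by blast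
  moreover have "pick (map h (map v [0..<length \<sigma>])) js = map h (map v js)"
    using r'(3) by auto
  ultimately have "map h (map v [0..<length \<sigma>]) \<noteq> f" using r'(4) by metis
  then show ?thesis using r' by (simp add: bad_fact_consistent_iff bad_keys_def)
qed

lemma projection_rule_consistent:
  assumes r': "\<sigma> \<in> short_sorts" "f \<in> tuples \<sigma>" "\<pi> \<in> positions \<sigma>"
    and body: "\<forall>a \<in> set (body (projection_rule \<sigma> f \<pi>)). atom_holds X (consistent_facts h) v a"
  shows "(bad_sym \<sigma> f, map v [0..<length \<sigma>]) \<in> consistent_facts h"
proof -
  have "(bad_sym (pick \<sigma> \<pi>) (pick f \<pi>), map v \<pi>) \<in> consistent_facts h"
    using body by (simp add: projection_rule_def)
  then have "map h (map v \<pi>) \<noteq> pick f \<pi>"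
    using bad_keys_pick[OF r'] by (simp add: bad_fact_consistent_iff)
  moreover have "pick (map h (map v [0..<length \<sigma>])) \<pi> = map h (map v \<pi>)"
    using r'(3) by (auto simp: positions_def)
  ultimately have "map h (map v [0..<length \<sigma>]) \<noteq> f" by auto
  then show ?thesis using r' by (simp add: bad_fact_consistent_iff bad_keys_def)
qed

lemma extension_rule_consistent:
  assumes h: "is_hom X A h" and r': "\<sigma> \<in> short_sorts" "\<pi> \<in> positions \<sigma>" "f \<in> tuples (pick \<sigma> \<pi>)"
    and dom: "\<forall>x \<in> rule_vars (extension_rule \<sigma> \<pi> f). v x \<in> sdom X (vty (extension_rule \<sigma> \<pi> f) x)"
    and body: "\<forall>a \<in> set (body (extension_rule \<sigma> \<pi> f)). atom_holds X (consistent_facts h) v a"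
  shows "(bad_sym (pick \<sigma> \<pi>) f, map v \<pi>) \<in> consistent_facts h"
proof -
  have key: "(pick \<sigma> \<pi>, f) \<in> bad_keys"
    using r' by (simp add: bad_keys_def short_sorts_def positions_def)
  define g where "g = map (h \<circ> v) [0..<length \<sigma>]"
  have "g \<in> tuples \<sigma>"
  proof -
    have "v x \<in> sdom X (\<sigma> ! x)" if "x < length \<sigma>" for x
      using dom that by (auto simp: rule_vars_def extension_rule_def)
    then show ?thesis using h unfolding g_def tuples_def is_hom_def by simp
  qed
  moreover have "pick g \<pi> = map h (map v \<pi>)" using r'(2) by (auto simp: g_def positions_def)
  ultimately have "map h (map v \<pi>) = f \<Longrightarrow> g \<in> extensions \<sigma> \<pi> f" by (simp add: extensions_def)
  moreover have "(bad_sym \<sigma> g, map v [0..<length \<sigma>]) \<in> consistent_facts h" if "g \<in> extensions \<sigma> \<pi> f"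
  proof -
    have "Rel (Inr (bad_sym \<sigma> g)) [0..<length \<sigma>] \<in> set (body (extension_rule \<sigma> \<pi> f))"
      using that finite_extensions by (simp add: extension_rule_def)
    then show ?thesis using body by fastforce
  qed
  moreover have "(\<sigma>, g) \<in> bad_keys" using \<open>g \<in> tuples \<sigma>\<close> r'(1) by (simp add: bad_keys_def)
  ultimately have "map h (map v \<pi>) \<noteq> f"
    by (auto simp: bad_fact_consistent_iff g_def)
  then show ?thesis using key by (simp add: bad_fact_consistent_iff)
qed

lemma bad_rule_consistent:
  assumes h: "is_hom X A h" and r: "r \<in> set bad_rules"
    and dom: "\<forall>x \<in> rule_vars r. v x \<in> sdom X (vty r x)"
    and body: "\<forall>a \<in> set (body r). atom_holds X (consistent_facts h) v a"
  shows "(hd_sym r, map v (hd_args r)) \<in> consistent_facts h"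
proof -
  consider "r \<in> violation_rules" | "r \<in> projection_rules" | "r \<in> extension_rules"
    using r set_bad_rules by auto
  then show ?thesis
  proof cases
    case 1
    then obtain \<sigma> f R js where "r = violation_rule \<sigma> f R js" "\<sigma> \<in> short_sorts" "f \<in> tuples \<sigma>"
      "\<forall>x \<in> set js. x < length \<sigma>" "pick f js \<notin> srel A R"
      by (auto simp: violation_rules_def)
    then show ?thesis using violation_rule_consistent[OF h] body by (simp add: violation_rule_def)
  next
    case 2
    then obtain \<sigma> f \<pi> where "r = projection_rule \<sigma> f \<pi>" "\<sigma> \<in> short_sorts" "f \<in> tuples \<sigma>"
      "\<pi> \<in> positions \<sigma>"
      by (auto simp: projection_rules_def)
    then show ?thesis using projection_rule_consistent body by (simp add: projection_rule_def)
  next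
    case 3
    then obtain \<sigma> \<pi> f where "r = extension_rule \<sigma> \<pi> f" "\<sigma> \<in> short_sorts" "\<pi> \<in> positions \<sigma>"
      "f \<in> tuples (pick \<sigma> \<pi>)"
      by (auto simp: extension_rules_def)
    then show ?thesis using extension_rule_consistent[OF h] dom body
      by (simp add: extension_rule_def)
  qed
qed

lemma hom_not_refuted:
  assumes h: "is_hom X A h"
    and P: "\<forall>r \<in> set (rules P). r \<in> set bad_rules \<or> hd_sym r = 0"
    and mem: "(bad_sym \<sigma> f, v) \<in> lfp (dl_step P X)" and key: "(\<sigma>, f) \<in> bad_keys"
  shows "map h v \<noteq> f"
proof -
  have "lfp (dl_step P X) \<subseteq> consistent_facts h"
  proof (rule lfp_lowerbound, rule subsetI)
    fix z assume "z \<in> dl_step P X (consistent_facts h)"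
    then obtain r v where r: "r \<in> set (rules P)" "\<forall>x \<in> rule_vars r. v x \<in> sdom X (vty r x)"
        "\<forall>a \<in> set (body r). atom_holds X (consistent_facts h) v a" and z:
            "z = (hd_sym r, map v (hd_args r))"
      unfolding dl_step_def by blast
    show "z \<in> consistent_facts h"
    proof (cases "hd_sym r = 0")
      case True
      then show ?thesis using z by (simp add: consistent_facts_def)
    next
      case False
      then have "r \<in> set bad_rules" using P r(1) by auto
      then show ?thesis using bad_rule_consistent[OF h _ r(2,3)] z by simp
    qed
  qed
  then show ?thesis using mem key by (auto simp: bad_fact_consistent_iff)
qed

lemma sort_prog_output:
  assumes T: "(\<sigma>, T) \<in> out_sorts" and w: "w \<in> dl_output (sort_prog \<sigma> T) X"
  shows "length w = length \<sigma>" "\<forall>i < length \<sigma>. w ! i \<in> sdom X (\<sigma> ! i)"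
    "\<forall>f \<in> T. (bad_sym \<sigma> f, w) \<in> lfp (dl_step (sort_prog \<sigma> T) X)"
proof -
  have "(0, w) \<in> lfp (dl_step (sort_prog \<sigma> T) X)" using w by (simp add: dl_output_def sort_prog_def)
  then obtain r v where rv: "r \<in> set (rules (sort_prog \<sigma> T))"
      "\<forall>x \<in> rule_vars r. v x \<in> sdom X (vty r x)"
      "\<forall>a \<in> set (body r). atom_holds X (lfp (dl_step (sort_prog \<sigma> T) X)) v a" "0 = hd_sym r"
          "w = map v (hd_args r)"
    by (rule dl_lfp_cases)
  have "r \<notin> set bad_rules" using bad_rules_hd rv(4) by metis
  then have r: "r = sort_rule \<sigma> T" using rv(1) by (simp add: sort_prog_def)
  have fT: "finite T" using T finite_subset[OF _ finite_tuples] by (auto simp: out_sorts_def)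
  have wv: "w = map v [0..<length \<sigma>]" using rv(5) r by (simp add: sort_rule_def)
  then show "length w = length \<sigma>" by simp
  show "\<forall>i < length \<sigma>. w ! i \<in> sdom X (\<sigma> ! i)"
    using rv(2) r wv by (auto simp: sort_rule_def rule_vars_def)
  show "\<forall>f \<in> T. (bad_sym \<sigma> f, w) \<in> lfp (dl_step (sort_prog \<sigma> T) X)"
    using rv(3) r wv fT by (auto simp: sort_rule_def bad_atoms_def)
qed

lemma rel_prog_output:
  assumes "w \<in> dl_output (rel_prog \<sigma> T \<pi> T') X"
  obtains v where "w = map v [0..<length \<sigma>] @ map v \<pi>"
proof -
  have "(0, w) \<in> lfp (dl_step (rel_prog \<sigma> T \<pi> T') X)" using assms
    by (simp add: dl_output_def rel_prog_def)
  then obtain r v where r: "r \<in> set (rules (rel_prog \<sigma> T \<pi> T'))" "0 = hd_sym r"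
      "w = map v (hd_args r)"
    by (rule dl_lfp_cases)
  have "r \<notin> set bad_rules" using bad_rules_hd r(2) by metis
  then have "r = rel_rule \<sigma> T \<pi> T'" using r(1) by (simp add: rel_prog_def)
  then show ?thesis using r(3) by (intro that[of v]) (simp add: rel_rule_def)
qed

definition unrefuted :: "'ps list \<Rightarrow> 'a list set \<Rightarrow> 'a list set" where
  "unrefuted \<sigma> T = tuples \<sigma> - T"

lemma finite_unrefuted: "finite (unrefuted \<sigma> T)"
  unfolding unrefuted_def using finite_tuples by simp

lemma hom_unrefuted:
  assumes h: "is_hom X A h" and T: "(\<sigma>, T) \<in> out_sorts" and w: "w \<in> dl_output (sort_prog \<sigma> T) X"
  shows "map h w \<in> unrefuted \<sigma> T"
proof -
  note out = sort_prog_output[OF T w]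
  have tm: "map h w \<in> tuples \<sigma>" using out(1,2) h unfolding tuples_def is_hom_def by simp
  have "map h w \<notin> T"
  proof
    assume "map h w \<in> T"
    then have "(bad_sym \<sigma> (map h w), w) \<in> lfp (dl_step (sort_prog \<sigma> T) X)" using out(3) by blast
    moreover have "\<forall>r \<in> set (rules (sort_prog \<sigma> T)). r \<in> set bad_rules \<or> hd_sym r = 0"
      by (simp add: sort_prog_def sort_rule_def)
    moreover have "(\<sigma>, map h w) \<in> bad_keys" using T tm by (simp add: bad_keys_def out_sorts_def)
    ultimately show False using hom_not_refuted[OF h] by blast
  qed
  then show ?thesis using tm by (simp add: unrefuted_def)
qed

lemma kc_interp_sdom:
  assumes "a \<in> sdom (interp_app kc_ar kc_interp X) c"
  obtains \<sigma> T w where "(\<sigma>, T) \<in> out_sorts" "c = \<mu> (\<sigma>, T)" "a = (c, w)"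
      "w \<in> dl_output (sort_prog \<sigma> T) X"
proof -
  obtain w where w: "a = (c, w)" "w \<in> dl_output (iT kc_interp c) X"
    using assms by (auto simp: interp_app_def)
  then have "c \<in> \<mu> ` out_sorts"
    using iT_kc_interp_other dl_output_no_rules by (fastforce simp: empty_prog_def)
  then show ?thesis using that w iT_kc_interp by auto
qed

lemma kc_interp_srel:
  assumes "tup \<in> srel (interp_app kc_ar kc_interp X) r"
  obtains \<sigma> T \<pi> T' v where "(\<sigma>, T, \<pi>, T') \<in> out_rels" "r = \<rho> (\<sigma>, T, \<pi>, T')"
    "tup = [(\<mu> (\<sigma>, T), map v [0..<length \<sigma>]), (\<mu> (pick \<sigma> \<pi>, T'), map v \<pi>)]"
    "map v [0..<length \<sigma>] \<in> dl_output (sort_prog \<sigma> T) X"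
proof -
  obtain ws where ws: "tup = zip (kc_ar r) ws" "length ws = length (kc_ar r)"
      "\<forall>j < length ws. ws ! j \<in> dl_output (iT kc_interp (kc_ar r ! j)) X"
      "concat ws \<in> dl_output (iR kc_interp r) X"
    using assms by (auto simp: interp_app_def)
  then have "r \<in> \<rho> ` out_rels"
    using iR_kc_interp_other dl_output_no_rules by (fastforce simp: empty_prog_def)
  then obtain \<sigma> T \<pi> T' where v: "(\<sigma>, T, \<pi>, T') \<in> out_rels" "r = \<rho> (\<sigma>, T, \<pi>, T')" by auto
  have vs: "(\<sigma>, T) \<in> out_sorts" using out_rels_out_sorts[OF v(1)] by auto
  have ar: "kc_ar r = [\<mu> (\<sigma>, T), \<mu> (pick \<sigma> \<pi>, T')]" using kc_ar_rho v by simp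
  then obtain w0 w1 where w01: "ws = [w0, w1]" using ws(2) by (auto simp: length_Suc_conv)
  have w0: "w0 \<in> dl_output (sort_prog \<sigma> T) X"
    using ws(3)[rule_format, of 0] w01 ar iT_kc_interp[OF vs] by simp
  have "w0 @ w1 \<in> dl_output (rel_prog \<sigma> T \<pi> T') X" using ws(4) w01 v iR_kc_interp by simp
  then obtain u where "w0 @ w1 = map u [0..<length \<sigma>] @ map u \<pi>" by (rule rel_prog_output)
  moreover have "length w0 = length \<sigma>" using sort_prog_output(1)[OF vs w0] .
  ultimately have u: "w0 = map u [0..<length \<sigma>]" "w1 = map u \<pi>" by auto
  show ?thesis by (rule that[OF v, of u]) (use ws(1) w01 ar w0 u in simp_all)
qed

end

section \<open>Simulating \<open>k\<close>-consistency by a gadget\<close>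

locale kc_construction = kc_datalog arP k A
  for arP :: "'pr::finite \<Rightarrow> 'ps::finite list" and k :: nat and A :: "('ps, 'pr, 'a) struct" +
  fixes arB :: "'br \<Rightarrow> 'bs::finite list" and B :: "('bs, 'br, 'b) struct"
  assumes finite_B: "finite_struct B"
begin

definition part :: "'ps list \<Rightarrow> 'a list set \<Rightarrow> ('bs, 'br, 'bs \<times> ('a list \<Rightarrow> 'b)) struct" where
  "part \<sigma> T = power arB B (unrefuted \<sigma> T)"

definition part_elems :: "('bs \<times> ('a list \<Rightarrow> 'b)) set" where
  "part_elems = (\<Union>p \<in> out_sorts. elems (part (fst p) (snd p)))"

abbreviation "\<epsilon> \<equiv> nat_code part_elems"
abbreviation "\<delta> \<equiv> inv_into part_elems \<epsilon>"

definition pullback ::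
    "'ps list \<Rightarrow> 'a list set \<Rightarrow> nat list \<Rightarrow> 'bs \<times> ('a list \<Rightarrow> 'b) \<Rightarrow> 'bs \<times> ('a list \<Rightarrow> 'b)" where
  "pullback \<sigma> T \<pi> x = (fst x, restrict (\<lambda>g. snd x (pick g \<pi>)) (unrefuted \<sigma> T))"

text \<open>The part for a tuple of sort \<open>(\<sigma>, T)\<close> is the power of \<open>B\<close> by the maps not in \<open>T\<close>, with
  elements coded by natural numbers; a relation part is glued to its first component by the
  identity and to its second one along the pullback.\<close>
definition kc_gadget :: "(nat, nat, 'bs, 'br, nat) gadget" where
  "kc_gadget =
     \<lparr> gD = (\<lambda>c. if c \<in> \<mu> ` out_sorts
                   then emap \<epsilon> (case inv_into out_sorts \<mu> c of (\<sigma>, T) \<Rightarrow> part \<sigma> T)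
                   else empty_struct),
       gR = (\<lambda>r. if r \<in> \<rho> ` out_rels
                   then case inv_into out_rels \<rho> r of (\<sigma>, T, \<pi>, T') \<Rightarrow> emap \<epsilon> (part \<sigma> T)
                   else empty_struct),
       gp = (\<lambda>r j n. if r \<in> \<rho> ` out_rels \<and> j = 1
                   then case inv_into out_rels \<rho> r of (\<sigma>, T, \<pi>, T') \<Rightarrow> \<epsilon> (pullback \<sigma> T \<pi> (\<delta> n))
                   else n) \<rparr>"

lemma finite_elems_B: "finite (elems B)"
  using elems_finite[OF finite_B] .

lemma finite_part_elems: "finite part_elems"
  unfolding part_elems_def part_def
  using finite_out_sorts power_elems_finite[OF finite_unrefuted finite_elems_B] by blast

lemma part_elems_subset: "(\<sigma>, T) \<in> out_sorts \<Longrightarrow> elems (part \<sigma> T) \<subseteq> part_elems"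
  unfolding part_elems_def by force

lemma inj_code: "inj_on \<epsilon> part_elems" using inj_nat_code[OF finite_part_elems] .

lemma gD_kc_gadget: "(\<sigma>, T) \<in> out_sorts \<Longrightarrow> gD kc_gadget (\<mu> (\<sigma>, T)) = emap \<epsilon> (part \<sigma> T)"
  unfolding kc_gadget_def using finite_out_sorts by simp

lemma gD_kc_gadget_other: "c \<notin> \<mu> ` out_sorts \<Longrightarrow> gD kc_gadget c = empty_struct"
  unfolding kc_gadget_def by simp

lemma gR_kc_gadget: "(\<sigma>, T, \<pi>, T') \<in> out_rels \<Longrightarrow> gR kc_gadget (\<rho> (\<sigma>, T, \<pi>, T')) = emap \<epsilon> (part \<sigma> T)"
  unfolding kc_gadget_def using finite_out_rels by simp

lemma gR_kc_gadget_other: "r \<notin> \<rho> ` out_rels \<Longrightarrow> gR kc_gadget r = empty_struct"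
  unfolding kc_gadget_def by simp

lemma gp_kc_gadget_1:
    "(\<sigma>, T, \<pi>, T') \<in> out_rels \<Longrightarrow> gp kc_gadget (\<rho> (\<sigma>, T, \<pi>, T')) 1 n = \<epsilon> (pullback \<sigma> T \<pi> (\<delta> n))"
  unfolding kc_gadget_def using finite_out_rels by simp

lemma gp_kc_gadget_0: "gp kc_gadget r 0 n = n"
  unfolding kc_gadget_def by simp

lemma decode_code: "x \<in> part_elems \<Longrightarrow> \<delta> (\<epsilon> x) = x"
  using inj_code by (simp add: inv_into_f_f)

lemma wf_part_code: 
  assumes vs: "(\<sigma>, T) \<in> out_sorts" shows "wf_struct arB (emap \<epsilon> (part \<sigma> T))"
proof -
  have "inj_on \<epsilon> (elems (power arB B (unrefuted \<sigma> T)))"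
    using inj_on_subset[OF inj_code part_elems_subset[OF vs]] by (simp add: part_def)
  then show ?thesis unfolding part_def by (rule emap_wf[OF power_wf])
qed

lemma wf_empty_struct: "wf_struct ar empty_struct"
  by (simp add: wf_struct_def empty_struct_def)

lemma decode_hom: 
  assumes vs: "(\<sigma>, T) \<in> out_sorts" shows "is_hom (emap \<epsilon> (part \<sigma> T)) (part \<sigma> T) \<delta>"
proof -
  have "elems (power arB B (unrefuted \<sigma> T)) \<subseteq> part_elems" using part_elems_subset[OF vs]
    by (simp add: part_def)
  then show ?thesis unfolding part_def by (rule emap_inv_hom[OF power_wf inj_code])
qed

lemma pullback_hom:
  assumes "(\<sigma>, T, \<pi>, T') \<in> out_rels"
  shows "is_hom (part (pick \<sigma> \<pi>) T') (part \<sigma> T) (pullback \<sigma> T \<pi>)"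
proof -
  have "\<forall>x \<in> set \<pi>. x < length \<sigma>" using assms by (simp add: out_rels_def positions_def)
  then have "\<forall>g \<in> unrefuted \<sigma> T. pick g \<pi> \<in> unrefuted (pick \<sigma> \<pi>) T'"
    using assms pick_tuples by (auto simp: unrefuted_def out_rels_def)
  from power_reindex_hom[OF this] show ?thesis by (simp add: part_def pullback_def[abs_def])
qed

lemma wf_kc_gadget: "wf_gadget kc_ar arB kc_gadget"
  unfolding wf_gadget_def
proof (intro conjI allI impI)
  fix t show "wf_struct arB (gD kc_gadget t)"
  proof (cases "t \<in> \<mu> ` out_sorts")
    case True then obtain \<sigma> T where "(\<sigma>, T) \<in> out_sorts" "t = \<mu> (\<sigma>, T)" by auto
    then show ?thesis using gD_kc_gadget wf_part_code by simp
  qed (simp add: gD_kc_gadget_other wf_empty_struct)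
next
  fix R show "wf_struct arB (gR kc_gadget R)"
  proof (cases "R \<in> \<rho> ` out_rels")
    case True then obtain \<sigma> T \<pi> T' where "(\<sigma>, T, \<pi>, T') \<in> out_rels" "R = \<rho> (\<sigma>, T, \<pi>, T')" by auto
    then show ?thesis using gR_kc_gadget wf_part_code out_rels_out_sorts by simp
  qed (simp add: gR_kc_gadget_other wf_empty_struct)
next
  fix R i assume i: "i < length (kc_ar R)"
  then have "R \<in> \<rho> ` out_rels" using kc_ar_other by fastforce
  then obtain \<sigma> T \<pi> T' where v: "(\<sigma>, T, \<pi>, T') \<in> out_rels" "R = \<rho> (\<sigma>, T, \<pi>, T')" by auto
  have vs: "(\<sigma>, T) \<in> out_sorts" "(pick \<sigma> \<pi>, T') \<in> out_sorts" using out_rels_out_sorts[OF v(1)]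
    by auto
  have "i = 0 \<or> i = 1" using i v kc_ar_rho by auto
  then show "is_hom (gD kc_gadget (kc_ar R ! i)) (gR kc_gadget R) (gp kc_gadget R i)"
  proof
    assume "i = 0"
    have "gp kc_gadget R 0 = id" by (simp add: fun_eq_iff gp_kc_gadget_0)
    then show ?thesis using \<open>i = 0\<close> v vs kc_ar_rho gD_kc_gadget gR_kc_gadget is_hom_id by simp
  next
    assume i1: "i = 1"
    have "is_hom (emap \<epsilon> (part (pick \<sigma> \<pi>) T')) (emap \<epsilon> (part \<sigma> T)) (\<epsilon> \<circ> (pullback \<sigma> T \<pi> \<circ> \<delta>))"
      using is_hom_comp[OF is_hom_comp[OF decode_hom[OF vs(2)] pullback_hom[OF v(1)]] emap_hom] .
    moreover have "gp kc_gadget R 1 = \<epsilon> \<circ> (pullback \<sigma> T \<pi> \<circ> \<delta>)" using v gp_kc_gadget_1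
      by (simp add: fun_eq_iff)
    ultimately show ?thesis using i1 v vs kc_ar_rho gD_kc_gadget gR_kc_gadget by simp
  qed
qed

text \<open>For \<open>h : X \<rightarrow> A\<close>, every part of the gadget output on \<open>X\<close> is mapped to \<open>B\<close> by evaluating at the
  image under \<open>h\<close> of the tuple it is attached to (the first component, for relation parts).\<close>
definition hom_eval ::
    "('x \<Rightarrow> 'a) \<Rightarrow> (nat \<times> nat \<times> 'x list) + (nat \<times> (nat \<times> 'x list) list) \<Rightarrow> nat \<Rightarrow> 'b" where
  "hom_eval h i n = (case i of
      Inl (c, a) \<Rightarrow> snd (\<delta> n) (map h (snd a))
    | Inr (r, tup) \<Rightarrow> snd (\<delta> n) (map h (snd (tup ! 0))))"

lemma eval_part_hom:
  assumes "(\<sigma>, T) \<in> out_sorts" "g \<in> unrefuted \<sigma> T"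
  shows "is_hom (emap \<epsilon> (part \<sigma> T)) B (\<lambda>n. snd (\<delta> n) g)"
proof -
  have "is_hom (emap \<epsilon> (part \<sigma> T)) B ((\<lambda>c. snd c g) \<circ> \<delta>)"
    using is_hom_comp[OF decode_hom[OF assms(1)] power_eval_hom[OF assms(2), of arB B, folded
        part_def]] .
  then show ?thesis by (simp add: o_def)
qed

lemma hom_eval_copy_hom:
  assumes h: "is_hom X A h" and i: "i \<in> gadget_idx (interp_app kc_ar kc_interp X)"
  shows "is_hom (gadget_copy kc_gadget i) B (hom_eval h i)"
proof (cases i)
  case (Inl ca)
  then obtain c a where ca: "i = Inl (c, a)" "a \<in> sdom (interp_app kc_ar kc_interp X) c"
    using i by (auto simp: gadget_idx_def)
  from kc_interp_sdom[OF ca(2)] obtain \<sigma> T w where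
    s: "(\<sigma>, T) \<in> out_sorts" "c = \<mu> (\<sigma>, T)" "a = (c, w)" "w \<in> dl_output (sort_prog \<sigma> T) X" .
  with eval_part_hom[OF s(1) hom_unrefuted[OF h s(1,4)]] show ?thesis
    using ca gD_kc_gadget by (simp add: gadget_copy_def hom_eval_def[abs_def])
next
  case (Inr rt)
  then obtain r tup where rt: "i = Inr (r, tup)" "tup \<in> srel (interp_app kc_ar kc_interp X) r"
    using i by (auto simp: gadget_idx_def)
  from kc_interp_srel[OF rt(2)] obtain \<sigma> T \<pi> T' v where
    s: "(\<sigma>, T, \<pi>, T') \<in> out_rels" "r = \<rho> (\<sigma>, T, \<pi>, T')"
      "tup = [(\<mu> (\<sigma>, T), map v [0..<length \<sigma>]), (\<mu> (pick \<sigma> \<pi>, T'), map v \<pi>)]"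
      "map v [0..<length \<sigma>] \<in> dl_output (sort_prog \<sigma> T) X" .
  have T: "(\<sigma>, T) \<in> out_sorts" using out_rels_out_sorts[OF s(1)] by auto
  with eval_part_hom[OF T hom_unrefuted[OF h T s(4)]] show ?thesis
    using rt s gR_kc_gadget by (simp add: gadget_copy_def hom_eval_def[abs_def])
qed

text \<open>The second component of a relation part is glued along the pullback, and evaluating the
  pullback at \<open>h \<circ> v\<close> is evaluating at \<open>h \<circ> v\<close> restricted to the positions \<open>\<pi>\<close>.\<close>
lemma hom_eval_ident:
  assumes h: "is_hom X A h"
    and tup: "tup \<in> srel (interp_app kc_ar kc_interp X) r" and j: "j < length (kc_ar r)"
    and n: "n \<in> elems (gD kc_gadget (kc_ar r ! j))"
  shows "hom_eval h (Inr (r, tup)) (gp kc_gadget r j n) = hom_eval h (Inl (kc_ar r ! j, tup ! j)) n"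
proof -
  from kc_interp_srel[OF tup] obtain \<sigma> T \<pi> T' v where
    s: "(\<sigma>, T, \<pi>, T') \<in> out_rels" "r = \<rho> (\<sigma>, T, \<pi>, T')"
      "tup = [(\<mu> (\<sigma>, T), map v [0..<length \<sigma>]), (\<mu> (pick \<sigma> \<pi>, T'), map v \<pi>)]"
      "map v [0..<length \<sigma>] \<in> dl_output (sort_prog \<sigma> T) X" .
  have T: "(\<sigma>, T) \<in> out_sorts" "(pick \<sigma> \<pi>, T') \<in> out_sorts" using out_rels_out_sorts[OF s(1)]
    by auto
  have ar: "kc_ar r = [\<mu> (\<sigma>, T), \<mu> (pick \<sigma> \<pi>, T')]" using kc_ar_rho s by simp
  consider "j = 0" | "j = 1" using j ar by fastforce
  then show ?thesis
  proof cases
    case 1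
    then show ?thesis using s by (simp add: hom_eval_def gp_kc_gadget_0)
  next
    case 2
    have "n \<in> elems (emap \<epsilon> (part (pick \<sigma> \<pi>) T'))" using n 2 ar gD_kc_gadget[OF T(2)] by simp
    then obtain z where z: "z \<in> elems (part (pick \<sigma> \<pi>) T')" "n = \<epsilon> z"
      by (auto simp: emap_def elems_def)
    have dz: "\<delta> n = z" using z part_elems_subset[OF T(2)] decode_code by blast
    obtain s0 where "z \<in> sdom (part (pick \<sigma> \<pi>) T') s0" using z(1) by (auto simp: elems_def)
    then have "pullback \<sigma> T \<pi> z \<in> sdom (part \<sigma> T) s0"
      using pullback_hom[OF s(1)] unfolding is_hom_def by blast
    then have "pullback \<sigma> T \<pi> z \<in> part_elems" using part_elems_subset[OF T(1)]
      by (auto simp: elems_def)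
    then have gp1: "\<delta> (gp kc_gadget r 1 n) = pullback \<sigma> T \<pi> z"
      using gp_kc_gadget_1[OF s(1)] s(2) dz decode_code by simp
    have g0: "map h (map v [0..<length \<sigma>]) \<in> unrefuted \<sigma> T" using hom_unrefuted[OF h T(1) s(4)] .
    have "\<forall>x \<in> set \<pi>. x < length \<sigma>" using s(1) by (simp add: out_rels_def positions_def)
    then have "pick (map h (map v [0..<length \<sigma>])) \<pi> = map h (map v \<pi>)" by auto
    then show ?thesis using 2 s(3) gp1 g0 dz by (simp add: hom_eval_def pullback_def del: map_map)
  qed
qed

lemma kc_gadget_hom_of_hom:
  assumes h: "is_hom X A h"
  shows "gadget_app kc_ar kc_gadget (interp_app kc_ar kc_interp X) \<rightarrow>\<^sub>h B"
proof -
  let ?Y = "interp_app kc_ar kc_interp X"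
  have "respects_glue (gadget_idx ?Y) (gadget_copy kc_gadget) (gadget_ident kc_ar kc_gadget ?Y)
      (\<lambda>(i, n). hom_eval h i n)"
    unfolding respects_glue_def
  proof (intro allI impI)
    fix p q assume "(p, q) \<in> gadget_ident kc_ar kc_gadget ?Y"
    then obtain r tup j n where "p = (Inr (r, tup), gp kc_gadget r j n)"
        "q = (Inl (kc_ar r ! j, tup ! j), n)"
      "tup \<in> srel ?Y r" "j < length (kc_ar r)" "n \<in> elems (gD kc_gadget (kc_ar r ! j))"
      unfolding gadget_ident_def by blast
    then show "(\<lambda>(i, n). hom_eval h i n) p = (\<lambda>(i, n). hom_eval h i n) q"
      using hom_eval_ident[OF h] by simp
  qed
  then show ?thesis
    unfolding gadget_app_glue hom_to_def using hom_eval_copy_hom[OF h] by (force intro: glue_hom)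
qed

subsection \<open>\<open>\<kappa>(X)\<close> maps to the gadget output\<close>

lemma refuted_out_sorts: "K \<in> kc_sets k X \<Longrightarrow> (sorts_of X K, refuted X K) \<in> out_sorts"
  using kc_set_distinct_list(3) by (auto simp: out_sorts_def short_sorts_def refuted_def)

lemma finite_refuted: "finite (refuted X K)"
  using finite_tuples by (simp add: refuted_def)

lemma bad_prog_sort_prog: "lfp (dl_step bad_prog X) \<subseteq> lfp (dl_step (sort_prog \<sigma> T) X)"
  by (rule dl_lfp_rules_mono) (auto simp: bad_prog_def sort_prog_def)

lemma bad_prog_rel_prog: "lfp (dl_step bad_prog X) \<subseteq> lfp (dl_step (rel_prog \<sigma> T \<pi> T') X)"
  by (rule dl_lfp_rules_mono) (auto simp: bad_prog_def rel_prog_def)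

lemma distinct_list_sort_output:
  assumes K: "K \<in> kc_sets k X"
  shows "distinct_list K \<in> dl_output (sort_prog (sorts_of X K) (refuted X K)) X"
proof -
  let ?e = "distinct_list K" and ?\<sigma> = "sorts_of X K" and ?T = "refuted X K"
  let ?r = "sort_rule ?\<sigma> ?T"
  have r: "?r \<in> set (rules (sort_prog ?\<sigma> ?T))" by (simp add: sort_prog_def)
  have dom: "\<forall>x \<in> rule_vars ?r. ?e ! x \<in> sdom X (vty ?r x)"
    using kc_set_distinct_list(4)[OF K] by
        (auto simp: rule_vars_def sort_rule_def dest: bad_atoms_vars)
  have body: "\<forall>a \<in> set (body ?r). atom_holds X (lfp (dl_step (sort_prog ?\<sigma> ?T) X)) (nth ?e) a"
  proof
    fix a assume "a \<in> set (body ?r)"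
    then obtain f where f: "f \<in> ?T" "a = Rel (Inr (bad_sym ?\<sigma> f)) [0..<length ?\<sigma>]"
      by (auto simp: sort_rule_def bad_atoms_def finite_refuted)
    then have "(bad_sym ?\<sigma> f, ?e) \<in> lfp (dl_step (sort_prog ?\<sigma> ?T) X)"
      using bad_prog_sort_prog by (auto simp: refuted_def)
    then show "atom_holds X (lfp (dl_step (sort_prog ?\<sigma> ?T) X)) (nth ?e) a"
      using f(2) by (simp add: map_nth)
  qed
  from dl_lfp_rule[OF r dom body] show ?thesis
    by (simp add: sort_rule_def dl_output_def sort_prog_def map_nth)
qed

lemma unrefuted_kc_family:
  assumes "wf_struct arP X" "K \<in> kc_sets k X" "g \<in> unrefuted (sorts_of X K) (refuted X K)"
  shows "assign (distinct_list K) g \<in> kc_family k X A K"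
  using unrefuted_kc_iter[OF assms(1,2)] assms(3) by (simp add: mem_kc_family_iff unrefuted_def)

definition kc_restrict :: "('ps, 'pr, 'x) struct \<Rightarrow> 'x set \<Rightarrow> 'bs \<times> (('x \<Rightarrow> 'a option) \<Rightarrow> 'b)
    \<Rightarrow> 'bs \<times> ('a list \<Rightarrow> 'b)" where
  "kc_restrict X K c =
     (fst c, restrict (\<lambda>g. snd c (assign (distinct_list K) g))
         (unrefuted (sorts_of X K) (refuted X K)))"

lemma kc_restrict_hom:
  assumes "wf_struct arP X" "K \<in> kc_sets k X"
  shows "is_hom (power arB B (kc_family k X A K)) (part (sorts_of X K) (refuted X K))
      (kc_restrict X K)"
proof -
  have "\<forall>g \<in> unrefuted (sorts_of X K) (refuted X K). assign (distinct_list K) g \<in> kc_family k X A K"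
    using unrefuted_kc_family[OF assms] by blast
  from power_reindex_hom[OF this, of arB B] show ?thesis
    by (simp add: part_def kc_restrict_def[abs_def])
qed

lemma projection_out_rels:
  assumes K: "K \<in> kc_sets k X" and L: "L \<in> kc_sets k X" "L \<subseteq> K"
  defines "\<pi> \<equiv> map (index_in (distinct_list K)) (distinct_list L)"
  shows "(sorts_of X K, refuted X K, \<pi>, refuted X L) \<in> out_rels"
proof -
  let ?e = "distinct_list K" and ?\<sigma> = "sorts_of X K"
  note P = kc_subset_pick[OF K L, folded \<pi>_def] and E = kc_set_distinct_list[OF K]
  have pos: "\<pi> \<in> positions ?\<sigma>" using P(2,3) by (simp add: positions_def)
  have closed: "g \<in> refuted X K" if g: "g \<in> tuples ?\<sigma>" "pick g \<pi> \<in> refuted X L" for g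
  proof -
    let ?r = "projection_rule ?\<sigma> g \<pi>"
    have "?\<sigma> \<in> short_sorts" using E(3) by (simp add: short_sorts_def)
    then have r: "?r \<in> set bad_rules" using g(1) pos unfolding set_bad_rules projection_rules_def
      by blast
    have dom: "\<forall>x \<in> rule_vars ?r. ?e ! x \<in> sdom X (vty ?r x)"
      using E(4) P(2) by (auto simp: rule_vars_def projection_rule_def)
    have body: "\<forall>a \<in> set (body ?r). atom_holds X (lfp (dl_step bad_prog X)) (nth ?e) a"
      using g(2) P(1,4) by (simp add: projection_rule_def refuted_def)
    from bad_prog_rule[OF r dom body] show ?thesis
      using g(1) by (simp add: projection_rule_def refuted_def map_nth)
  qed
  have "refuted X L \<subseteq> tuples (pick ?\<sigma> \<pi>)" using P(4) by (auto simp: refuted_def)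
  then show ?thesis using refuted_out_sorts[OF K] pos closed by (simp add: out_rels_def)
qed

lemma projection_rel_output:
  assumes K: "K \<in> kc_sets k X" and L: "L \<in> kc_sets k X" "L \<subseteq> K"
  defines "\<pi> \<equiv> map (index_in (distinct_list K)) (distinct_list L)"
  shows "distinct_list K @ distinct_list L
           \<in> dl_output (rel_prog (sorts_of X K) (refuted X K) \<pi> (refuted X L)) X"
proof -
  let ?e = "distinct_list K" and ?\<sigma> = "sorts_of X K"
  let ?P = "rel_prog ?\<sigma> (refuted X K) \<pi> (refuted X L)" and ?r =
      "rel_rule ?\<sigma> (refuted X K) \<pi> (refuted X L)"
  note P = kc_subset_pick[OF K L, folded \<pi>_def] and E = kc_set_distinct_list[OF K]
  have r: "?r \<in> set (rules ?P)" by (simp add: rel_prog_def)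
  have dom: "\<forall>x \<in> rule_vars ?r. ?e ! x \<in> sdom X (vty ?r x)"
    using E(4) P(2) by (auto simp: rule_vars_def rel_rule_def dest: bad_atoms_vars)
  have body: "\<forall>a \<in> set (body ?r). atom_holds X (lfp (dl_step ?P X)) (nth ?e) a"
  proof
    fix a assume "a \<in> set (body ?r)"
    then consider f where "f \<in> refuted X K" "a = Rel (Inr (bad_sym ?\<sigma> f)) [0..<length ?\<sigma>]"
      | f where "f \<in> refuted X L" "a = Rel (Inr (bad_sym (pick ?\<sigma> \<pi>) f)) \<pi>"
      by (auto simp: rel_rule_def bad_atoms_def finite_refuted)
    then show "atom_holds X (lfp (dl_step ?P X)) (nth ?e) a"
      using bad_prog_rel_prog[THEN subsetD] P(1,4) by cases (auto simp: refuted_def map_nth)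
  qed
  from dl_lfp_rule[OF r dom body] show ?thesis
    using P(1) by (simp add: rel_rule_def dl_output_def rel_prog_def map_nth)
qed

lemma projection_srel:
  assumes K: "K \<in> kc_sets k X" and L: "L \<in> kc_sets k X" "L \<subseteq> K"
  defines "\<pi> \<equiv> map (index_in (distinct_list K)) (distinct_list L)"
  shows "[(\<mu> (sorts_of X K, refuted X K), distinct_list K),
      (\<mu> (sorts_of X L, refuted X L), distinct_list L)]
      \<in> srel (interp_app kc_ar kc_interp X) (\<rho> (sorts_of X K, refuted X K, \<pi>, refuted X L))"
proof -
  have R: "(sorts_of X K, refuted X K, \<pi>, refuted X L) \<in> out_rels"
    unfolding \<pi>_def by (rule projection_out_rels[OF K L])
  have ar: "kc_ar (\<rho> (sorts_of X K, refuted X K, \<pi>, refuted X L))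
      = [\<mu> (sorts_of X K, refuted X K), \<mu> (sorts_of X L, refuted X L)]"
    using kc_ar_rho[OF R] kc_subset_pick(4)[OF K L] by (simp add: \<pi>_def)
  have "distinct_list K \<in> dl_output (iT kc_interp (\<mu> (sorts_of X K, refuted X K))) X"
    by (simp add: iT_kc_interp[OF refuted_out_sorts[OF K]] distinct_list_sort_output[OF K])
  moreover have "distinct_list L \<in> dl_output (iT kc_interp (\<mu> (sorts_of X L, refuted X L))) X"
    by (simp add: iT_kc_interp[OF refuted_out_sorts[OF L(1)]] distinct_list_sort_output[OF L(1)])
  moreover have "distinct_list K
      @ distinct_list L \<in> dl_output (iR kc_interp (\<rho> (sorts_of X K, refuted X K, \<pi>, refuted X L)))
          X"
    using projection_rel_output[OF K L] iR_kc_interp[OF R] by (simp add: \<pi>_def)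
  ultimately show ?thesis using ar
    by (auto simp: interp_app_def less_Suc_eq intro!: exI[of _
        "[distinct_list K, distinct_list L]"])
qed

lemma kc_restrict_pullback:
  assumes X: "wf_struct arP X" and K: "K \<in> kc_sets k X" and L: "L \<in> kc_sets k X" "L \<subseteq> K"
  defines "\<pi> \<equiv> map (index_in (distinct_list K)) (distinct_list L)"
  shows "pullback (sorts_of X K) (refuted X K) \<pi> (kc_restrict X L (t, b))
    = kc_restrict X K (t, restrict (\<lambda>g. b (g |` L)) (kc_family k X A K))"
proof -
  let ?e = "distinct_list K" and ?\<sigma> = "sorts_of X K"
  have R: "(?\<sigma>, refuted X K, \<pi>, refuted X L) \<in> out_rels"
    unfolding \<pi>_def by (rule projection_out_rels[OF K L])
  note P = kc_subset_pick[OF K L, folded \<pi>_def]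
  have "b (assign (distinct_list L) (pick g \<pi>)) = b (assign ?e g |` L)"
    if g: "g \<in> unrefuted ?\<sigma> (refuted X K)" for g
  proof -
    have lg: "length g = length ?e" using g by (simp add: unrefuted_def tuples_def)
    show ?thesis
      using assign_restrict[OF kc_set_distinct_list(2)[OF K] lg kc_set_distinct_list(2)[OF L(1)]]
        kc_set_distinct_list(1)[OF K] kc_set_distinct_list(1)[OF L(1)] L(2)
      by (simp add: \<pi>_def)
  qed
  moreover have "pick g \<pi> \<in> unrefuted (sorts_of X L) (refuted X L)" if
      "g \<in> unrefuted ?\<sigma> (refuted X K)" for g
  proof -
    have "g \<in> tuples ?\<sigma>" "g \<notin> refuted X K" using that by (auto simp: unrefuted_def)
    moreover from this(1) have "pick g \<pi> \<in> tuples (sorts_of X L)"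
      using pick_tuples[of g ?\<sigma> \<pi>] P(2,4) by simp
    ultimately show ?thesis using R by (auto simp: unrefuted_def out_rels_def)
  qed
  ultimately show ?thesis
    using unrefuted_kc_family[OF X K]
    by (auto simp: pullback_def kc_restrict_def intro!: restrict_ext)
qed

definition kc_idx ::
    "('ps, 'pr, 'x) struct \<Rightarrow> 'x set \<Rightarrow> (nat \<times> nat \<times> 'x list) + (nat \<times> (nat \<times> 'x list) list)" where
  "kc_idx X K = Inl
      (\<mu> (sorts_of X K, refuted X K), (\<mu> (sorts_of X K, refuted X K), distinct_list K))"

lemma kc_idx_gadget_idx: "K \<in> kc_sets k X \<Longrightarrow> kc_idx X K \<in> gadget_idx (interp_app kc_ar kc_interp X)"
  using distinct_list_sort_output iT_kc_interp[OF refuted_out_sorts]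
  by (fastforce simp: kc_idx_def gadget_idx_def interp_app_def)

lemma gadget_copy_kc_idx:
  "K \<in> kc_sets k X
      \<Longrightarrow> gadget_copy kc_gadget (kc_idx X K) = emap \<epsilon> (part (sorts_of X K) (refuted X K))"
  using gD_kc_gadget[OF refuted_out_sorts] by (simp add: kc_idx_def gadget_copy_def)

abbreviation "cls_\<gamma> X \<equiv> glue_class (gadget_idx (interp_app kc_ar kc_interp X))
    (gadget_copy kc_gadget)
  (gadget_ident kc_ar kc_gadget (interp_app kc_ar kc_interp X))"

lemma kappa_copy_hom:
  assumes X: "wf_struct arP X" and K: "K \<in> kc_sets k X"
  shows "is_hom (power arB B (kc_family k X A K))
      (gadget_app kc_ar kc_gadget (interp_app kc_ar kc_interp X))
    (\<lambda>c. cls_\<gamma> X (kc_idx X K, \<epsilon> (kc_restrict X K c)))"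
proof -
  have "is_hom (power arB B (kc_family k X A K)) (emap \<epsilon> (part (sorts_of X K) (refuted X K)))
      (\<epsilon> \<circ> kc_restrict X K)"
    by (rule is_hom_comp[OF kc_restrict_hom[OF X K] emap_hom])
  moreover have "is_hom (emap \<epsilon> (part (sorts_of X K) (refuted X K)))
      (gadget_app kc_ar kc_gadget (interp_app kc_ar kc_interp X))
      (\<lambda>d. cls_\<gamma> X (kc_idx X K, d))"
    using glue_copy_hom[OF kc_idx_gadget_idx[OF K], of "gadget_copy kc_gadget"
        "gadget_ident kc_ar kc_gadget (interp_app kc_ar kc_interp X)"]
    unfolding gadget_app_glue gadget_copy_kc_idx[OF K] .
  ultimately show ?thesis by (auto dest: is_hom_comp simp: comp_def)
qed

lemma kc_restrict_elems:
  assumes X: "wf_struct arP X" and K: "K \<in> kc_sets k X"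
    and c: "c \<in> sdom (power arB B (kc_family k X A K)) t"
  shows "\<epsilon> (kc_restrict X K c) \<in> elems (gD kc_gadget (\<mu> (sorts_of X K, refuted X K)))"
    "kc_restrict X K c \<in> part_elems"
proof -
  have "kc_restrict X K c \<in> sdom (part (sorts_of X K) (refuted X K)) t"
    using kc_restrict_hom[OF X K] c unfolding is_hom_def by blast
  then show "\<epsilon> (kc_restrict X K c) \<in> elems (gD kc_gadget (\<mu> (sorts_of X K, refuted X K)))"
    "kc_restrict X K c \<in> part_elems"
    using gD_kc_gadget[OF refuted_out_sorts[OF K]] part_elems_subset[OF refuted_out_sorts[OF K]]
    by (auto simp: emap_def elems_def)
qed

text \<open>The copies for \<open>L \<subseteq> K\<close> are glued by \<open>\<kappa>\<close> along restriction and by the gadget through the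
  relation part for the projection of \<open>K\<close> onto \<open>L\<close>; both identifications agree.\<close>
lemma kappa_ident:
  assumes X: "wf_struct arP X" and K: "K \<in> kc_sets k X" and L: "L \<in> kc_sets k X" "L \<subseteq> K"
    and b: "b \<in> kc_family k X A L \<rightarrow>\<^sub>E sdom B t"
  shows "cls_\<gamma> X
      (kc_idx X K, \<epsilon> (kc_restrict X K (t, restrict (\<lambda>g. b (g |` L)) (kc_family k X A K))))
    = cls_\<gamma> X (kc_idx X L, \<epsilon> (kc_restrict X L (t, b)))"
proof -
  let ?Y = "interp_app kc_ar kc_interp X"
  let ?\<sigma> = "sorts_of X K" and ?T = "refuted X K" and ?\<sigma>L = "sorts_of X L" and ?TL = "refuted X L"
  define \<pi> where "\<pi> = map (index_in (distinct_list K)) (distinct_list L)"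
  define r where "r = \<rho> (?\<sigma>, ?T, \<pi>, ?TL)"
  define tup where "tup = [(\<mu> (?\<sigma>, ?T), distinct_list K), (\<mu> (?\<sigma>L, ?TL), distinct_list L)]"
  define x where "x = kc_restrict X K (t, restrict (\<lambda>g. b (g |` L)) (kc_family k X A K))"
  define y where "y = kc_restrict X L (t, b)"
  have R: "(?\<sigma>, ?T, \<pi>, ?TL) \<in> out_rels" unfolding \<pi>_def by (rule projection_out_rels[OF K L])
  have T: "(?\<sigma>, ?T) \<in> out_sorts" "(?\<sigma>L, ?TL) \<in> out_sorts" using refuted_out_sorts K L by auto
  have tup: "tup \<in> srel ?Y r" unfolding tup_def r_def \<pi>_def by (rule projection_srel[OF K L])
  have ar: "kc_ar r = [\<mu> (?\<sigma>, ?T), \<mu> (?\<sigma>L, ?TL)]"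
    using kc_ar_rho[OF R] kc_subset_pick(4)[OF K L] by (simp add: r_def \<pi>_def)
  have "restrict (\<lambda>g. b (g |` L)) (kc_family k X A K) \<in> kc_family k X A K \<rightarrow>\<^sub>E sdom B t"
    using b kc_family_restrict[OF _ L] by (auto simp: PiE_iff)
  then have x: "\<epsilon> x \<in> elems (gD kc_gadget (kc_ar r ! 0))"
    using kc_restrict_elems(1)[OF X K] ar by (simp add: x_def power_def)
  have y: "\<epsilon> y \<in> elems (gD kc_gadget (kc_ar r ! 1))" "y \<in> part_elems"
    using kc_restrict_elems[OF X L(1)] ar b by (simp_all add: y_def power_def)
  then have gp1: "gp kc_gadget r 1 (\<epsilon> y) = \<epsilon> x"
    using gp_kc_gadget_1[OF R] decode_code kc_restrict_pullback[OF X K L]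
    by (simp add: r_def x_def y_def \<pi>_def)
  have copy: "gadget_copy kc_gadget (Inr (r, tup)) = gD kc_gadget (kc_ar r ! 0)"
    "gadget_copy kc_gadget (kc_idx X K) = gD kc_gadget (kc_ar r ! 0)"
    "gadget_copy kc_gadget (kc_idx X L) = gD kc_gadget (kc_ar r ! 1)"
    using gR_kc_gadget[OF R] gD_kc_gadget[OF T(1)] gD_kc_gadget[OF T(2)] ar
      gadget_copy_kc_idx[OF K] gadget_copy_kc_idx[OF L(1)]
    by (simp_all add: gadget_copy_def r_def)
  have pre: "(Inr (r, tup), \<epsilon> x) \<in> glue_pre (gadget_idx ?Y) (gadget_copy kc_gadget)"
    "(kc_idx X K, \<epsilon> x) \<in> glue_pre (gadget_idx ?Y) (gadget_copy kc_gadget)"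
    "(kc_idx X L, \<epsilon> y) \<in> glue_pre (gadget_idx ?Y) (gadget_copy kc_gadget)"
    using tup kc_idx_gadget_idx[OF K] kc_idx_gadget_idx[OF L(1)] x y copy
    by (simp_all add: glue_pre_def gadget_idx_def)
  have i0: "Inl (kc_ar r ! 0, tup ! 0) = kc_idx X K" and i1:
      "Inl (kc_ar r ! 1, tup ! 1) = kc_idx X L"
    using ar by (simp_all add: tup_def kc_idx_def)
  have "0 < length (kc_ar r)" "1 < length (kc_ar r)" using ar by simp_all
  then have "((Inr (r, tup), gp kc_gadget r 0 (\<epsilon> x)), (Inl (kc_ar r ! 0, tup ! 0), \<epsilon> x))
      \<in> gadget_ident kc_ar kc_gadget ?Y"
    "((Inr (r, tup), gp kc_gadget r 1 (\<epsilon> y)), (Inl (kc_ar r ! 1, tup ! 1), \<epsilon> y))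
      \<in> gadget_ident kc_ar kc_gadget ?Y"
    unfolding gadget_ident_def using tup x y by blast+
  then have "((Inr (r, tup), \<epsilon> x), (kc_idx X K, \<epsilon> x)) \<in> gadget_ident kc_ar kc_gadget ?Y"
    "((Inr (r, tup), \<epsilon> x), (kc_idx X L, \<epsilon> y)) \<in> gadget_ident kc_ar kc_gadget ?Y"
    by (simp_all only: gp_kc_gadget_0 gp1 i0 i1)
  then have "cls_\<gamma> X (kc_idx X K, \<epsilon> x) = cls_\<gamma> X (Inr (r, tup), \<epsilon> x)"
    "cls_\<gamma> X (Inr (r, tup), \<epsilon> x) = cls_\<gamma> X (kc_idx X L, \<epsilon> y)"
    using glue_class_eq pre by metis+
  then show ?thesis by (simp add: x_def y_def)
qed

lemma kappa_hom_kc_gadget: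
  assumes X: "wf_struct arP X"
  shows "kappa arP arB k A B X \<rightarrow>\<^sub>h gadget_app kc_ar kc_gadget (interp_app kc_ar kc_interp X)"
proof -
  let ?F = "kc_family k X A"
  let ?m = "\<lambda>(K, c). cls_\<gamma> X (kc_idx X K, \<epsilon> (kc_restrict X K c))"
  have "respects_glue (kc_sets k X) (\<lambda>K. power arB B (?F K)) (kc_ident k X B ?F) ?m"
    unfolding respects_glue_def
  proof (intro allI impI)
    fix p q assume "(p, q) \<in> kc_ident k X B ?F"
    then obtain K L t b where "p = (K, (t, restrict (\<lambda>g. b (g |` L)) (?F K)))" "q = (L, (t, b))"
      "K \<in> kc_sets k X" "L \<in> kc_sets k X" "L \<subseteq> K" "b \<in> ?F L \<rightarrow>\<^sub>E sdom B t"
      unfolding kc_ident_def by blast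
    then show "?m p = ?m q" using kappa_ident[OF X] by simp
  qed
  then show ?thesis
    unfolding kappa_glue hom_to_def using kappa_copy_hom[OF X] by (force intro: glue_hom)
qed

lemma pcsp_reduction_gadget_of_kappa:
  assumes "pcsp_reduction arP A A' B B' (kappa arP arB k A B)"
  shows "pcsp_reduction arP A A' B B'
      (\<lambda>X. gadget_app kc_ar kc_gadget (interp_app kc_ar kc_interp X))"
  unfolding pcsp_reduction_def
proof (intro allI impI conjI)
  fix X :: "('ps, 'pr, nat) struct" assume X: "wf_struct arP X \<and> finite_struct X"
  show "X \<rightarrow>\<^sub>h A \<Longrightarrow> gadget_app kc_ar kc_gadget (interp_app kc_ar kc_interp X) \<rightarrow>\<^sub>h B"
    unfolding hom_to_def[of X A] using kc_gadget_hom_of_hom by blast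
  assume "gadget_app kc_ar kc_gadget (interp_app kc_ar kc_interp X) \<rightarrow>\<^sub>h B'"
  with kappa_hom_kc_gadget have "kappa arP arB k A B X \<rightarrow>\<^sub>h B'"
    using X hom_to_trans by blast
  then show "X \<rightarrow>\<^sub>h A'" using assms X unfolding pcsp_reduction_def by blast
qed

end

theorem mainTheorem6:
  fixes arP :: "'pr::finite \<Rightarrow> 'ps::finite list"
    and arB :: "'br::finite \<Rightarrow> 'bs::finite list"
    and A :: "('ps, 'pr, 'a) struct" and A' :: "('ps, 'pr, 'a2) struct"
    and B :: "('bs, 'br, 'b) struct" and B' :: "('bs, 'br, 'b2) struct"
    and k :: nat
  assumes "k \<ge> 1"
    and "promise_template arP A A'"
    and "promise_template arB B B'"
  shows "(\<exists>(arS :: nat \<Rightarrow> nat list) (\<phi> :: ('ps, 'pr, nat, nat) interp)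
             (\<gamma> :: (nat, nat, 'bs, 'br, nat) gadget).
            wf_interp arP arS \<phi> \<and> interp_finite_sig arS \<phi> \<and> interp_width_le \<phi> k \<and>
            wf_gadget arS arB \<gamma> \<and>
            pcsp_reduction arP A A' B B' (\<lambda>X. gadget_app arS \<gamma> (interp_app arS \<phi> X)))
         \<longleftrightarrow> pcsp_reduction arP A A' B B' (kappa arP arB k A B)"
proof -
  interpret kc_construction arP k A arB B
    using assms(2,3) by unfold_locales (auto simp: promise_template_def)
  show ?thesis
    using pcsp_reduction_kappa_of_gadget[OF assms(2)] pcsp_reduction_gadget_of_kappa
      wf_kc_interp kc_interp_finite_sig kc_interp_width wf_kc_gadget by blast
qed

end
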